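(* Let $\lambda<1$ and let $X$ be a $d$-uniform $\lambda$-TD complex. Then for every $0\le k\le d$, every $\nu>0$, every $\nu$-Lipschitz function $f:X(k)\to\mathbb{R}$ and every $t>0$: \[\Pr[f-\mathbb{E}[f]\ge t]\le 2e^{-\frac{t}{\sqrt{c_\lambda\nu}}}\quad\text{and}\quad \Pr[f-\mathbb{E}[f]\le -t]\le 2e^{-\frac{t}{\sqrt{c_\lambda\nu}}},\] where $c_\lambda\le 1+e^{\frac{\lambda}{1-\lambda}}$; probabilities and expectations are over $\pi_k$.
   Context: A $d$-uniform simplicial complex $X$ is a finite downward-closed set family with maximal sets of size $d$, $X(j)$ its faces of size $j$, with a full-support distribution $\pi_d$ on $X(d)$ inducing $\pi_j$ on $X(j)$ (draw from $\pi_d$ and take a uniform $j$-subset). The link of a face $s$ is $X_s=\{t\setminus s:s\subseteq t\in X\}$ with induced distribution; its underlying graph has vertices $X_s(1)$ and weighted edges $X_s(2)$. A graph is a $\lambda$-one-sided expander if the second largest eigenvalue of its normalized adjacency operator is at most $\lambda$. $X$ is $\lambda$-TD (trickling-down) if it is connected (the graph underlying every link $X_s$, $|s|\le d-2$, including $X$ itself, is connected) and for every $s\in X(d-2)$ the graph underlying $X_s$ is a $\frac{\lambda}{d-1}$-one-sided expander. Lipschitz: order the vertices of every face arbitrarily. For $x=(x_1,\dots,x_k)\sim\pi_k$ let $Z=f(x)$, and for each $i$ let $Z'_{(i)}=f(x_1,\dots,z_i,\dots,x_k)$ where $z_i$ is sampled from the vertex distribution of the link of $x_{-i}=x\setminus\{x_i\}$.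 $f$ is $\nu$-Lipschitz if with probability $1$, $\sum_{i=1}^k (Z-Z'_{(i)})_+^2\le\nu$, where $(z)_+=\max\{z,0\}$. *)

theory Defs
  imports Complex_Main
begin

definition pure_complex :: "'a set set \<Rightarrow> nat \<Rightarrow> bool" where
  "pure_complex X d \<longleftrightarrow> finite X \<and> X \<noteq> {} \<and> (\<forall>s\<in>X. finite s)
     \<and> (\<forall>s\<in>X. \<forall>t. t \<subseteq> s \<longrightarrow> t \<in> X)
     \<and> (\<forall>s\<in>X. card s \<le> d)
     \<and> (\<forall>s\<in>X. \<exists>t\<in>X. s \<subseteq> t \<and> card t = d)"

definition faces :: "'a set set \<Rightarrow> nat \<Rightarrow> 'a set set" where
  "faces X j = {s\<in>X. card s = j}"

definition top_distribution :: "'a set set \<Rightarrow> nat \<Rightarrow> ('a set \<Rightarrow> real) \<Rightarrow> bool" where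
  "top_distribution X d w \<longleftrightarrow> (\<forall>t\<in>faces X d. w t > 0) \<and> (\<Sum>t\<in>faces X d. w t) = 1"

text \<open>pi_j: draw t from pi_d and take a uniform j-subset of t.\<close>
definition pi_k :: "'a set set \<Rightarrow> nat \<Rightarrow> ('a set \<Rightarrow> real) \<Rightarrow> nat \<Rightarrow> 'a set \<Rightarrow> real" where
  "pi_k X d w j s = (if card s = j
     then (\<Sum>t\<in>faces X d. if s \<subseteq> t then w t else 0) / real (d choose j) else 0)"

text \<open>Distribution pi^{X_s}_j on the j-faces u of the link X_s (u disjoint from s):
the link is (d - |s|)-uniform with top distribution proportional to pi_d(s \<union> u'),
and pi^{X_s}_j is induced by taking a uniform j-subset.\<close>
definition link_pi :: "'a set set \<Rightarrow> nat \<Rightarrow> ('a set \<Rightarrow> real) \<Rightarrow> 'a set \<Rightarrow> nat \<Rightarrow> 'a set \<Rightarrow> real" where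
  "link_pi X d w s j u = (if u \<inter> s = {} \<and> card u = j
     then (\<Sum>t\<in>faces X d. if s \<union> u \<subseteq> t then w t else 0)
          / ((\<Sum>t\<in>faces X d. if s \<subseteq> t then w t else 0) * real ((d - card s) choose j))
     else 0)"

definition link_vertices :: "'a set set \<Rightarrow> 'a set \<Rightarrow> 'a set" where
  "link_vertices X s = {u. u \<notin> s \<and> insert u s \<in> X}"

definition link_edge :: "'a set set \<Rightarrow> 'a set \<Rightarrow> 'a \<Rightarrow> 'a \<Rightarrow> bool" where
  "link_edge X s u v \<longleftrightarrow> u \<noteq> v \<and> u \<notin> s \<and> v \<notin> s \<and> insert u (insert v s) \<in> X"

definition link_weight :: "'a set set \<Rightarrow> nat \<Rightarrow> ('a set \<Rightarrow> real) \<Rightarrow> 'a set \<Rightarrow> 'a \<Rightarrow> 'a \<Rightarrow> real" where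
  "link_weight X d w s u v = (if u \<noteq> v then link_pi X d w s 2 {u, v} else 0)"

definition graph_connected :: "'a set \<Rightarrow> ('a \<Rightarrow> 'a \<Rightarrow> bool) \<Rightarrow> bool" where
  "graph_connected V E \<longleftrightarrow> (\<forall>u\<in>V. \<forall>v\<in>V. (\<lambda>a b. a \<in> V \<and> b \<in> V \<and> E a b)\<^sup>*\<^sup>* u v)"

definition norm_adj :: "'a set \<Rightarrow> ('a \<Rightarrow> 'a \<Rightarrow> real) \<Rightarrow> 'a \<Rightarrow> 'a \<Rightarrow> real" where
  "norm_adj V W u v = W u v / (\<Sum>v'\<in>V. W u v')"

definition is_eigenpair :: "'a set \<Rightarrow> ('a \<Rightarrow> 'a \<Rightarrow> real) \<Rightarrow> real \<Rightarrow> ('a \<Rightarrow> real) \<Rightarrow> bool" where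
  "is_eigenpair V A \<mu> g \<longleftrightarrow> (\<exists>v\<in>V. g v \<noteq> 0) \<and> (\<forall>u\<in>V. (\<Sum>v\<in>V. A u v * g v) = \<mu> * g u)"

text \<open>lambda-one-sided expander: the second largest eigenvalue (with multiplicity) of the
normalized adjacency operator is at most lambda, i.e. the eigenvectors with eigenvalue
greater than lambda span a space of dimension at most 1.  (The operator is self-adjoint
w.r.t. the stationary measure, hence diagonalizable with real eigenvalues/eigenvectors.)\<close>
definition one_sided_expander :: "'a set \<Rightarrow> ('a \<Rightarrow> 'a \<Rightarrow> real) \<Rightarrow> real \<Rightarrow> bool" where
  "one_sided_expander V W lam \<longleftrightarrow>
     (\<forall>\<mu>1 \<mu>2 g1 g2. is_eigenpair V (norm_adj V W) \<mu>1 g1 \<and> is_eigenpair V (norm_adj V W) \<mu>2 g2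
        \<and> \<mu>1 > lam \<and> \<mu>2 > lam
        \<longrightarrow> (\<exists>a b. (a \<noteq> 0 \<or> b \<noteq> 0) \<and> (\<forall>v\<in>V. a * g1 v + b * g2 v = 0)))"

definition is_TD :: "'a set set \<Rightarrow> nat \<Rightarrow> ('a set \<Rightarrow> real) \<Rightarrow> real \<Rightarrow> bool" where
  "is_TD X d w lam \<longleftrightarrow>
     (\<forall>s\<in>X. card s + 2 \<le> d \<longrightarrow> graph_connected (link_vertices X s) (link_edge X s))
   \<and> (\<forall>s\<in>X. card s + 2 = d \<longrightarrow>
        one_sided_expander (link_vertices X s) (link_weight X d w s) (lam / real (d - 1)))"

text \<open>nu-Lipschitz: almost surely over x ~ pi_k and z_i ~ vertex distribution of the link of
x minus x_i, the sum over i of (f(x) - f(x with x_i replaced by z_i))_+^2 is at most nu.\<close>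
definition lipschitz :: "'a set set \<Rightarrow> nat \<Rightarrow> ('a set \<Rightarrow> real) \<Rightarrow> nat \<Rightarrow> ('a set \<Rightarrow> real) \<Rightarrow> real \<Rightarrow> bool" where
  "lipschitz X d w k f \<nu> \<longleftrightarrow>
     (\<forall>s\<in>faces X k. pi_k X d w k s > 0 \<longrightarrow>
        (\<forall>z :: 'a \<Rightarrow> 'a. (\<forall>v\<in>s. link_pi X d w (s - {v}) 1 {z v} > 0) \<longrightarrow>
          (\<Sum>v\<in>s. (max (f s - f (insert (z v) (s - {v}))) 0)\<^sup>2) \<le> \<nu>))"

definition expect_k :: "'a set set \<Rightarrow> nat \<Rightarrow> ('a set \<Rightarrow> real) \<Rightarrow> nat \<Rightarrow> ('a set \<Rightarrow> real) \<Rightarrow> real" where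
  "expect_k X d w k f = (\<Sum>s\<in>faces X k. pi_k X d w k s * f s)"

definition prob_k :: "'a set set \<Rightarrow> nat \<Rightarrow> ('a set \<Rightarrow> real) \<Rightarrow> nat \<Rightarrow> ('a set \<Rightarrow> bool) \<Rightarrow> real" where
  "prob_k X d w k P = (\<Sum>s\<in>{s\<in>faces X k. P s}. pi_k X d w k s)"

end

theory Submission
  imports Defs "HOL-Analysis.Analysis"
begin

text \<open>
  Trickling down (Oppenheim): if the links of all faces of size i + 1 are \<mu>-expanders and the
  link of a face s of size i is connected, then that link is a \<mu>/(1 - \<mu>)-expander; starting
  from the (\<lambda>/(d-1))-expanding top links, every link of a face of size i is a
  \<lambda>/(d - 1 - (d - 2 - i)\<lambda>)-expander.  Garland's method turns these local bounds into a
  Poincare inequality on X(k), (1 - max \<lambda> 0) Var g \<le> D g, where D g is the expected sum of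
  squared positive increments of g when one vertex of a random face is resampled from its link
  -- the quantity controlled by the Lipschitz condition.

  For g = exp(\<theta> f / 2) this gives Var(e^(\<theta> f/2)) \<le> \<theta>^2 \<nu> / (4 (1 - max \<lambda> 0)) E e^(\<theta> f), and
  Herbst's argument (comparing \<theta> with \<theta>/2 repeatedly) bounds E e^(\<theta> (f - E f)) by 2 at
  \<theta> = 1/sqrt(c \<nu>); Markov's inequality gives the upper tail.  For the lower tail only the
  positive increments of f are controlled, so the increments of e^(-\<theta> f/2) are bounded via
  e^u - 1 \<le> u (1 + u/2 + ...), using that a single increment of f is at most sqrt \<nu>.
\<close>

section \<open>The mass of a face and double counting\<close>

lemma binomial_Suc_mult: "real (n choose j) * real (n - j) = real (n choose Suc j) * real (Suc j)"
proof -
  have "(n choose Suc j) * Suc j = (n choose j) * (n - j)"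
    by (metis binomial_absorb_comp binomial_absorption mult.commute diff_Suc_1 binomial_symmetric)
  then show ?thesis by (metis of_nat_mult)
qed

locale weighted_complex =
  fixes X :: "'a set set" and d :: nat and w :: "'a set \<Rightarrow> real"
  assumes pure: "pure_complex X d" and top_distribution: "top_distribution X d w"
begin

definition mass :: "'a set \<Rightarrow> real" where
  "mass s = (\<Sum>t\<in>faces X d. if s \<subseteq> t then w t else 0)"

definition vertices :: "'a set" where
  "vertices = \<Union>X"

lemma finite_complex: "finite X"
  using pure unfolding pure_complex_def by auto

lemma finite_face: "s \<in> X \<Longrightarrow> finite s"
  using pure unfolding pure_complex_def by auto

lemma face_subset: "s \<in> X \<Longrightarrow> t \<subseteq> s \<Longrightarrow> t \<in> X"
  using pure unfolding pure_complex_def by auto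

lemma card_face_le: "s \<in> X \<Longrightarrow> card s \<le> d"
  using pure unfolding pure_complex_def by auto

lemma face_extends_to_top: "s \<in> X \<Longrightarrow> \<exists>t\<in>X. s \<subseteq> t \<and> card t = d"
  using pure unfolding pure_complex_def by auto

lemma empty_face: "{} \<in> X"
  using pure face_subset unfolding pure_complex_def by (metis empty_subsetI ex_in_conv)

lemma finite_vertices: "finite vertices"
  unfolding vertices_def using finite_complex finite_face by auto

lemma face_subset_vertices: "s \<in> X \<Longrightarrow> s \<subseteq> vertices"
  unfolding vertices_def by auto

lemma finite_faces: "finite (faces X j)"
  unfolding faces_def using finite_complex by auto

lemma top_weight_pos: "t \<in> faces X d \<Longrightarrow> w t > 0"
  using top_distribution unfolding top_distribution_def by auto

lemma top_weight_sum: "(\<Sum>t\<in>faces X d. w t) = 1"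
  using top_distribution unfolding top_distribution_def by auto

lemma mass_nonneg: "mass s \<ge> 0"
  unfolding mass_def by (rule sum_nonneg) (auto simp: less_imp_le top_weight_pos)

lemma mass_nonface: "s \<notin> X \<Longrightarrow> mass s = 0"
  unfolding mass_def faces_def
  by (rule sum.neutral) (auto dest: face_subset)

lemma mass_pos: assumes "s \<in> X" shows "mass s > 0"
proof -
  obtain t where t: "t \<in> X" "s \<subseteq> t" "card t = d" using face_extends_to_top[OF assms] by blast
  have tT: "t \<in> faces X d" using t unfolding faces_def by auto
  have "0 < (if s \<subseteq> t then w t else 0)" using t top_weight_pos[OF tT] by auto
  also have "\<dots> \<le> mass s" unfolding mass_def
    by (rule member_le_sum) (auto simp: tT finite_faces less_imp_le top_weight_pos)
  finally show ?thesis .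
qed

lemma mass_empty: "mass {} = 1" unfolding mass_def using top_weight_sum by simp

lemma faces_0: "faces X 0 = {{}}"
  unfolding faces_def using empty_face finite_face by auto

lemma sum_mass_insert: "(\<Sum>z\<in>vertices - y. mass (insert z y)) = real (d - card y) * mass y"
proof -
  have "(\<Sum>z\<in>vertices - y. mass (insert z y)) = (\<Sum>z\<in>vertices - y. \<Sum>t\<in>faces X d. if insert z y \<subseteq> t then w t else 0)"
    unfolding mass_def by simp
  also have "\<dots> = (\<Sum>t\<in>faces X d. \<Sum>z\<in>vertices - y. if insert z y \<subseteq> t then w t else 0)"
    by (rule sum.swap)
  also have "\<dots> = (\<Sum>t\<in>faces X d. if y \<subseteq> t then real (d - card y) * w t else 0)"
  proof (rule sum.cong[OF refl])
    fix t assume tT: "t \<in> faces X d"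
    then have tX: "t \<in> X" and ct: "card t = d" unfolding faces_def by auto
    have ft: "finite t" using finite_face[OF tX] .
    show "(\<Sum>z\<in>vertices - y. if insert z y \<subseteq> t then w t else 0) = (if y \<subseteq> t then real (d - card y) * w t else 0)"
    proof (cases "y \<subseteq> t")
      case True
      have "(\<Sum>z\<in>vertices - y. if insert z y \<subseteq> t then w t else 0) = (\<Sum>z\<in>(vertices - y) \<inter> t. w t)"
        using True by (subst sum.inter_restrict[OF]) (auto simp: finite_vertices intro!: sum.cong)
      also have "(vertices - y) \<inter> t = t - y" using face_subset_vertices[OF tX] by auto
      also have "(\<Sum>z\<in>t - y. w t) = real (card (t - y)) * w t" by simp
      also have "card (t - y) = d - card y" using True ft ct by (simp add: card_Diff_subset finite_subset)
      finally show ?thesis using True by simp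
    next
      case False
      then show ?thesis by (auto intro!: sum.neutral)
    qed
  qed
  also have "\<dots> = real (d - card y) * mass y"
    unfolding mass_def by (simp add: sum_distrib_left if_distrib cong: if_cong)
  finally show ?thesis .
qed

lemma double_count:
  "(\<Sum>x\<in>faces X (Suc j). \<Sum>v\<in>x. G (x - {v}) v) =
   (\<Sum>y\<in>faces X j. \<Sum>z\<in>vertices - y. if insert z y \<in> X then G y z else 0)"
proof -
  have L: "(\<Sum>x\<in>faces X (Suc j). \<Sum>v\<in>x. G (x - {v}) v) = (\<Sum>(x,v)\<in>Sigma (faces X (Suc j)) (\<lambda>x. x). G (x - {v}) v)"
    by (rule sum.Sigma) (auto simp: finite_faces finite_face faces_def finite_complex)
  have R: "(\<Sum>y\<in>faces X j. \<Sum>z\<in>vertices - y. if insert z y \<in> X then G y z else 0) =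
        (\<Sum>y\<in>faces X j. \<Sum>z\<in>{z\<in>vertices - y. insert z y \<in> X}. G y z)"
    by (rule sum.cong[OF refl]) (simp add: sum.inter_filter[symmetric] finite_vertices)
  also have "\<dots> = (\<Sum>(y,z)\<in>Sigma (faces X j) (\<lambda>y. {z\<in>vertices - y. insert z y \<in> X}). G y z)"
    by (rule sum.Sigma) (auto simp: finite_faces finite_vertices)
  also have "\<dots> = (\<Sum>(x,v)\<in>Sigma (faces X (Suc j)) (\<lambda>x. x). G (x - {v}) v)"
  proof (rule sum.reindex_bij_witness[where j="\<lambda>(y,z). (insert z y, z)" and i="\<lambda>(x,v). (x - {v}, v)"])
    fix b assume "b \<in> Sigma (faces X j) (\<lambda>y. {z \<in> vertices - y. insert z y \<in> X})"
    then obtain y z where b: "b = (y,z)" "y \<in> X" "card y = j" "z \<in> vertices" "z \<notin> y" "insert z y \<in> X"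
      unfolding faces_def by auto
    have fy: "finite y" using finite_face b by auto
    show "(case (case b of (y, z) \<Rightarrow> (insert z y, z)) of (x, v) \<Rightarrow> (x - {v}, v)) = b"
      using b by auto
    show "(case b of (y, z) \<Rightarrow> (insert z y, z)) \<in> Sigma (faces X (Suc j)) (\<lambda>x. x)"
      using b fy by (auto simp: faces_def)
    show "(case (case b of (y, z) \<Rightarrow> (insert z y, z)) of (x, v) \<Rightarrow> G (x - {v}) v) = (case b of (y, z) \<Rightarrow> G y z)"
      using b by auto
  next
    fix a assume "a \<in> Sigma (faces X (Suc j)) (\<lambda>x. x)"
    then obtain x v where a: "a = (x,v)" "x \<in> X" "card x = Suc j" "v \<in> x" unfolding faces_def by auto
    have fx: "finite x" using finite_face a by auto
    show "(case (case a of (x, v) \<Rightarrow> (x - {v}, v)) of (y, z) \<Rightarrow> (insert z y, z)) = a"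
      using a by auto
    show "(case a of (x, v) \<Rightarrow> (x - {v}, v)) \<in> Sigma (faces X j) (\<lambda>y. {z \<in> vertices - y. insert z y \<in> X})"
      using a fx face_subset_vertices[of x] by (auto simp: faces_def intro: face_subset)
  qed
  finally show ?thesis using L by simp
qed

lemma double_count_mass:
  "(\<Sum>y\<in>faces X j. \<Sum>z\<in>vertices - y. mass (insert z y) * G y z) =
   (\<Sum>x\<in>faces X (Suc j). mass x * (\<Sum>v\<in>x. G (x - {v}) v))"
proof -
  have "(\<Sum>x\<in>faces X (Suc j). mass x * (\<Sum>v\<in>x. G (x - {v}) v)) =
        (\<Sum>x\<in>faces X (Suc j). \<Sum>v\<in>x. mass (insert v (x - {v})) * G (x - {v}) v)"
    by (rule sum.cong[OF refl]) (auto simp: sum_distrib_left insert_absorb intro!: sum.cong)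
  also have "\<dots> = (\<Sum>y\<in>faces X j. \<Sum>z\<in>vertices - y. if insert z y \<in> X then mass (insert z y) * G y z else 0)"
    by (rule double_count)
  also have "\<dots> = (\<Sum>y\<in>faces X j. \<Sum>z\<in>vertices - y. mass (insert z y) * G y z)"
    by (auto intro!: sum.cong simp: mass_nonface)
  finally show ?thesis by simp
qed

lemma double_count_mass_Suc:
  "(\<Sum>y\<in>faces X j. \<Sum>z\<in>vertices - y. mass (insert z y) * H (insert z y)) =
   real (Suc j) * (\<Sum>x\<in>faces X (Suc j). mass x * H x)"
proof -
  have "(\<Sum>y\<in>faces X j. \<Sum>z\<in>vertices - y. mass (insert z y) * H (insert z y)) =
     (\<Sum>x\<in>faces X (Suc j). mass x * (\<Sum>v\<in>x. H (insert v (x - {v}))))"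
    by (rule double_count_mass)
  also have "\<dots> = (\<Sum>x\<in>faces X (Suc j). mass x * (real (Suc j) * H x))"
    by (rule sum.cong[OF refl]) (auto simp: faces_def insert_absorb)
  finally show ?thesis by (simp add: sum_distrib_left mult.commute mult.left_commute)
qed

lemma sum_mass_faces: "j \<le> d \<Longrightarrow> (\<Sum>x\<in>faces X j. mass x) = real (d choose j)"
proof (induction j)
  case 0 then show ?case by (simp add: faces_0 mass_empty)
next
  case (Suc j)
  have "real (Suc j) * (\<Sum>x\<in>faces X (Suc j). mass x * 1) = (\<Sum>y\<in>faces X j. \<Sum>z\<in>vertices - y. mass (insert z y) * 1)"
    by (rule double_count_mass_Suc[symmetric])
  also have "\<dots> = (\<Sum>y\<in>faces X j. real (d - j) * mass y)"
    by (rule sum.cong[OF refl]) (simp add: sum_mass_insert faces_def)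
  also have "\<dots> = real (d - j) * real (d choose j)" using Suc by (simp add: sum_distrib_left[symmetric])
  also have "\<dots> = real (d choose Suc j) * real (Suc j)" using binomial_Suc_mult by (simp add: mult.commute)
  finally show ?case by (simp add: mult.commute)
qed

end

section \<open>Garland's method\<close>

lemma weighted_Cauchy_Schwarz:
  fixes a b c :: "'b \<Rightarrow> real"
  assumes "\<And>i. i \<in> I \<Longrightarrow> a i \<ge> 0"
  shows "(\<Sum>i\<in>I. a i * b i * c i)^2 \<le> (\<Sum>i\<in>I. a i * (b i)^2) * (\<Sum>i\<in>I. a i * (c i)^2)"
proof -
  have "(\<Sum>i\<in>I. a i * b i * c i) = (\<Sum>i\<in>I. (sqrt (a i) * b i) * (sqrt (a i) * c i))"
    using assms by (intro sum.cong) (auto simp: algebra_simps real_sqrt_mult[symmetric])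
  moreover have "(\<Sum>i\<in>I. a i * (b i)^2) = (\<Sum>i\<in>I. (sqrt (a i) * b i)^2)"
    using assms by (intro sum.cong) (auto simp: power_mult_distrib)
  moreover have "(\<Sum>i\<in>I. a i * (c i)^2) = (\<Sum>i\<in>I. (sqrt (a i) * c i)^2)"
    using assms by (intro sum.cong) (auto simp: power_mult_distrib)
  ultimately show ?thesis using Cauchy_Schwarz_ineq_sum[where a="\<lambda>i. sqrt (a i) * b i" and I=I and b="\<lambda>i. sqrt (a i) * c i"] by simp
qed

lemma square_sum_split:
  fixes a :: "'b \<Rightarrow> real"
  assumes "finite x"
  shows "(\<Sum>v\<in>x. a v)^2 = (\<Sum>v\<in>x. (a v)^2) + (\<Sum>v\<in>x. \<Sum>v'\<in>x - {v}. a v * a v')"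
proof -
  have "(\<Sum>v\<in>x. a v)^2 = (\<Sum>v\<in>x. \<Sum>v'\<in>x. a v * a v')"
    by (simp add: power2_eq_square sum_product)
  also have "\<dots> = (\<Sum>v\<in>x. (a v)^2 + (\<Sum>v'\<in>x - {v}. a v * a v'))"
    using assms by (intro sum.cong refl) (simp add: sum.remove power2_eq_square)
  finally show ?thesis by (simp add: sum.distrib)
qed

lemma le_of_square_le_mult:
  fixes y b s u :: real
  assumes "0 \<le> y" "0 \<le> b" "0 \<le> s" "y^2 \<le> s * u" "u \<le> b * y"
  shows "y \<le> b * s"
proof (cases "y = 0")
  case False
  then have "y * y \<le> y * (b * s)"
    using assms order_trans[OF assms(4) mult_left_mono[OF assms(5) assms(3)]]
    by (simp add: power2_eq_square mult_ac)
  then show ?thesis using assms(1) False by simp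
qed (use assms in simp)

context weighted_complex
begin

definition sqnorm :: "nat \<Rightarrow> ('a set \<Rightarrow> real) \<Rightarrow> real" where
  "sqnorm j h = (\<Sum>y\<in>faces X j. mass y * (h y)^2)"

definition up_sqnorm :: "nat \<Rightarrow> ('a set \<Rightarrow> real) \<Rightarrow> real" where
  "up_sqnorm j h = (\<Sum>x\<in>faces X (Suc j). mass x * (\<Sum>v\<in>x. h (x - {v}))^2)"

text \<open>On a face y, down h y is (d - |y|) times the average of h over the faces y + z.\<close>
definition down :: "('a set \<Rightarrow> real) \<Rightarrow> 'a set \<Rightarrow> real" where
  "down h y = (\<Sum>z\<in>vertices - y. mass (insert z y) * h (insert z y)) / mass y"

definition centered :: "nat \<Rightarrow> ('a set \<Rightarrow> real) \<Rightarrow> bool" where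
  "centered j h \<longleftrightarrow> (\<Sum>y\<in>faces X j. mass y * h y) = 0"

text \<open>Quadratic-form statement of "all non-trivial eigenvalues of the link of s are at most \<gamma>".\<close>
definition link_expansion :: "'a set \<Rightarrow> real \<Rightarrow> bool" where
  "link_expansion s \<gamma> \<longleftrightarrow> (\<forall>g.
     (\<Sum>u\<in>vertices - s. \<Sum>v\<in>vertices - s - {u}. mass (insert u (insert v s)) * g u * g v)
   \<le> (real (d - card s) - 1) * (\<gamma> * (\<Sum>u\<in>vertices - s. mass (insert u s) * (g u)^2)
       + (1 - \<gamma>) * (\<Sum>u\<in>vertices - s. mass (insert u s) * g u)^2 / (real (d - card s) * mass s)))"

lemma sqnorm_nonneg: "sqnorm j h \<ge> 0"
  unfolding sqnorm_def by (intro sum_nonneg mult_nonneg_nonneg mass_nonneg) auto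

lemma sqnorm_down:
  "sqnorm i (down h) = (\<Sum>s\<in>faces X i. (\<Sum>u\<in>vertices - s. mass (insert u s) * h (insert u s))^2 / mass s)"
  unfolding sqnorm_def down_def
  by (rule sum.cong[OF refl]) (auto simp: faces_def power2_eq_square dest: mass_pos)

lemma up_sqnorm_diagonal:
  "(\<Sum>x\<in>faces X (Suc j). mass x * (\<Sum>v\<in>x. (h (x - {v}))^2)) = real (d - j) * sqnorm j h"
proof -
  have "(\<Sum>x\<in>faces X (Suc j). mass x * (\<Sum>v\<in>x. (h (x - {v}))^2))
      = (\<Sum>y\<in>faces X j. \<Sum>z\<in>vertices - y. mass (insert z y) * (h y)^2)"
    by (rule double_count_mass[symmetric])
  also have "\<dots> = (\<Sum>y\<in>faces X j. real (d - j) * mass y * (h y)^2)"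
    by (intro sum.cong refl) (auto simp: sum_distrib_right[symmetric] sum_mass_insert faces_def)
  finally show ?thesis unfolding sqnorm_def by (simp add: sum_distrib_left mult.assoc)
qed

lemma up_sqnorm_cross:
  "(\<Sum>x\<in>faces X (Suc (Suc i)). mass x * (\<Sum>v\<in>x. \<Sum>v'\<in>x - {v}. h (x - {v}) * h (x - {v'}))) =
   (\<Sum>s\<in>faces X i. \<Sum>u\<in>vertices - s. \<Sum>u'\<in>vertices - s - {u}. mass (insert u (insert u' s)) * h (insert u s) * h (insert u' s))"
proof -
  define G where "G y z = (\<Sum>v'\<in>y. h y * h (insert z (y - {v'})))" for y z
  have "(\<Sum>x\<in>faces X (Suc (Suc i)). mass x * (\<Sum>v\<in>x. \<Sum>v'\<in>x - {v}. h (x - {v}) * h (x - {v'})))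
      = (\<Sum>x\<in>faces X (Suc (Suc i)). mass x * (\<Sum>v\<in>x. G (x - {v}) v))"
  proof (rule sum.cong[OF refl])
    fix x assume "x \<in> faces X (Suc (Suc i))"
    have "\<And>v v'. v \<in> x \<Longrightarrow> v' \<in> x - {v} \<Longrightarrow> insert v (x - {v} - {v'}) = x - {v'}" by auto
    then show "mass x * (\<Sum>v\<in>x. \<Sum>v'\<in>x - {v}. h (x - {v}) * h (x - {v'})) = mass x * (\<Sum>v\<in>x. G (x - {v}) v)"
      unfolding G_def by (auto intro!: sum.cong)
  qed
  also have "\<dots> = (\<Sum>y\<in>faces X (Suc i). \<Sum>z\<in>vertices - y. mass (insert z y) * G y z)"
    by (rule double_count_mass[symmetric])
  also have "\<dots> = (\<Sum>y\<in>faces X (Suc i). \<Sum>v'\<in>y. \<Sum>z\<in>vertices - y. mass (insert z y) * (h y * h (insert z (y - {v'}))))"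
  proof (rule sum.cong[OF refl])
    fix y
    show "(\<Sum>z\<in>vertices - y. mass (insert z y) * G y z) = (\<Sum>v'\<in>y. \<Sum>z\<in>vertices - y. mass (insert z y) * (h y * h (insert z (y - {v'}))))"
      unfolding G_def sum_distrib_left by (rule sum.swap)
  qed
  also have "\<dots> = (\<Sum>y\<in>faces X (Suc i). \<Sum>v'\<in>y. (\<lambda>s u. \<Sum>z\<in>vertices - insert u s. mass (insert z (insert u s)) * (h (insert u s) * h (insert z s))) (y - {v'}) v')"
  proof (rule sum.cong[OF refl], rule sum.cong[OF refl])
    fix y :: "'a set" and v' assume "v' \<in> y"
    then have e: "insert v' (y - {v'}) = y" by auto
    show "(\<Sum>z\<in>vertices - y. mass (insert z y) * (h y * h (insert z (y - {v'})))) =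
      (\<lambda>s u. \<Sum>z\<in>vertices - insert u s. mass (insert z (insert u s)) * (h (insert u s) * h (insert z s))) (y - {v'}) v'"
      by (simp only: e)
  qed
  also have "\<dots> = (\<Sum>s\<in>faces X i. \<Sum>u\<in>vertices - s. if insert u s \<in> X then (\<Sum>z\<in>vertices - insert u s. mass (insert z (insert u s)) * (h (insert u s) * h (insert z s))) else 0)"
    by (rule double_count[where G="\<lambda>s u. \<Sum>z\<in>vertices - insert u s. mass (insert z (insert u s)) * (h (insert u s) * h (insert z s))"])
  also have "\<dots> = (\<Sum>s\<in>faces X i. \<Sum>u\<in>vertices - s. \<Sum>u'\<in>vertices - s - {u}. mass (insert u (insert u' s)) * h (insert u s) * h (insert u' s))"
  proof (intro sum.cong refl)
    fix s u assume "s \<in> faces X i" "u \<in> vertices - s"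
    show "(if insert u s \<in> X then (\<Sum>z\<in>vertices - insert u s. mass (insert z (insert u s)) * (h (insert u s) * h (insert z s))) else 0) =
          (\<Sum>u'\<in>vertices - s - {u}. mass (insert u (insert u' s)) * h (insert u s) * h (insert u' s))"
    proof (cases "insert u s \<in> X")
      case True
      have e: "vertices - insert u s = vertices - s - {u}" by auto
      have eqz: "\<And>z. mass (insert z (insert u s)) * (h (insert u s) * h (insert z s)) = mass (insert u (insert z s)) * h (insert u s) * h (insert z s)"
        by (simp add: insert_commute mult.assoc)
      show ?thesis using True by (simp only: e if_True) (rule sum.cong[OF refl eqz])
    next
      case False
      have "\<And>u'. insert u (insert u' s) \<notin> X" using False face_subset by (metis insert_commute subset_insertI)
      then have "\<And>u'. mass (insert u (insert u' s)) = 0" by (simp add: mass_nonface)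
      then show ?thesis using False by simp
    qed
  qed
  finally show ?thesis .
qed

lemma up_sqnorm_split:
  "up_sqnorm j h = (\<Sum>x\<in>faces X (Suc j). mass x * (\<Sum>v\<in>x. (h (x - {v}))^2))
     + (\<Sum>x\<in>faces X (Suc j). mass x * (\<Sum>v\<in>x. \<Sum>v'\<in>x - {v}. h (x - {v}) * h (x - {v'})))"
  unfolding up_sqnorm_def
  by (subst sum.distrib[symmetric], rule sum.cong[OF refl])
     (auto simp: faces_def finite_face square_sum_split distrib_left)

lemma up_sqnorm_cross_le:
  assumes i2: "Suc (Suc i) \<le> d" and exp_faces: "\<forall>s\<in>faces X i. link_expansion s \<gamma>"
  shows "(\<Sum>x\<in>faces X (Suc (Suc i)). mass x * (\<Sum>v\<in>x. \<Sum>v'\<in>x - {v}. h (x - {v}) * h (x - {v'})))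
    \<le> real (d - Suc i) * (\<gamma> * real (Suc i) * sqnorm (Suc i) h + (1 - \<gamma>) * sqnorm i (down h) / real (d - i))"
proof -
  define A where "A s = (\<Sum>u\<in>vertices - s. mass (insert u s) * (h (insert u s))^2)" for s
  define B where "B s = (\<Sum>u\<in>vertices - s. mass (insert u s) * h (insert u s))^2 / (real (d - i) * mass s)" for s
  have "(\<Sum>x\<in>faces X (Suc (Suc i)). mass x * (\<Sum>v\<in>x. \<Sum>v'\<in>x - {v}. h (x - {v}) * h (x - {v'})))
      \<le> (\<Sum>s\<in>faces X i. real (d - Suc i) * (\<gamma> * A s + (1 - \<gamma>) * B s))"
    unfolding up_sqnorm_cross
  proof (rule sum_mono)
    fix s assume s: "s \<in> faces X i"
    have cs: "card s = i" using s unfolding faces_def by auto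
    have e: "real (d - i) - 1 = real (d - Suc i)" using i2 by (simp add: of_nat_diff)
    have "link_expansion s \<gamma>" using exp_faces s by auto
    then have "(\<Sum>u\<in>vertices - s. \<Sum>v\<in>vertices - s - {u}. mass (insert u (insert v s)) * h (insert u s) * h (insert v s))
       \<le> (real (d - card s) - 1) * (\<gamma> * (\<Sum>u\<in>vertices - s. mass (insert u s) * (h (insert u s))^2)
       + (1 - \<gamma>) * (\<Sum>u\<in>vertices - s. mass (insert u s) * h (insert u s))^2 / (real (d - card s) * mass s))"
      unfolding link_expansion_def by (rule allE[where x="\<lambda>u. h (insert u s)"])
    then show "(\<Sum>u\<in>vertices - s. \<Sum>u'\<in>vertices - s - {u}. mass (insert u (insert u' s)) * h (insert u s) * h (insert u' s))
       \<le> real (d - Suc i) * (\<gamma> * A s + (1 - \<gamma>) * B s)"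
      unfolding A_def B_def cs e by simp
  qed
  also have "\<dots> = real (d - Suc i) * (\<gamma> * (\<Sum>s\<in>faces X i. A s) + (1 - \<gamma>) * (\<Sum>s\<in>faces X i. B s))"
    by (simp add: distrib_left sum.distrib sum_distrib_left mult.assoc)
  also have "(\<Sum>s\<in>faces X i. A s) = real (Suc i) * sqnorm (Suc i) h"
    unfolding A_def sqnorm_def by (rule double_count_mass_Suc)
  also have "(\<Sum>s\<in>faces X i. B s) = sqnorm i (down h) / real (d - i)"
    unfolding B_def sqnorm_down by (simp add: sum_divide_distrib mult.commute)
  finally show ?thesis by (simp add: mult.assoc)
qed

lemma garland:
  assumes i2: "Suc (Suc i) \<le> d" and exp_faces: "\<forall>s\<in>faces X i. link_expansion s \<gamma>"
  shows "up_sqnorm (Suc i) h \<le> real (d - Suc i)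
    * ((1 + \<gamma> * real (Suc i)) * sqnorm (Suc i) h + (1 - \<gamma>) * sqnorm i (down h) / real (d - i))"
  using up_sqnorm_split[where j="Suc i" and h=h] up_sqnorm_diagonal[where j="Suc i" and h=h]
    up_sqnorm_cross_le[OF i2 exp_faces, of h]
  by (simp add: algebra_simps)

lemma sqnorm_down_level_0:
  assumes "centered (Suc 0) h"
  shows "sqnorm 0 (down h) = 0"
proof -
  have "(\<Sum>y\<in>faces X 0. \<Sum>z\<in>vertices - y. mass (insert z y) * h (insert z y))
      = real (Suc 0) * (\<Sum>x\<in>faces X (Suc 0). mass x * h x)"
    by (rule double_count_mass_Suc)
  also have "\<dots> = 0" using assms unfolding centered_def by simp
  finally have "(\<Sum>z\<in>vertices - {}. mass (insert z {}) * h (insert z {})) = 0"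
    by (simp add: faces_0)
  then show ?thesis unfolding sqnorm_down by (simp add: faces_0)
qed

lemma centered_down:
  assumes "centered (Suc j) g"
  shows "centered j (down g)"
proof -
  have "(\<Sum>y\<in>faces X j. mass y * down g y)
      = (\<Sum>y\<in>faces X j. \<Sum>z\<in>vertices - y. mass (insert z y) * g (insert z y))"
    unfolding down_def by (rule sum.cong[OF refl]) (auto simp: faces_def dest: mass_pos)
  also have "\<dots> = real (Suc j) * (\<Sum>x\<in>faces X (Suc j). mass x * g x)"
    by (rule double_count_mass_Suc)
  also have "\<dots> = 0" using assms unfolding centered_def by simp
  finally show ?thesis unfolding centered_def .
qed

lemma sqnorm_down_eq:
  "sqnorm j (down g) = (\<Sum>x\<in>faces X (Suc j). mass x * g x * (\<Sum>v\<in>x. down g (x - {v})))"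
proof -
  have "sqnorm j (down g)
      = (\<Sum>y\<in>faces X j. down g y * (\<Sum>z\<in>vertices - y. mass (insert z y) * g (insert z y)))"
    unfolding sqnorm_def
    by (rule sum.cong[OF refl]) (auto simp: faces_def power2_eq_square down_def dest: mass_pos)
  also have "\<dots> = (\<Sum>y\<in>faces X j. \<Sum>z\<in>vertices - y. mass (insert z y) * (down g y * g (insert z y)))"
    by (simp add: sum_distrib_left mult.left_commute)
  also have "\<dots> = (\<Sum>x\<in>faces X (Suc j). mass x * (\<Sum>v\<in>x. down g (x - {v}) * g (insert v (x - {v}))))"
    by (rule double_count_mass)
  also have "\<dots> = (\<Sum>x\<in>faces X (Suc j). mass x * g x * (\<Sum>v\<in>x. down g (x - {v})))"
  proof (rule sum.cong[OF refl])
    fix x :: "'a set"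
    have "(\<Sum>v\<in>x. down g (x - {v}) * g (insert v (x - {v}))) = (\<Sum>v\<in>x. down g (x - {v}) * g x)"
      by (rule sum.cong[OF refl]) (simp add: insert_absorb)
    then show "mass x * (\<Sum>v\<in>x. down g (x - {v}) * g (insert v (x - {v})))
        = mass x * g x * (\<Sum>v\<in>x. down g (x - {v}))"
      by (simp add: sum_distrib_left sum_distrib_right mult_ac)
  qed
  finally show ?thesis .
qed

lemma sqnorm_down_square_le: "(sqnorm j (down g))^2 \<le> sqnorm (Suc j) g * up_sqnorm j (down g)"
  unfolding sqnorm_down_eq unfolding sqnorm_def up_sqnorm_def
  by (rule weighted_Cauchy_Schwarz) (rule mass_nonneg)

text \<open>Garland's method, iterated from level 0 up to level kk.  The sequence Q
  collects the accumulated spectral gaps; the i-th step only needs the links of the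
  faces of size i to be expanders.\<close>
lemma down_sqnorm_local_to_global:
  assumes kd: "kk \<le> d"
    and Q1: "Q (Suc 0) \<le> 1"
    and Q_le: "\<And>j. Q j \<le> real j"
    and step: "\<And>i. Suc (Suc i) \<le> kk \<Longrightarrow> \<exists>\<gamma>. \<gamma> \<le> 1 \<and> (\<forall>s\<in>faces X i. link_expansion s \<gamma>)
                   \<and> Q (Suc (Suc i)) \<le> (1 - \<gamma>) * Q (Suc i)"
  shows "Suc i \<le> kk \<Longrightarrow> centered (Suc i) h
     \<Longrightarrow> sqnorm i (down h) \<le> real (d - i) * (real (Suc i) - Q (Suc i)) * sqnorm (Suc i) h"
proof (induction i arbitrary: h)
  case 0
  have "0 \<le> real (d - 0) * (real (Suc 0) - Q (Suc 0)) * sqnorm (Suc 0) h"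
    using Q1 sqnorm_nonneg by (intro mult_nonneg_nonneg) auto
  then show ?case using sqnorm_down_level_0 0 by simp
next
  case (Suc i)
  have i2: "Suc (Suc i) \<le> kk" using Suc.prems(1) by simp
  obtain \<gamma> where g1: "\<gamma> \<le> 1" and exp_faces: "\<forall>s\<in>faces X i. link_expansion s \<gamma>"
    and Qs: "Q (Suc (Suc i)) \<le> (1 - \<gamma>) * Q (Suc i)"
    using step[OF i2] by blast
  define Y where "Y = sqnorm (Suc i) (down h)"
  define B where "B = real (d - Suc i) * (real (Suc (Suc i)) - Q (Suc (Suc i)))"
  have Y0: "Y \<ge> 0" unfolding Y_def by (rule sqnorm_nonneg)
  have di: "real (d - i) > 0" using i2 kd by simp
  have "sqnorm i (down (down h)) \<le> real (d - i) * (real (Suc i) - Q (Suc i)) * Y"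
    using Suc.IH[of "down h"] centered_down[OF Suc.prems(2)] i2 unfolding Y_def by simp
  then have IH: "(1 - \<gamma>) * (sqnorm i (down (down h)) / real (d - i)) \<le> (1 - \<gamma>) * ((real (Suc i) - Q (Suc i)) * Y)"
    using g1 di by (intro mult_left_mono) (auto simp: divide_le_eq mult.commute mult.left_commute)
  have "up_sqnorm (Suc i) (down h) \<le> real (d - Suc i) *
      ((1 + \<gamma> * real (Suc i)) * Y + (1 - \<gamma>) * sqnorm i (down (down h)) / real (d - i))"
    using garland[OF _ exp_faces, of "down h"] i2 kd unfolding Y_def by simp
  also have "\<dots> \<le> real (d - Suc i) * ((1 + \<gamma> * real (Suc i)) * Y + (1 - \<gamma>) * ((real (Suc i) - Q (Suc i)) * Y))"
    using IH by (intro mult_left_mono) auto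
  also have "\<dots> = real (d - Suc i) * Y * (real (Suc (Suc i)) - (1 - \<gamma>) * Q (Suc i))"
    by (simp add: algebra_simps)
  also have "\<dots> \<le> real (d - Suc i) * Y * (real (Suc (Suc i)) - Q (Suc (Suc i)))"
    using Qs Y0 by (intro mult_left_mono) auto
  also have "\<dots> = B * Y"
    unfolding B_def by simp
  finally have U: "up_sqnorm (Suc i) (down h) \<le> B * Y" .
  have Y2: "Y^2 \<le> sqnorm (Suc (Suc i)) h * up_sqnorm (Suc i) (down h)"
    unfolding Y_def by (rule sqnorm_down_square_le)
  have B0: "B \<ge> 0" unfolding B_def using Q_le[of "Suc (Suc i)"] by simp
  have "Y \<le> B * sqnorm (Suc (Suc i)) h"
    by (rule le_of_square_le_mult[OF Y0 B0 sqnorm_nonneg Y2 U])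
  then show ?case unfolding Y_def B_def by (simp add: mult.assoc)
qed

end

section \<open>Quadratic forms of reversible random walks\<close>

lemma linear_coeff_eq_0:
  fixes L D :: real
  assumes "\<And>t. 2 * t * L + t^2 * D \<le> 0"
  shows "L = 0"
proof -
  obtain a where a: "a = \<bar>D\<bar> + 1" by simp
  have pos: "a > 0" using a by simp
  define t where "t = L / a"
  have "2 * t * L + t^2 * D \<le> 0" by (rule assms)
  then have "(2 * t * L + t^2 * D) * a^2 \<le> 0"
    by (simp add: mult_nonpos_nonneg)
  moreover have "(2 * t * L + t^2 * D) * a^2 = L^2 * (2 * a + D)"
    unfolding t_def using pos by (simp add: field_simps power2_eq_square)
  ultimately have "L^2 * (2 * a + D) \<le> 0" by simp
  moreover have "2 * a + D > 0" using a by (cases "D \<ge> 0") auto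
  ultimately have "L^2 \<le> 0" by (simp add: mult_le_0_iff)
  then show ?thesis by simp
qed

lemma weighted_sum_squares_eq_0:
  fixes p g :: "'a \<Rightarrow> real"
  assumes "finite V" "\<And>u. u \<in> V \<Longrightarrow> p u > 0" "(\<Sum>u\<in>V. p u * (g u)^2) = 0" "u \<in> V"
  shows "g u = 0"
proof -
  have nn: "\<forall>u\<in>V. 0 \<le> p u * (g u)^2" using assms(2) by (metis less_imp_le mult_nonneg_nonneg zero_le_power2)
  have "\<forall>u\<in>V. p u * (g u)^2 = 0"
    using sum_nonneg_eq_0_iff[OF assms(1), of "\<lambda>u. p u * (g u)^2"] nn assms(3) by auto
  then have "p u * (g u)^2 = 0" using assms(4) by auto
  then show ?thesis using assms(2)[OF assms(4)] by simp
qed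

lemma quadratic_form_shift:
  fixes K :: "'a \<Rightarrow> 'a \<Rightarrow> real"
  assumes Ksym: "\<And>u v. K u v = K v u"
  shows "(\<Sum>u\<in>V. \<Sum>v\<in>V. K u v * (h u + t * g u) * (h v + t * g v)) =
    (\<Sum>u\<in>V. \<Sum>v\<in>V. K u v * h u * h v) + 2 * t * (\<Sum>u\<in>V. g u * (\<Sum>v\<in>V. K u v * h v))
      + t^2 * (\<Sum>u\<in>V. \<Sum>v\<in>V. K u v * g u * g v)"
proof -
  have sw: "(\<Sum>u\<in>V. \<Sum>v\<in>V. K u v * h u * g v) = (\<Sum>u\<in>V. \<Sum>v\<in>V. K u v * g u * h v)"
    by (subst sum.swap) (simp add: Ksym mult.commute mult.left_commute)
  have "(\<Sum>u\<in>V. \<Sum>v\<in>V. K u v * (h u + t * g u) * (h v + t * g v)) =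
    (\<Sum>u\<in>V. \<Sum>v\<in>V. K u v * h u * h v + t * (K u v * h u * g v) + t * (K u v * g u * h v) + t^2 * (K u v * g u * g v))"
    by (intro sum.cong refl) (simp add: algebra_simps power2_eq_square)
  also have "\<dots> = (\<Sum>u\<in>V. \<Sum>v\<in>V. K u v * h u * h v) + t * (\<Sum>u\<in>V. \<Sum>v\<in>V. K u v * h u * g v)
     + t * (\<Sum>u\<in>V. \<Sum>v\<in>V. K u v * g u * h v) + t^2 * (\<Sum>u\<in>V. \<Sum>v\<in>V. K u v * g u * g v)"
    by (simp add: sum.distrib sum_distrib_left)
  finally have e1: "(\<Sum>u\<in>V. \<Sum>v\<in>V. K u v * (h u + t * g u) * (h v + t * g v)) =
    (\<Sum>u\<in>V. \<Sum>v\<in>V. K u v * h u * h v) + t * (\<Sum>u\<in>V. \<Sum>v\<in>V. K u v * h u * g v)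
     + t * (\<Sum>u\<in>V. \<Sum>v\<in>V. K u v * g u * h v) + t^2 * (\<Sum>u\<in>V. \<Sum>v\<in>V. K u v * g u * g v)" .
  have e3: "(\<Sum>u\<in>V. \<Sum>v\<in>V. K u v * g u * h v) = (\<Sum>u\<in>V. g u * (\<Sum>v\<in>V. K u v * h v))"
    by (simp add: sum_distrib_left mult.commute mult.left_commute)
  have ar: "\<And>A X Y C G. X = Y \<Longrightarrow> Y = G \<Longrightarrow> A + t*X + t*Y + t^2*C = A + 2*t*G + t^2*(C::real)" by simp
  show ?thesis unfolding e1 by (rule ar[OF sw e3])
qed

lemma abs_le_of_weighted_sum_squares:
  fixes V :: "'a set" and p g :: "'a \<Rightarrow> real"
  assumes finV: "finite V" and ppos: "\<And>u. u \<in> V \<Longrightarrow> p u > 0"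
    and N1: "(\<Sum>u\<in>V. p u * (g u)^2) = 1" and u: "u \<in> V"
  shows "\<bar>g u\<bar> \<le> 1 + (\<Sum>u\<in>V. 1 / p u)"
proof -
  have "p u * (g u)^2 \<le> (\<Sum>u\<in>V. p u * (g u)^2)"
    using finV u by (intro member_le_sum) (auto intro!: mult_nonneg_nonneg dest: ppos)
  then have "(g u)^2 \<le> 1 / p u" using N1 ppos[OF u] by (simp add: field_simps)
  also have "1 / p u \<le> (\<Sum>u\<in>V. 1 / p u)"
    using finV u ppos by (intro member_le_sum) (auto simp: less_imp_le)
  finally have g2: "(g u)^2 \<le> (\<Sum>u\<in>V. 1 / p u)" .
  show ?thesis
  proof (cases "\<bar>g u\<bar> \<le> 1")
    case True
    moreover have "0 \<le> (g u)^2" by simp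
    ultimately show ?thesis using g2 by linarith
  next
    case False
    then have "\<bar>g u\<bar> * 1 \<le> \<bar>g u\<bar> * \<bar>g u\<bar>" by (intro mult_left_mono) auto
    then have "\<bar>g u\<bar> \<le> (g u)^2" by (simp add: power2_eq_square abs_mult_self_eq)
    then show ?thesis using g2 by simp
  qed
qed

lemma compact_centered_unit_sphere:
  fixes V :: "'a set" and p :: "'a \<Rightarrow> real"
  assumes finV: "finite V" and ppos: "\<And>u. u \<in> V \<Longrightarrow> p u > 0"
  shows "compact {g :: 'a \<Rightarrow> real. (\<forall>u. u \<notin> V \<longrightarrow> g u = 0)
                   \<and> (\<Sum>u\<in>V. p u * g u) = 0 \<and> (\<Sum>u\<in>V. p u * (g u)^2) = 1}"
    (is "compact ?S")
proof -
  define Mb where "Mb = 1 + (\<Sum>u\<in>V. 1 / p u)"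
  have "0 \<le> (\<Sum>u\<in>V. 1 / p u)" using ppos by (intro sum_nonneg) (simp add: less_imp_le)
  then have bound: "\<bar>g u\<bar> \<le> Mb" if "g \<in> ?S" for g u
    using that abs_le_of_weighted_sum_squares[OF finV ppos, where g=g and u=u] unfolding Mb_def
    by (cases "u \<in> V") auto
  define B where "B = Pi\<^sub>E UNIV (\<lambda>u::'a. if u \<in> V then {-Mb..Mb} else {0::real})"
  have "compactin (product_topology (\<lambda>i. euclidean) UNIV) B"
    unfolding B_def compactin_PiE by auto
  then have compB: "compact B" by (simp add: euclidean_product_topology)
  have SB: "?S \<subseteq> B"
  proof
    fix g assume g: "g \<in> ?S"
    have "g i \<in> (if i \<in> V then {-Mb..Mb} else {0})" for i
    proof -
      have "-Mb \<le> g i \<and> g i \<le> Mb" using bound[OF g, of i] by linarith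
      then show ?thesis using g by auto
    qed
    then show "g \<in> B" unfolding B_def by (auto simp: PiE_iff)
  qed
  have coord: "continuous_on UNIV (\<lambda>g::'a \<Rightarrow> real. g u)" for u by simp
  have "?S = (\<Inter>u\<in>-V. {g. g u = 0}) \<inter> {g. (\<Sum>u\<in>V. p u * g u) = 0}
      \<inter> {g. (\<Sum>u\<in>V. p u * (g u)^2) = 1}"
    by auto
  also have "closed \<dots>"
    by (intro closed_Int closed_INT ballI closed_Collect_eq continuous_intros coord)
  finally have "closed ?S" .
  with compB have "compact (B \<inter> ?S)" by (rule compact_Int_closed)
  moreover have "B \<inter> ?S = ?S" using SB by auto
  ultimately show ?thesis by simp
qed

lemma rayleigh_maximiser_exists:
  fixes V :: "'a set" and p :: "'a \<Rightarrow> real" and K :: "'a \<Rightarrow> 'a \<Rightarrow> real"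
  assumes finV: "finite V" and ppos: "\<And>u. u \<in> V \<Longrightarrow> p u > 0"
    and g0M: "(\<Sum>u\<in>V. p u * g0 u) = 0" and g0nz: "u0 \<in> V" "g0 u0 \<noteq> 0"
  obtains h where "(\<Sum>u\<in>V. p u * h u) = 0" "(\<Sum>u\<in>V. p u * (h u)^2) = 1"
    "\<And>g. (\<Sum>u\<in>V. p u * g u) = 0 \<Longrightarrow> (\<Sum>u\<in>V. \<Sum>v\<in>V. K u v * g u * g v)
        \<le> (\<Sum>u\<in>V. \<Sum>v\<in>V. K u v * h u * h v) * (\<Sum>u\<in>V. p u * (g u)^2)"
proof -
  define M where "M g = (\<Sum>u\<in>V. p u * g u)" for g :: "'a \<Rightarrow> real"
  define N where "N g = (\<Sum>u\<in>V. p u * (g u)^2)" for g :: "'a \<Rightarrow> real"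
  define Q where "Q g = (\<Sum>u\<in>V. \<Sum>v\<in>V. K u v * g u * g v)" for g :: "'a \<Rightarrow> real"
  define S where "S = {g :: 'a \<Rightarrow> real. (\<forall>u. u \<notin> V \<longrightarrow> g u = 0) \<and> M g = 0 \<and> N g = 1}"
  have compS: "compact S"
    unfolding S_def M_def N_def by (rule compact_centered_unit_sphere[OF finV ppos])
  have N0: "N g \<ge> 0" for g
    unfolding N_def using ppos by (intro sum_nonneg mult_nonneg_nonneg) (auto simp: less_imp_le)
  have onV: "M g = M g' \<and> N g = N g' \<and> Q g = Q g'" if "\<And>u. u \<in> V \<Longrightarrow> g u = g' u" for g g'
    unfolding M_def N_def Q_def using that by (auto intro!: sum.cong)
  have Nzero: "N g = 0 \<Longrightarrow> u \<in> V \<Longrightarrow> g u = 0" for g u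
    unfolding N_def by (rule weighted_sum_squares_eq_0[where p=p, OF finV]) (auto intro: ppos)
  define nrm where "nrm g = (\<lambda>u. if u \<in> V then g u / sqrt (N g) else 0)" for g
  have nrm: "nrm g \<in> S \<and> Q (nrm g) = Q g / N g" if "M g = 0" "N g \<noteq> 0" for g
  proof -
    have Np: "N g > 0" using N0[of g] that by simp
    have eq: "M (nrm g) = M (\<lambda>u. g u / sqrt (N g)) \<and> N (nrm g) = N (\<lambda>u. g u / sqrt (N g))
        \<and> Q (nrm g) = Q (\<lambda>u. g u / sqrt (N g))"
      by (rule onV) (simp add: nrm_def)
    have "M (\<lambda>u. g u / sqrt (N g)) = M g / sqrt (N g)"
      unfolding M_def by (simp add: sum_divide_distrib)
    moreover have "N (\<lambda>u. g u / sqrt (N g)) = N g / N g"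
      using N0[of g] unfolding N_def by (simp add: power_divide sum_divide_distrib[symmetric])
    moreover have "Q (\<lambda>u. g u / sqrt (N g)) = (\<Sum>u\<in>V. \<Sum>v\<in>V. K u v * g u * g v / N g)"
      unfolding Q_def using Np by (intro sum.cong refl) (simp add: field_simps)
    moreover have "\<dots> = Q g / N g" unfolding Q_def by (simp add: sum_divide_distrib)
    ultimately show ?thesis using eq that Np unfolding S_def by (auto simp: nrm_def)
  qed
  have "N g0 \<noteq> 0" using Nzero[of g0 u0] g0nz by auto
  then have "S \<noteq> {}" using nrm[of g0] g0M unfolding M_def by auto
  moreover have "continuous_on S Q"
  proof -
    have coord: "continuous_on UNIV (\<lambda>g::'a \<Rightarrow> real. g u)" for u by simp
    have "continuous_on UNIV Q" unfolding Q_def by (intro continuous_intros coord)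
    then show ?thesis by (rule continuous_on_subset) simp
  qed
  ultimately obtain h where hS: "h \<in> S" and hmax: "\<And>g. g \<in> S \<Longrightarrow> Q g \<le> Q h"
    using continuous_attains_sup[OF compS] by blast
  have "Q g \<le> Q h * N g" if "M g = 0" for g
  proof (cases "N g = 0")
    case True
    then have "Q g = Q (\<lambda>_. 0)" using onV[of g "\<lambda>_. 0"] Nzero by auto
    then show ?thesis using True unfolding Q_def by simp
  next
    case False
    then have "Q g / N g \<le> Q h" using hmax[of "nrm g"] nrm[OF that False] by simp
    moreover have "N g > 0" using N0[of g] False by simp
    ultimately show ?thesis by (simp add: divide_le_eq)
  qed
  then show ?thesis using that hS unfolding S_def M_def N_def Q_def by blast
qed

text \<open>First-order optimality: perturbing h by t times the residual e / p stays centred,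
  and the resulting quadratic in t can only be nonpositive if the residual vanishes.\<close>
lemma rayleigh_maximiser_eigenvector:
  fixes V :: "'a set" and p :: "'a \<Rightarrow> real" and K :: "'a \<Rightarrow> 'a \<Rightarrow> real" and c :: real
  assumes finV: "finite V" and ppos: "\<And>u. u \<in> V \<Longrightarrow> p u > 0"
    and Ksym: "\<And>u v. K u v = K v u"
    and rows: "\<And>u. u \<in> V \<Longrightarrow> (\<Sum>v\<in>V. K u v) = c * p u"
    and Mh: "(\<Sum>u\<in>V. p u * h u) = 0" and Nh: "(\<Sum>u\<in>V. p u * (h u)^2) = 1"
    and hmax: "\<And>g. (\<Sum>u\<in>V. p u * g u) = 0 \<Longrightarrow> (\<Sum>u\<in>V. \<Sum>v\<in>V. K u v * g u * g v)
        \<le> (\<Sum>u\<in>V. \<Sum>v\<in>V. K u v * h u * h v) * (\<Sum>u\<in>V. p u * (g u)^2)"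
  shows "\<forall>u\<in>V. (\<Sum>v\<in>V. K u v * h v) = (\<Sum>u\<in>V. \<Sum>v\<in>V. K u v * h u * h v) * p u * h u"
proof -
  define M where "M g = (\<Sum>u\<in>V. p u * g u)" for g :: "'a \<Rightarrow> real"
  define N where "N g = (\<Sum>u\<in>V. p u * (g u)^2)" for g :: "'a \<Rightarrow> real"
  define Q where "Q g = (\<Sum>u\<in>V. \<Sum>v\<in>V. K u v * g u * g v)" for g :: "'a \<Rightarrow> real"
  define \<mu> where "\<mu> = Q h"
  define e where "e u = (\<Sum>v\<in>V. K u v * h v) - \<mu> * p u * h u" for u
  define g where "g u = e u / p u" for u
  have Mg: "M g = 0"
  proof -
    have "M g = (\<Sum>u\<in>V. e u)" unfolding M_def g_def using ppos by (intro sum.cong) (auto dest: ppos)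
    also have "\<dots> = (\<Sum>u\<in>V. \<Sum>v\<in>V. K u v * h v) - \<mu> * M h"
      unfolding e_def M_def by (simp add: sum_subtractf sum_distrib_left mult.assoc)
    also have "(\<Sum>u\<in>V. \<Sum>v\<in>V. K u v * h v) = (\<Sum>v\<in>V. h v * (\<Sum>u\<in>V. K v u))"
      by (subst sum.swap) (simp add: sum_distrib_left Ksym mult.commute)
    also have "\<dots> = c * M h" unfolding M_def using rows by (simp add: sum_distrib_left mult_ac)
    finally show ?thesis using Mh unfolding M_def by simp
  qed
  have "2 * t * (\<Sum>u\<in>V. g u * e u) + t^2 * (Q g - \<mu> * N g) \<le> 0" for t
  proof -
    have "M (\<lambda>u. h u + t * g u) = 0" using Mh Mg unfolding M_def
      by (simp add: distrib_left sum.distrib sum_distrib_left[symmetric] mult.left_commute)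
    then have "Q (\<lambda>u. h u + t * g u) \<le> \<mu> * N (\<lambda>u. h u + t * g u)"
      using hmax[of "\<lambda>u. h u + t * g u"] unfolding M_def N_def Q_def \<mu>_def by simp
    moreover have "Q (\<lambda>u. h u + t * g u) = \<mu> + 2 * t * (\<Sum>u\<in>V. g u * (\<Sum>v\<in>V. K u v * h v)) + t^2 * Q g"
      unfolding Q_def \<mu>_def by (rule quadratic_form_shift[OF Ksym])
    moreover have "N (\<lambda>u. h u + t * g u) = 1 + 2 * t * (\<Sum>u\<in>V. g u * (p u * h u)) + t^2 * N g"
      using Nh unfolding N_def by (simp add: sum.distrib sum_distrib_left algebra_simps power2_eq_square)
    ultimately have A: "\<mu> + 2 * t * (\<Sum>u\<in>V. g u * (\<Sum>v\<in>V. K u v * h v)) + t^2 * Q g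
        \<le> \<mu> * (1 + 2 * t * (\<Sum>u\<in>V. g u * (p u * h u)) + t^2 * N g)"
      by simp
    have D: "(\<Sum>u\<in>V. g u * e u)
        = (\<Sum>u\<in>V. g u * (\<Sum>v\<in>V. K u v * h v)) - \<mu> * (\<Sum>u\<in>V. g u * (p u * h u))"
      unfolding e_def by (simp add: sum_subtractf sum_distrib_left algebra_simps)
    have ar: "\<And>a G H q n. a + 2*t*G + t^2*q \<le> a*(1 + 2*t*H + t^2*n)
        \<Longrightarrow> 2*t*(G - a*H) + t^2*(q - a*n) \<le> (0::real)"
      by (simp add: algebra_simps)
    show ?thesis unfolding D by (rule ar[OF A])
  qed
  then have "(\<Sum>u\<in>V. g u * e u) = 0" by (rule linear_coeff_eq_0)
  moreover have "(\<Sum>u\<in>V. g u * e u) = (\<Sum>u\<in>V. (1 / p u) * (e u)^2)"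
    unfolding g_def by (simp add: power2_eq_square)
  ultimately have "\<forall>u\<in>V. e u = 0"
    using weighted_sum_squares_eq_0[OF finV, of "\<lambda>u. 1 / p u" e] ppos by auto
  then show ?thesis unfolding e_def \<mu>_def Q_def by auto
qed

lemma quadratic_form_bound_uncentered:
  fixes V :: "'a set" and p :: "'a \<Rightarrow> real" and K :: "'a \<Rightarrow> 'a \<Rightarrow> real" and c \<gamma> :: real
  assumes finV: "finite V"
    and Ksym: "\<And>u v. K u v = K v u"
    and rows: "\<And>u. u \<in> V \<Longrightarrow> (\<Sum>v\<in>V. K u v) = c * p u"
    and P0: "(\<Sum>u\<in>V. p u) > 0"
    and perp: "\<And>g. (\<Sum>u\<in>V. p u * g u) = 0
        \<Longrightarrow> (\<Sum>u\<in>V. \<Sum>v\<in>V. K u v * g u * g v) \<le> c * \<gamma> * (\<Sum>u\<in>V. p u * (g u)^2)"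
  shows "(\<Sum>u\<in>V. \<Sum>v\<in>V. K u v * g u * g v) \<le> c * (\<gamma> * (\<Sum>u\<in>V. p u * (g u)^2) + (1 - \<gamma>) * (\<Sum>u\<in>V. p u * g u)^2 / (\<Sum>u\<in>V. p u))"
proof -
  define P where "P = (\<Sum>u\<in>V. p u)"
  define a where "a = (\<Sum>u\<in>V. p u * g u) / P"
  define g0 where "g0 u = g u - a" for u
  have gg: "g u = g0 u + a * 1" for u unfolding g0_def by simp
  have M0: "(\<Sum>u\<in>V. p u * g0 u) = 0"
  proof -
    have "(\<Sum>u\<in>V. p u * g0 u) = (\<Sum>u\<in>V. p u * g u) - a * P"
      unfolding g0_def P_def by (simp add: right_diff_distrib sum_subtractf sum_distrib_left mult.commute)
    also have "a * P = (\<Sum>u\<in>V. p u * g u)" unfolding a_def using P0 P_def by simp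
    finally show ?thesis by simp
  qed
  have Qe: "(\<Sum>u\<in>V. \<Sum>v\<in>V. K u v * g u * g v) = (\<Sum>u\<in>V. \<Sum>v\<in>V. K u v * g0 u * g0 v)
      + 2 * a * (\<Sum>u\<in>V. 1 * (\<Sum>v\<in>V. K u v * g0 v)) + a^2 * (\<Sum>u\<in>V. \<Sum>v\<in>V. K u v * 1 * 1)"
    unfolding gg by (rule quadratic_form_shift[OF Ksym])
  have z: "(\<Sum>u\<in>V. 1 * (\<Sum>v\<in>V. K u v * g0 v)) = 0"
  proof -
    have "(\<Sum>u\<in>V. 1 * (\<Sum>v\<in>V. K u v * g0 v)) = (\<Sum>v\<in>V. g0 v * (\<Sum>u\<in>V. K v u))"
      by (simp, subst sum.swap) (simp add: sum_distrib_left Ksym mult.commute)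
    also have "\<dots> = c * (\<Sum>v\<in>V. p v * g0 v)" using rows by (simp add: sum_distrib_left mult.commute mult.left_commute)
    finally show ?thesis using M0 by simp
  qed
  have o: "(\<Sum>u\<in>V. \<Sum>v\<in>V. K u v * 1 * 1) = c * P" using rows unfolding P_def by (simp add: sum_distrib_left)
  have Ne: "(\<Sum>u\<in>V. p u * (g u)^2) = (\<Sum>u\<in>V. p u * (g0 u)^2) + a^2 * P"
  proof -
    have "(\<Sum>u\<in>V. p u * (g u)^2) = (\<Sum>u\<in>V. p u * (g0 u)^2 + 2 * a * (p u * g0 u) + a^2 * p u)"
      unfolding gg by (intro sum.cong refl) (simp add: algebra_simps power2_eq_square)
    also have "\<dots> = (\<Sum>u\<in>V. p u * (g0 u)^2) + 2 * a * (\<Sum>u\<in>V. p u * g0 u) + a^2 * P"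
      unfolding P_def by (simp add: sum.distrib sum_distrib_left)
    finally show ?thesis using M0 by simp
  qed
  have aP: "(\<Sum>u\<in>V. p u * g u)^2 / P = a^2 * P" unfolding a_def using P0 unfolding P_def by (simp add: power2_eq_square)
  have pr: "(\<Sum>u\<in>V. \<Sum>v\<in>V. K u v * g0 u * g0 v) \<le> c * \<gamma> * (\<Sum>u\<in>V. p u * (g0 u)^2)" by (rule perp[OF M0])
  have ar: "Q0 + 2 * a * 0 + a^2 * (c * P) \<le> c * (\<gamma> * (N0 + a^2 * P) + (1 - \<gamma>) * Mv^2 / P)"
    if "Q0 \<le> c * \<gamma> * N0" "Mv^2 / P = a^2 * P" for Q0 N0 Mv
  proof -
    have "(1 - \<gamma>) * Mv^2 / P = (1 - \<gamma>) * (a^2 * P)" using that(2) by (metis times_divide_eq_right)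
    then show ?thesis using that(1) by (simp add: algebra_simps)
  qed
  show ?thesis unfolding Qe z o Ne P_def[symmetric] by (rule ar[OF pr aP])
qed

text \<open>The spectral theorem for the walk with stationary measure p, done by hand: the largest
  eigenvalue on p-centred functions is attained by a Rayleigh maximiser.\<close>
lemma quadratic_form_bound_if_eigenvalues_le:
  fixes V :: "'a set" and p :: "'a \<Rightarrow> real" and K :: "'a \<Rightarrow> 'a \<Rightarrow> real" and c \<gamma> :: real
  assumes finV: "finite V" and ppos: "\<And>u. u \<in> V \<Longrightarrow> p u > 0"
    and Ksym: "\<And>u v. K u v = K v u" and c0: "c > 0"
    and rows: "\<And>u. u \<in> V \<Longrightarrow> (\<Sum>v\<in>V. K u v) = c * p u"
    and P0: "(\<Sum>u\<in>V. p u) > 0"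
    and eig_le: "\<And>h R. (\<Sum>u\<in>V. p u * h u) = 0 \<Longrightarrow> (\<Sum>u\<in>V. p u * (h u)^2) = 1
        \<Longrightarrow> (\<forall>u\<in>V. (\<Sum>v\<in>V. K u v * h v) = c * R * p u * h u) \<Longrightarrow> R \<le> \<gamma>"
  shows "(\<Sum>u\<in>V. \<Sum>v\<in>V. K u v * g u * g v)
    \<le> c * (\<gamma> * (\<Sum>u\<in>V. p u * (g u)^2) + (1 - \<gamma>) * (\<Sum>u\<in>V. p u * g u)^2 / (\<Sum>u\<in>V. p u))"
proof (rule quadratic_form_bound_uncentered[OF finV Ksym rows P0])
  fix g :: "'a \<Rightarrow> real" assume Mg: "(\<Sum>u\<in>V. p u * g u) = 0"
  define N where "N = (\<Sum>u\<in>V. p u * (g u)^2)"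
  show "(\<Sum>u\<in>V. \<Sum>v\<in>V. K u v * g u * g v) \<le> c * \<gamma> * N"
  proof (cases "\<exists>u0\<in>V. g u0 \<noteq> 0")
    case False
    then show ?thesis unfolding N_def by simp
  next
    case True
    then obtain u0 where u0: "u0 \<in> V" "g u0 \<noteq> 0" by blast
    obtain h where Mh: "(\<Sum>u\<in>V. p u * h u) = 0" and Nh: "(\<Sum>u\<in>V. p u * (h u)^2) = 1"
      and hmax: "\<And>g. (\<Sum>u\<in>V. p u * g u) = 0 \<Longrightarrow> (\<Sum>u\<in>V. \<Sum>v\<in>V. K u v * g u * g v)
        \<le> (\<Sum>u\<in>V. \<Sum>v\<in>V. K u v * h u * h v) * (\<Sum>u\<in>V. p u * (g u)^2)"
      using rayleigh_maximiser_exists[OF finV ppos Mg u0] by blast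
    define R where "R = (\<Sum>u\<in>V. \<Sum>v\<in>V. K u v * h u * h v) / c"
    have "\<forall>u\<in>V. (\<Sum>v\<in>V. K u v * h v) = c * R * p u * h u"
      using rayleigh_maximiser_eigenvector[OF finV ppos Ksym rows Mh Nh hmax] c0
      unfolding R_def by simp
    then have "R \<le> \<gamma>" by (rule eig_le[OF Mh Nh])
    moreover have "N \<ge> 0" unfolding N_def using ppos
      by (intro sum_nonneg mult_nonneg_nonneg) (auto simp: less_imp_le)
    ultimately have "c * R * N \<le> c * \<gamma> * N" using c0 by (intro mult_right_mono) auto
    moreover have "(\<Sum>u\<in>V. \<Sum>v\<in>V. K u v * g u * g v) \<le> c * R * N"
      using hmax[OF Mg] c0 unfolding R_def N_def by simp
    ultimately show ?thesis by linarith
  qed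
qed

lemma eigenvector_const_on_edges:
  fixes V :: "'a set" and p :: "'a \<Rightarrow> real" and K :: "'a \<Rightarrow> 'a \<Rightarrow> real" and c R :: real
  assumes finV: "finite V"
    and Ksym: "\<And>u v. K u v = K v u" and Knn: "\<And>u v. K u v \<ge> 0"
    and rows: "\<And>u. u \<in> V \<Longrightarrow> (\<Sum>v\<in>V. K u v) = c * p u"
    and eig: "\<And>u. u \<in> V \<Longrightarrow> (\<Sum>v\<in>V. K u v * h v) = c * R * p u * h u"
    and R1: "R \<ge> 1" and c0: "c \<ge> 0" and N0: "(\<Sum>u\<in>V. p u * (h u)^2) \<ge> 0"
    and uv: "u \<in> V" "v \<in> V" "K u v > 0"
  shows "h u = h v"
proof -
  define N where "N = (\<Sum>u\<in>V. p u * (h u)^2)"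
  have Q: "(\<Sum>u\<in>V. \<Sum>v\<in>V. K u v * h u * h v) = c * R * N"
  proof -
    have "(\<Sum>u\<in>V. \<Sum>v\<in>V. K u v * h u * h v) = (\<Sum>u\<in>V. h u * (\<Sum>v\<in>V. K u v * h v))"
      by (simp add: sum_distrib_left mult.commute mult.left_commute)
    also have "\<dots> = (\<Sum>u\<in>V. c * R * (p u * (h u)^2))" using eig by (intro sum.cong refl) (simp add: power2_eq_square)
    finally show ?thesis unfolding N_def by (simp add: sum_distrib_left)
  qed
  have A: "(\<Sum>u\<in>V. \<Sum>v\<in>V. K u v * (h u - h v)^2) = 2 * c * N - 2 * (\<Sum>u\<in>V. \<Sum>v\<in>V. K u v * h u * h v)"
  proof -
    have "(\<Sum>u\<in>V. \<Sum>v\<in>V. K u v * (h u - h v)^2) = (\<Sum>u\<in>V. \<Sum>v\<in>V. K u v * (h u)^2 + K u v * (h v)^2 - 2 * (K u v * h u * h v))"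
      by (intro sum.cong refl) (simp add: power2_eq_square algebra_simps)
    also have "\<dots> = (\<Sum>u\<in>V. \<Sum>v\<in>V. K u v * (h u)^2) + (\<Sum>u\<in>V. \<Sum>v\<in>V. K u v * (h v)^2) - 2 * (\<Sum>u\<in>V. \<Sum>v\<in>V. K u v * h u * h v)"
      by (simp add: sum.distrib sum_subtractf sum_distrib_left)
    also have "(\<Sum>u\<in>V. \<Sum>v\<in>V. K u v * (h u)^2) = c * N"
      unfolding N_def using rows by (simp add: sum_distrib_right[symmetric] sum_distrib_left mult.assoc)
    also have "(\<Sum>u\<in>V. \<Sum>v\<in>V. K u v * (h v)^2) = (\<Sum>v\<in>V. \<Sum>u\<in>V. K v u * (h v)^2)"
      by (subst sum.swap) (simp add: Ksym)
    also have "\<dots> = c * N"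
      unfolding N_def using rows by (simp add: sum_distrib_right[symmetric] sum_distrib_left mult.assoc)
    finally show ?thesis by simp
  qed
  have "2 * c * N - 2 * (c * R * N) \<le> 0"
  proof -
    have "c * N * 1 \<le> c * N * R" using R1 c0 N0 unfolding N_def
      by (intro mult_left_mono mult_nonneg_nonneg) auto
    then have "c * N \<le> c * R * N" by (simp add: mult.commute mult.left_commute)
    then show ?thesis by simp
  qed
  then have S0: "(\<Sum>u\<in>V. \<Sum>v\<in>V. K u v * (h u - h v)^2) \<le> 0" using A Q by simp
  have nn: "\<And>u v. 0 \<le> K u v * (h u - h v)^2" using Knn by simp
  have "(\<Sum>u\<in>V. \<Sum>v\<in>V. K u v * (h u - h v)^2) = 0"
    using S0 by (meson antisym nn sum_nonneg)
  then have "\<forall>u\<in>V. (\<Sum>v\<in>V. K u v * (h u - h v)^2) = 0"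
    using sum_nonneg_eq_0_iff[OF finV, of "\<lambda>u. \<Sum>v\<in>V. K u v * (h u - h v)^2"] nn by (simp add: sum_nonneg)
  then have "(\<Sum>v\<in>V. K u v * (h u - h v)^2) = 0" using uv by auto
  then have "K u v * (h u - h v)^2 = 0" using sum_nonneg_eq_0_iff[OF finV, of "\<lambda>v. K u v * (h u - h v)^2"] nn uv by auto
  then show ?thesis using uv by simp
qed

section \<open>Expansion of links\<close>

lemma sum_Diff_singleton_if: "finite A \<Longrightarrow> (\<Sum>x\<in>A - {a}. f x) = (\<Sum>x\<in>A. if x \<noteq> a then f x else 0)"
proof -
  assume "finite A"
  have "A - {a} = {x\<in>A. x \<noteq> a}" by auto
  then show ?thesis using \<open>finite A\<close> by (simp add: sum.inter_filter)
qed

context weighted_complex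
begin

definition link_kernel :: "'a set \<Rightarrow> 'a \<Rightarrow> 'a \<Rightarrow> real" where
  "link_kernel s u v = (if u = v then 0 else mass (insert u (insert v s)))"

lemma link_kernel_sym: "link_kernel s u v = link_kernel s v u"
  unfolding link_kernel_def by (simp add: insert_commute)

lemma link_kernel_nonneg: "link_kernel s u v \<ge> 0"
  unfolding link_kernel_def using mass_nonneg by simp

lemma link_vertices_subset: "link_vertices X s \<subseteq> vertices - s"
  unfolding link_vertices_def vertices_def by auto

lemma finite_link_vertices: "finite (link_vertices X s)"
  using link_vertices_subset finite_vertices finite_subset by blast

lemma mass_insert_nonlink: "u \<in> vertices - s \<Longrightarrow> u \<notin> link_vertices X s \<Longrightarrow> mass (insert u s) = 0"
  unfolding link_vertices_def by (auto simp: mass_nonface)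

lemma mass_insert2_nonlink: "u \<in> vertices - s \<Longrightarrow> u \<notin> link_vertices X s \<Longrightarrow> mass (insert u (insert v s)) = 0"
  unfolding link_vertices_def
  by (rule mass_nonface) (metis DiffD2 face_subset insert_commute mem_Collect_eq subset_insertI)

lemma sum_link_vertices:
  assumes "\<And>u. u \<in> vertices - s \<Longrightarrow> u \<notin> link_vertices X s \<Longrightarrow> F u = 0"
  shows "(\<Sum>u\<in>vertices - s. F u) = (\<Sum>u\<in>link_vertices X s. F u)"
  by (rule sum.mono_neutral_right) (use assms link_vertices_subset finite_vertices in auto)

lemma mass_insert_link_pos: "u \<in> link_vertices X s \<Longrightarrow> mass (insert u s) > 0"
  unfolding link_vertices_def by (simp add: mass_pos)

lemma sum_link_kernel:
  assumes sX: "finite s" and u: "u \<in> link_vertices X s"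
  shows "(\<Sum>v\<in>vertices - insert u s. mass (insert v (insert u s)) * F v) = (\<Sum>v\<in>link_vertices X s. link_kernel s u v * F v)"
proof -
  have us: "u \<in> vertices - s" using u link_vertices_subset by auto
  have "(\<Sum>v\<in>vertices - insert u s. mass (insert v (insert u s)) * F v) = (\<Sum>v\<in>(vertices - s) - {u}. link_kernel s u v * F v)"
    by (rule sum.cong) (auto simp: link_kernel_def insert_commute)
  also have "\<dots> = (\<Sum>v\<in>vertices - s. link_kernel s u v * F v)"
    using us finite_vertices by (subst sum.remove[of "vertices - s" u]) (auto simp: link_kernel_def)
  also have "\<dots> = (\<Sum>v\<in>link_vertices X s. link_kernel s u v * F v)"
    by (rule sum_link_vertices) (auto simp: link_kernel_def mass_insert2_nonlink insert_commute)
  finally show ?thesis .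
qed

lemma link_kernel_row_sum:
  assumes sX: "finite s" and u: "u \<in> link_vertices X s"
  shows "(\<Sum>v\<in>link_vertices X s. link_kernel s u v) = (real (d - card s) - 1) * mass (insert u s)"
proof -
  have us: "u \<notin> s" using u unfolding link_vertices_def by auto
  have "(\<Sum>v\<in>link_vertices X s. link_kernel s u v * 1) = (\<Sum>v\<in>vertices - insert u s. mass (insert v (insert u s)) * 1)"
    by (rule sum_link_kernel[symmetric, OF sX u])
  also have "\<dots> = real (d - card (insert u s)) * mass (insert u s)" using sum_mass_insert by simp
  also have "real (d - card (insert u s)) = real (d - card s) - 1"
  proof -
    have "insert u s \<in> X" using u unfolding link_vertices_def by auto
    then have "card (insert u s) \<le> d" by (rule card_face_le)
    then show ?thesis using us sX by (simp add: of_nat_diff)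
  qed
  finally show ?thesis by simp
qed

lemma sum_pairs_link_kernel:
  assumes "finite s"
  shows "(\<Sum>u\<in>vertices - s. \<Sum>v\<in>vertices - s - {u}. mass (insert u (insert v s)) * g u * g v)
     = (\<Sum>u\<in>link_vertices X s. \<Sum>v\<in>link_vertices X s. link_kernel s u v * g u * g v)"
proof -
  have "(\<Sum>u\<in>vertices - s. \<Sum>v\<in>vertices - s - {u}. mass (insert u (insert v s)) * g u * g v)
      = (\<Sum>u\<in>vertices - s. \<Sum>v\<in>vertices - s. link_kernel s u v * g u * g v)"
  proof (rule sum.cong[OF refl])
    fix u assume us: "u \<in> vertices - s"
    have "(\<Sum>v\<in>vertices - s. link_kernel s u v * g u * g v) = link_kernel s u u * g u * g u + (\<Sum>v\<in>vertices - s - {u}. link_kernel s u v * g u * g v)"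
      using us finite_vertices by (subst sum.remove[of "vertices - s" u]) auto
    also have "\<dots> = (\<Sum>v\<in>vertices - s - {u}. mass (insert u (insert v s)) * g u * g v)"
    proof -
      have "(\<Sum>v\<in>vertices - s - {u}. link_kernel s u v * g u * g v) = (\<Sum>v\<in>vertices - s - {u}. mass (insert u (insert v s)) * g u * g v)"
      proof (rule sum.cong[OF refl])
        fix v assume "v \<in> vertices - s - {u}"
        then have "u \<noteq> v" by auto
        then show "link_kernel s u v * g u * g v = mass (insert u (insert v s)) * g u * g v" by (simp add: link_kernel_def)
      qed
      then show ?thesis by (simp add: link_kernel_def)
    qed
    finally show "(\<Sum>v\<in>vertices - s - {u}. mass (insert u (insert v s)) * g u * g v) = (\<Sum>v\<in>vertices - s. link_kernel s u v * g u * g v)" by simp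
  qed
  also have "\<dots> = (\<Sum>u\<in>link_vertices X s. \<Sum>v\<in>vertices - s. link_kernel s u v * g u * g v)"
  proof (rule sum_link_vertices)
    fix u assume "u \<in> vertices - s" "u \<notin> link_vertices X s"
    then have "\<And>v. link_kernel s u v = 0" by (simp add: link_kernel_def mass_insert2_nonlink)
    then show "(\<Sum>v\<in>vertices - s. link_kernel s u v * g u * g v) = 0" by simp
  qed
  also have "\<dots> = (\<Sum>u\<in>link_vertices X s. \<Sum>v\<in>link_vertices X s. link_kernel s u v * g u * g v)"
  proof (rule sum.cong[OF refl], rule sum_link_vertices)
    fix u v assume "v \<in> vertices - s" "v \<notin> link_vertices X s"
    then have "mass (insert v (insert u s)) = 0" by (rule mass_insert2_nonlink)
    then have "link_kernel s u v = 0" by (simp add: link_kernel_def insert_commute)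
    then show "link_kernel s u v * g u * g v = 0" by simp
  qed
  finally show ?thesis .
qed

lemma link_expansion_iff:
  assumes "finite s"
  shows "link_expansion s \<gamma> \<longleftrightarrow> (\<forall>g.
       (\<Sum>u\<in>link_vertices X s. \<Sum>v\<in>link_vertices X s. link_kernel s u v * g u * g v)
     \<le> (real (d - card s) - 1) * (\<gamma> * (\<Sum>u\<in>link_vertices X s. mass (insert u s) * (g u)^2)
       + (1 - \<gamma>) * (\<Sum>u\<in>link_vertices X s. mass (insert u s) * g u)^2
           / (\<Sum>u\<in>link_vertices X s. mass (insert u s))))"
proof -
  have P: "(\<Sum>u\<in>link_vertices X s. mass (insert u s)) = real (d - card s) * mass s"
    using sum_mass_insert[of s] sum_link_vertices[of s "\<lambda>u. mass (insert u s)"] mass_insert_nonlink by simp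
  have N: "(\<Sum>u\<in>vertices - s. mass (insert u s) * (g u)^2) = (\<Sum>u\<in>link_vertices X s. mass (insert u s) * (g u)^2)" for g
    by (rule sum_link_vertices) (simp add: mass_insert_nonlink)
  have M: "(\<Sum>u\<in>vertices - s. mass (insert u s) * g u) = (\<Sum>u\<in>link_vertices X s. mass (insert u s) * g u)" for g
    by (rule sum_link_vertices) (simp add: mass_insert_nonlink)
  show ?thesis unfolding link_expansion_def sum_pairs_link_kernel[OF assms] N M P ..
qed

lemma garland_link:
  assumes fs: "finite s" and cs: "card s + 2 \<le> d"
  shows "real (d - card s - 2) * (\<Sum>u\<in>vertices - s. \<Sum>v\<in>vertices - s - {u}. mass (insert u (insert v s)) * h u * h v)
     = (\<Sum>u\<in>vertices - s. \<Sum>v\<in>vertices - insert u s. \<Sum>v'\<in>vertices - insert u s - {v}. mass (insert v (insert v' (insert u s))) * h v * h v')"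
proof -
  define A where "A = vertices - s"
  have fA: "finite A" unfolding A_def using finite_vertices by simp
  define T where "T u v v' = (if v \<noteq> u \<and> v' \<noteq> u \<and> v' \<noteq> v then mass (insert u (insert v (insert v' s))) * h v * h v' else 0)" for u v v'
  have R: "(\<Sum>u\<in>vertices - s. \<Sum>v\<in>vertices - insert u s. \<Sum>v'\<in>vertices - insert u s - {v}. mass (insert v (insert v' (insert u s))) * h v * h v')
      = (\<Sum>u\<in>A. \<Sum>v\<in>A. \<Sum>v'\<in>A. T u v v')"
  proof (rule sum.cong)
    show "vertices - s = A" unfolding A_def ..
  next
    fix u assume "u \<in> A"
    have e1: "vertices - insert u s = {v\<in>A. v \<noteq> u}" unfolding A_def by auto
    have "(\<Sum>v\<in>vertices - insert u s. \<Sum>v'\<in>vertices - insert u s - {v}. mass (insert v (insert v' (insert u s))) * h v * h v')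
       = (\<Sum>v\<in>A. if v \<noteq> u then (\<Sum>v'\<in>{v'\<in>A. v' \<noteq> u \<and> v' \<noteq> v}. mass (insert v (insert v' (insert u s))) * h v * h v') else 0)"
      unfolding e1 using fA by (subst sum.inter_filter[symmetric]) (auto intro!: sum.cong)
    also have "\<dots> = (\<Sum>v\<in>A. \<Sum>v'\<in>A. T u v v')"
    proof (rule sum.cong[OF refl])
      fix v assume "v \<in> A"
      show "(if v \<noteq> u then (\<Sum>v'\<in>{v'\<in>A. v' \<noteq> u \<and> v' \<noteq> v}. mass (insert v (insert v' (insert u s))) * h v * h v') else 0)
          = (\<Sum>v'\<in>A. T u v v')"
        unfolding T_def using fA by (subst sum.inter_filter) (auto simp: insert_commute intro!: sum.cong)
    qed
    finally show "(\<Sum>v\<in>vertices - insert u s. \<Sum>v'\<in>vertices - insert u s - {v}. mass (insert v (insert v' (insert u s))) * h v * h v')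
       = (\<Sum>v\<in>A. \<Sum>v'\<in>A. T u v v')" .
  qed
  have sw: "(\<Sum>u\<in>A. \<Sum>v\<in>A. \<Sum>v'\<in>A. T u v v') = (\<Sum>v\<in>A. \<Sum>v'\<in>A. \<Sum>u\<in>A. T u v v')"
    by (subst sum.swap) (rule sum.cong[OF refl], rule sum.swap)
  have inner: "(\<Sum>u\<in>A. T u v v') = (if v' \<noteq> v then real (d - card s - 2) * (mass (insert v (insert v' s)) * h v * h v') else 0)"
    if v: "v \<in> A" "v' \<in> A" for v v'
  proof (cases "v' = v")
    case True then show ?thesis unfolding T_def by simp
  next
    case False
    define y where "y = insert v (insert v' s)"
    have Ay: "{u\<in>A. v \<noteq> u \<and> v' \<noteq> u} = vertices - y" unfolding y_def A_def by auto
    have cy: "card y = card s + 2" unfolding y_def using v False fs unfolding A_def by auto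
    have "(\<Sum>u\<in>A. T u v v') = (\<Sum>u\<in>{u\<in>A. v \<noteq> u \<and> v' \<noteq> u}. mass (insert u y) * (h v * h v'))"
      unfolding T_def y_def using fA False by (subst sum.inter_filter) (auto intro!: sum.cong)
    also have "\<dots> = (\<Sum>u\<in>vertices - y. mass (insert u y)) * (h v * h v')" unfolding Ay by (simp add: sum_distrib_right)
    also have "\<dots> = real (d - card s - 2) * (mass y * h v * h v')" using sum_mass_insert[of y] cy by simp
    finally show ?thesis using False unfolding y_def by simp
  qed
  have L: "real (d - card s - 2) * (\<Sum>u\<in>vertices - s. \<Sum>v\<in>vertices - s - {u}. mass (insert u (insert v s)) * h u * h v)
     = (\<Sum>v\<in>A. \<Sum>v'\<in>A. if v' \<noteq> v then real (d - card s - 2) * (mass (insert v (insert v' s)) * h v * h v') else 0)"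
  proof -
    have "\<And>v. (\<Sum>v'\<in>A - {v}. mass (insert v (insert v' s)) * h v * h v') = (\<Sum>v'\<in>A. if v' \<noteq> v then mass (insert v (insert v' s)) * h v * h v' else 0)"
      using fA by (rule sum_Diff_singleton_if)
    then show ?thesis unfolding A_def[symmetric]
      by (simp add: sum_distrib_left if_distrib cong: if_cong)
  qed
  show ?thesis unfolding R sw L using inner by (auto intro!: sum.cong)
qed

lemma link_connected_const:
  assumes conn: "graph_connected (link_vertices X s) (link_edge X s)"
    and edge: "\<And>u v. u \<in> link_vertices X s \<Longrightarrow> v \<in> link_vertices X s \<Longrightarrow> link_edge X s u v \<Longrightarrow> h u = h v"
    and u: "u \<in> link_vertices X s" and v: "v \<in> link_vertices X s"
  shows "h u = h v"
proof -
  let ?V = "link_vertices X s"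
  have "(\<lambda>a b. a \<in> ?V \<and> b \<in> ?V \<and> link_edge X s a b)\<^sup>*\<^sup>* u v"
    using conn u v unfolding graph_connected_def by blast
  then show ?thesis
  proof (induction rule: rtranclp_induct)
    case base then show ?case by simp
  next
    case (step y z) then show ?case using edge by metis
  qed
qed

lemma link_kernel_edge_pos: "link_edge X s u v \<Longrightarrow> link_kernel s u v > 0"
  unfolding link_edge_def link_kernel_def by (simp add: mass_pos)

lemma sum_link_mass_pos:
  assumes sX: "s \<in> X" and cs: "card s < d"
  shows "(\<Sum>u\<in>link_vertices X s. mass (insert u s)) > 0"
proof -
  obtain t where t: "t \<in> X" "s \<subseteq> t" "card t = d" using face_extends_to_top[OF sX] by blast
  have "card s < card t" using t cs by simp
  then have "s \<noteq> t" by auto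
  then obtain u where "u \<in> t" "u \<notin> s" using t by auto
  then have uV: "u \<in> link_vertices X s" unfolding link_vertices_def using t face_subset[of t "insert u s"] by auto
  have "mass (insert u s) \<le> (\<Sum>u\<in>link_vertices X s. mass (insert u s))"
    using finite_link_vertices uV by (intro member_le_sum) (auto simp: mass_nonneg)
  then show ?thesis using mass_insert_link_pos[OF uV] by simp
qed

lemma link_weight_eq:
  assumes cs: "card s + 2 = d" and u: "u \<in> link_vertices X s" and v: "v \<in> link_vertices X s"
  shows "link_weight X d w s u v = link_kernel s u v / mass s"
proof (cases "u = v")
  case True then show ?thesis unfolding link_weight_def link_kernel_def by simp
next
  case False
  have us: "u \<notin> s" "v \<notin> s" using u v unfolding link_vertices_def by auto
  have "d - card s = 2" using cs by simp
  then have c2: "(d - card s) choose 2 = 1" by simp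
  have "link_pi X d w s 2 {u, v} = mass (insert u (insert v s)) / mass s"
    unfolding link_pi_def mass_def[symmetric] using us False c2
    by (simp add: insert_commute)
  then show ?thesis using False unfolding link_weight_def link_kernel_def by simp
qed

text \<open>A centred, normalised eigenvector h with eigenvalue R of the random walk on the link of s,
  whose transition matrix is link_kernel s u v / ((d - |s| - 1) mass (s + u)).\<close>
definition link_eigenpair :: "'a set \<Rightarrow> real \<Rightarrow> ('a \<Rightarrow> real) \<Rightarrow> bool" where
  "link_eigenpair s R h \<longleftrightarrow>
     (\<Sum>u\<in>link_vertices X s. mass (insert u s) * h u) = 0
   \<and> (\<Sum>u\<in>link_vertices X s. mass (insert u s) * (h u)^2) = 1
   \<and> (\<forall>u\<in>link_vertices X s. (\<Sum>v\<in>link_vertices X s. link_kernel s u v * h v)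
        = (real (d - card s) - 1) * R * mass (insert u s) * h u)"

lemma link_expansion_if_eigenvalues_le:
  assumes sX: "s \<in> X" and cs: "card s + 2 \<le> d"
    and eig_le: "\<And>R h. link_eigenpair s R h \<Longrightarrow> R \<le> \<gamma>"
  shows "link_expansion s \<gamma>"
proof -
  have fs: "finite s" using finite_face sX by simp
  have "(\<Sum>u\<in>link_vertices X s. \<Sum>v\<in>link_vertices X s. link_kernel s u v * g u * g v)
     \<le> (real (d - card s) - 1) * (\<gamma> * (\<Sum>u\<in>link_vertices X s. mass (insert u s) * (g u)^2)
       + (1 - \<gamma>) * (\<Sum>u\<in>link_vertices X s. mass (insert u s) * g u)^2
           / (\<Sum>u\<in>link_vertices X s. mass (insert u s)))" for g
  proof (rule quadratic_form_bound_if_eigenvalues_le[OF finite_link_vertices])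
    show "real (d - card s) - 1 > 0" using cs by (simp add: of_nat_diff)
    show "(\<Sum>v\<in>link_vertices X s. link_kernel s u v) = (real (d - card s) - 1) * mass (insert u s)"
      if "u \<in> link_vertices X s" for u
      using link_kernel_row_sum[OF fs that] .
    show "(\<Sum>u\<in>link_vertices X s. mass (insert u s)) > 0"
      using sum_link_mass_pos[OF sX] cs by simp
  qed (use eig_le link_kernel_sym mass_insert_link_pos in \<open>auto simp: link_eigenpair_def\<close>)
  then show ?thesis unfolding link_expansion_iff[OF fs] by blast
qed

lemma link_eigenpair_quadratic_form:
  assumes "link_eigenpair s R h"
  shows "(\<Sum>u\<in>link_vertices X s. \<Sum>v\<in>link_vertices X s. link_kernel s u v * h u * h v)
       = (real (d - card s) - 1) * R"
proof -
  let ?V = "link_vertices X s" and ?c = "real (d - card s) - 1"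
  have "(\<Sum>u\<in>?V. \<Sum>v\<in>?V. link_kernel s u v * h u * h v) = (\<Sum>u\<in>?V. h u * (\<Sum>v\<in>?V. link_kernel s u v * h v))"
    by (simp add: sum_distrib_left mult_ac)
  also have "\<dots> = (\<Sum>u\<in>?V. ?c * R * (mass (insert u s) * (h u)^2))"
    using assms unfolding link_eigenpair_def by (intro sum.cong refl) (simp add: power2_eq_square)
  also have "\<dots> = ?c * R"
    using assms unfolding link_eigenpair_def by (simp add: sum_distrib_left[symmetric])
  finally show ?thesis .
qed

lemma link_eigenpair_sums:
  assumes sX: "s \<in> X" and cs: "card s + 2 \<le> d" and eig: "link_eigenpair s R h"
  defines "c \<equiv> real (d - card s) - 1"
  shows "(\<Sum>u\<in>link_vertices X s. \<Sum>v\<in>link_vertices X s. link_kernel s u v * (h v)^2) = c"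
    and "(\<Sum>u\<in>link_vertices X s. (c * R * mass (insert u s) * h u)^2 / (c * mass (insert u s))) = c * R^2"
proof -
  let ?V = "link_vertices X s"
  have fs: "finite s" using finite_face sX by simp
  have c1: "c > 0" unfolding c_def using cs by (simp add: of_nat_diff)
  have Nh: "(\<Sum>u\<in>?V. mass (insert u s) * (h u)^2) = 1"
    using eig unfolding link_eigenpair_def by simp
  have "(\<Sum>u\<in>?V. \<Sum>v\<in>?V. link_kernel s u v * (h v)^2) = (\<Sum>v\<in>?V. (h v)^2 * (\<Sum>u\<in>?V. link_kernel s v u))"
    by (subst sum.swap) (simp add: sum_distrib_left link_kernel_sym mult.commute)
  also have "\<dots> = c * (\<Sum>u\<in>?V. mass (insert u s) * (h u)^2)"
    using link_kernel_row_sum[OF fs] unfolding c_def by (simp add: sum_distrib_left mult_ac)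
  finally show "(\<Sum>u\<in>?V. \<Sum>v\<in>?V. link_kernel s u v * (h v)^2) = c" using Nh by simp
  have "(\<Sum>u\<in>?V. (c * R * mass (insert u s) * h u)^2 / (c * mass (insert u s)))
      = (\<Sum>u\<in>?V. c * R^2 * (mass (insert u s) * (h u)^2))"
    using c1 mass_insert_link_pos
    by (intro sum.cong refl) (auto simp: power2_eq_square field_simps dest: mass_insert_link_pos)
  then show "(\<Sum>u\<in>?V. (c * R * mass (insert u s) * h u)^2 / (c * mass (insert u s))) = c * R^2"
    using Nh by (simp add: sum_distrib_left[symmetric])
qed

lemma link_expansion_insert_eigenpair:
  assumes sX: "s \<in> X" and cs: "card s + 3 \<le> d" and u: "u \<in> link_vertices X s"
    and exp_link: "link_expansion (insert u s) \<mu>" and eig: "link_eigenpair s R h"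
  defines "c \<equiv> real (d - card s) - 1"
  shows "(\<Sum>v\<in>vertices - insert u s. \<Sum>v'\<in>vertices - insert u s - {v}.
        mass (insert v (insert v' (insert u s))) * h v * h v')
    \<le> (c - 1) * (\<mu> * (\<Sum>v\<in>link_vertices X s. link_kernel s u v * (h v)^2)
        + (1 - \<mu>) * (c * R * mass (insert u s) * h u)^2 / (c * mass (insert u s)))"
proof -
  have fs: "finite s" using finite_face sX by simp
  have us: "u \<notin> s" using u unfolding link_vertices_def by auto
  have cus: "card (insert u s) = card s + 1" using us fs by simp
  have e1: "real (d - card (insert u s)) - 1 = c - 1"
    unfolding c_def cus using cs by (simp add: of_nat_diff)
  have e2: "real (d - card (insert u s)) * mass (insert u s) = c * mass (insert u s)"
    unfolding c_def cus using cs by (simp add: of_nat_diff)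
  have s1: "(\<Sum>v\<in>vertices - insert u s. mass (insert v (insert u s)) * (h v)^2)
      = (\<Sum>v\<in>link_vertices X s. link_kernel s u v * (h v)^2)"
    by (rule sum_link_kernel[OF fs u])
  have s2: "(\<Sum>v\<in>vertices - insert u s. mass (insert v (insert u s)) * h v) = c * R * mass (insert u s) * h u"
    using sum_link_kernel[OF fs u, of h] eig u unfolding link_eigenpair_def c_def by simp
  have "(\<Sum>v\<in>vertices - insert u s. \<Sum>v'\<in>vertices - insert u s - {v}.
        mass (insert v (insert v' (insert u s))) * h v * h v')
    \<le> (real (d - card (insert u s)) - 1) * (\<mu> * (\<Sum>v\<in>vertices - insert u s. mass (insert v (insert u s)) * (h v)^2)
      + (1 - \<mu>) * (\<Sum>v\<in>vertices - insert u s. mass (insert v (insert u s)) * h v)^2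
        / (real (d - card (insert u s)) * mass (insert u s)))"
    using exp_link unfolding link_expansion_def by blast
  then show ?thesis unfolding e1 e2 s1 s2 .
qed

text \<open>Garland's method inside the link of s: the links of the faces s + u bound the
  quadratic form of an eigenvector of the link of s.\<close>
lemma garland_link_eigenpair:
  assumes sX: "s \<in> X" and cs: "card s + 3 \<le> d"
    and exp_links: "\<And>u. u \<in> link_vertices X s \<Longrightarrow> link_expansion (insert u s) \<mu>"
    and eig: "link_eigenpair s R h"
  defines "c \<equiv> real (d - card s) - 1"
  shows "(c - 1) * (c * R) \<le> (c - 1) * (\<mu> * c + (1 - \<mu>) * (c * R^2))"
proof -
  let ?V = "link_vertices X s"
  define A where "A u = (\<Sum>v\<in>?V. link_kernel s u v * (h v)^2)" for u
  define B where "B u = (c * R * mass (insert u s) * h u)^2 / (c * mass (insert u s))" for u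
  have fs: "finite s" using finite_face sX by simp
  have "real (d - card s - 2) * (c * R) = real (d - card s - 2)
      * (\<Sum>u\<in>vertices - s. \<Sum>v\<in>vertices - s - {u}. mass (insert u (insert v s)) * h u * h v)"
    unfolding sum_pairs_link_kernel[OF fs] link_eigenpair_quadratic_form[OF eig] c_def ..
  also have "\<dots> = (\<Sum>u\<in>vertices - s. \<Sum>v\<in>vertices - insert u s.
      \<Sum>v'\<in>vertices - insert u s - {v}. mass (insert v (insert v' (insert u s))) * h v * h v')"
    by (rule garland_link[OF fs]) (use cs in simp)
  also have "\<dots> = (\<Sum>u\<in>?V. \<Sum>v\<in>vertices - insert u s.
      \<Sum>v'\<in>vertices - insert u s - {v}. mass (insert v (insert v' (insert u s))) * h v * h v')"
  proof (rule sum_link_vertices)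
    fix u assume "u \<in> vertices - s" "u \<notin> link_vertices X s"
    then have "insert u s \<notin> X" unfolding link_vertices_def by auto
    then have "\<And>v v'. mass (insert v (insert v' (insert u s))) = 0"
      by (metis mass_nonface face_subset subset_insertI insert_subset)
    then show "(\<Sum>v\<in>vertices - insert u s. \<Sum>v'\<in>vertices - insert u s - {v}.
        mass (insert v (insert v' (insert u s))) * h v * h v') = 0" by simp
  qed
  also have "\<dots> \<le> (\<Sum>u\<in>?V. (c - 1) * (\<mu> * A u + (1 - \<mu>) * B u))"
    using link_expansion_insert_eigenpair[OF sX cs _ exp_links eig] unfolding A_def B_def c_def
    by (intro sum_mono) (simp add: times_divide_eq_right)
  also have "\<dots> = (c - 1) * (\<mu> * (\<Sum>u\<in>?V. A u) + (1 - \<mu>) * (\<Sum>u\<in>?V. B u))"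
    by (simp only: sum_distrib_left[symmetric] sum.distrib distrib_left mult.assoc)
  also have "\<dots> = (c - 1) * (\<mu> * c + (1 - \<mu>) * (c * R^2))"
    using link_eigenpair_sums[OF sX _ eig] cs unfolding A_def B_def c_def by simp
  finally have "real (d - card s - 2) * (c * R) \<le> (c - 1) * (\<mu> * c + (1 - \<mu>) * (c * R^2))" .
  moreover have "real (d - card s - 2) = c - 1" unfolding c_def using cs by (simp add: of_nat_diff)
  ultimately show ?thesis by simp
qed

lemma link_eigenvalue_le_quadratic:
  assumes sX: "s \<in> X" and cs: "card s + 3 \<le> d"
    and exp_links: "\<And>u. u \<in> link_vertices X s \<Longrightarrow> link_expansion (insert u s) \<mu>"
    and eig: "link_eigenpair s R h"
  shows "R \<le> \<mu> + (1 - \<mu>) * R^2"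
proof -
  define c where "c = real (d - card s) - 1"
  have c1: "c > 1" unfolding c_def using cs by (simp add: of_nat_diff)
  have "(c - 1) * (c * R) \<le> (c - 1) * (\<mu> * c + (1 - \<mu>) * (c * R^2))"
    using garland_link_eigenpair[OF sX cs exp_links eig] unfolding c_def .
  then have "c * R \<le> \<mu> * c + (1 - \<mu>) * (c * R^2)" using c1 by (simp add: mult_le_cancel_left)
  then have "c * R \<le> c * (\<mu> + (1 - \<mu>) * R^2)" by (simp add: algebra_simps)
  then show ?thesis using c1 by (simp add: mult_le_cancel_left)
qed

text \<open>The eigenvalue 1 belongs to the constants only, because the link is connected.\<close>
lemma link_eigenvalue_lt_1:
  assumes sX: "s \<in> X" and cs: "card s + 2 \<le> d"
    and conn: "graph_connected (link_vertices X s) (link_edge X s)"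
    and eig: "link_eigenpair s R h"
  shows "R < 1"
proof (rule ccontr)
  assume "\<not> R < 1"
  then have R1: "R \<ge> 1" by simp
  define V where "V = link_vertices X s"
  define p where "p u = mass (insert u s)" for u
  define c where "c = real (d - card s) - 1"
  have fs: "finite s" using finite_face sX by simp
  have Mh: "(\<Sum>u\<in>V. p u * h u) = 0" and Nh: "(\<Sum>u\<in>V. p u * (h u)^2) = 1"
    and eigh: "\<And>u. u \<in> V \<Longrightarrow> (\<Sum>v\<in>V. link_kernel s u v * h v) = c * R * p u * h u"
    using eig unfolding link_eigenpair_def V_def p_def c_def by auto
  have rows: "(\<Sum>v\<in>V. link_kernel s u v) = c * p u" if "u \<in> V" for u
    using link_kernel_row_sum[OF fs] that unfolding V_def p_def c_def by simp
  have c0: "c \<ge> 0" unfolding c_def using cs by (simp add: of_nat_diff)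
  have N0: "(\<Sum>u\<in>V. p u * (h u)^2) \<ge> 0" using Nh by simp
  have edge: "h u = h v" if "u \<in> link_vertices X s" "v \<in> link_vertices X s" "link_edge X s u v" for u v
    using eigenvector_const_on_edges[OF finite_link_vertices link_kernel_sym link_kernel_nonneg
        rows[unfolded V_def] eigh[unfolded V_def] R1 c0 N0[unfolded V_def]]
      that link_kernel_edge_pos[OF that(3)]
    by blast
  have "V \<noteq> {}" using Nh by auto
  then obtain u0 where u0: "u0 \<in> V" by blast
  have const: "h v = h u0" if "v \<in> V" for v
    using link_connected_const[where h=h, OF conn edge] u0 that unfolding V_def by blast
  then have "h u0 * (\<Sum>u\<in>V. p u) = 0" using Mh by (simp add: sum_distrib_left mult.commute)
  moreover have "(\<Sum>u\<in>V. p u) > 0"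
    using sum_link_mass_pos[OF sX] cs unfolding V_def p_def by simp
  ultimately have "h u0 = 0" by simp
  then show False using Nh const by simp
qed

text \<open>Oppenheim's trickling-down step: R < 1 and R \<le> \<mu> + (1 - \<mu>) R^2 force R \<le> \<mu>/(1 - \<mu>).\<close>
lemma link_expansion_trickle_down:
  assumes sX: "s \<in> X" and cs: "card s + 3 \<le> d" and mu1: "\<mu> < 1"
    and exp_links: "\<And>u. u \<in> link_vertices X s \<Longrightarrow> link_expansion (insert u s) \<mu>"
    and conn: "graph_connected (link_vertices X s) (link_edge X s)"
  shows "link_expansion s (\<mu> / (1 - \<mu>))"
proof (rule link_expansion_if_eigenvalues_le[OF sX])
  fix R h assume eig: "link_eigenpair s R h"
  have "R < 1" using link_eigenvalue_lt_1[OF sX _ conn eig] cs by simp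
  moreover have "(R - 1) * ((1 - \<mu>) * R - \<mu>) = \<mu> + (1 - \<mu>) * R^2 - R"
    by (simp add: algebra_simps power2_eq_square)
  ultimately have "(R - 1) * ((1 - \<mu>) * R - \<mu>) \<ge> 0"
    using link_eigenvalue_le_quadratic[OF sX cs exp_links eig] by linarith
  with \<open>R < 1\<close> have "(1 - \<mu>) * R \<le> \<mu>" by (simp add: zero_le_mult_iff)
  then show "R \<le> \<mu> / (1 - \<mu>)" using mu1 by (simp add: pos_le_divide_eq mult.commute)
qed (use cs in simp)

lemma link_norm_adj_eq:
  assumes sX: "s \<in> X" and cs: "card s + 2 = d"
    and u: "u \<in> link_vertices X s" and v: "v \<in> link_vertices X s"
  shows "norm_adj (link_vertices X s) (link_weight X d w s) u v = link_kernel s u v / mass (insert u s)"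
proof -
  have fs: "finite s" using finite_face sX by simp
  have "(\<Sum>v'\<in>link_vertices X s. link_weight X d w s u v')
      = (\<Sum>v'\<in>link_vertices X s. link_kernel s u v' / mass s)"
    using u by (intro sum.cong refl link_weight_eq[OF cs]) auto
  also have "\<dots> = mass (insert u s) / mass s"
    using link_kernel_row_sum[OF fs u] cs by (simp add: sum_divide_distrib[symmetric])
  finally show ?thesis
    unfolding norm_adj_def using link_weight_eq[OF cs u v] mass_pos[OF sX] mass_insert_link_pos[OF u]
    by simp
qed

lemma sum_link_norm_adj:
  assumes sX: "s \<in> X" and cs: "card s + 2 = d" and u: "u \<in> link_vertices X s"
  shows "(\<Sum>v\<in>link_vertices X s. norm_adj (link_vertices X s) (link_weight X d w s) u v * g v)
    = (\<Sum>v\<in>link_vertices X s. link_kernel s u v * g v) / mass (insert u s)"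
  using link_norm_adj_eq[OF sX cs u] by (simp add: sum_divide_distrib)

lemma link_constant_is_eigenpair:
  assumes sX: "s \<in> X" and cs: "card s + 2 = d"
  shows "is_eigenpair (link_vertices X s) (norm_adj (link_vertices X s) (link_weight X d w s)) 1 (\<lambda>_. 1)"
  unfolding is_eigenpair_def
proof (intro conjI ballI)
  have fs: "finite s" using finite_face sX by simp
  have "link_vertices X s \<noteq> {}" using sum_link_mass_pos[OF sX] cs by auto
  then show "\<exists>v\<in>link_vertices X s. (1::real) \<noteq> 0" by auto
  fix u assume u: "u \<in> link_vertices X s"
  have "(\<Sum>v\<in>link_vertices X s. norm_adj (link_vertices X s) (link_weight X d w s) u v * 1)
      = (\<Sum>v\<in>link_vertices X s. link_kernel s u v * 1) / mass (insert u s)"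
    by (rule sum_link_norm_adj[OF sX cs u])
  moreover have "real (d - card s) - 1 = 1" using cs by auto
  ultimately show "(\<Sum>v\<in>link_vertices X s. norm_adj (link_vertices X s) (link_weight X d w s) u v * 1) = 1 * 1"
    using link_kernel_row_sum[OF fs u] mass_insert_link_pos[OF u] by simp
qed

lemma link_eigenpair_is_eigenpair:
  assumes sX: "s \<in> X" and cs: "card s + 2 = d" and eig: "link_eigenpair s R h"
  shows "is_eigenpair (link_vertices X s) (norm_adj (link_vertices X s) (link_weight X d w s)) R h"
  unfolding is_eigenpair_def
proof (intro conjI ballI)
  have Nh: "(\<Sum>u\<in>link_vertices X s. mass (insert u s) * (h u)^2) = 1"
    using eig unfolding link_eigenpair_def by simp
  show "\<exists>v\<in>link_vertices X s. h v \<noteq> 0"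
  proof (rule ccontr)
    assume "\<not> (\<exists>v\<in>link_vertices X s. h v \<noteq> 0)"
    then show False using Nh by simp
  qed
  fix u assume u: "u \<in> link_vertices X s"
  have "(\<Sum>v\<in>link_vertices X s. link_kernel s u v * h v) = R * mass (insert u s) * h u"
    using eig u cs unfolding link_eigenpair_def by auto
  then show "(\<Sum>v\<in>link_vertices X s. norm_adj (link_vertices X s) (link_weight X d w s) u v * h v) = R * h u"
    using sum_link_norm_adj[OF sX cs u] mass_insert_link_pos[OF u] by simp
qed

text \<open>On the top links the normalised adjacency operator of the link graph is exactly the walk of
  link_eigenpair, and the constants are an eigenvector with eigenvalue 1 > \<gamma>.\<close>
lemma link_expansion_top:
  assumes sX: "s \<in> X" and cs: "card s + 2 = d" and g1: "\<gamma> < 1"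
    and ose: "one_sided_expander (link_vertices X s) (link_weight X d w s) \<gamma>"
  shows "link_expansion s \<gamma>"
proof (rule link_expansion_if_eigenvalues_le[OF sX])
  fix R h assume eig: "link_eigenpair s R h"
  let ?V = "link_vertices X s"
  have Mh: "(\<Sum>u\<in>?V. mass (insert u s) * h u) = 0" and Nh: "(\<Sum>u\<in>?V. mass (insert u s) * (h u)^2) = 1"
    using eig unfolding link_eigenpair_def by auto
  show "R \<le> \<gamma>"
  proof (rule ccontr)
    assume "\<not> R \<le> \<gamma>"
    then obtain a b where ab: "a \<noteq> 0 \<or> b \<noteq> 0" and lin: "\<forall>v\<in>?V. a * 1 + b * h v = 0"
      using ose link_constant_is_eigenpair[OF sX cs] link_eigenpair_is_eigenpair[OF sX cs eig] g1
      unfolding one_sided_expander_def by (meson not_le)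
    have "?V \<noteq> {}" using Nh by auto
    then have "b \<noteq> 0" using ab lin by auto
    then have hc: "\<forall>v\<in>?V. h v = - a / b" using lin by (auto simp: field_simps)
    have "(- a / b) * (\<Sum>u\<in>?V. mass (insert u s)) = 0"
      using Mh hc by (simp add: sum_distrib_left mult.commute)
    moreover have "(\<Sum>u\<in>?V. mass (insert u s)) > 0"
      using sum_link_mass_pos[OF sX] cs by simp
    ultimately have "\<forall>v\<in>?V. h v = 0" using hc by simp
    then show False using Nh by simp
  qed
qed (use cs in simp)

end

section \<open>Trickling down and the Poincare inequality\<close>

definition poincare_const :: "real \<Rightarrow> real" where
  "poincare_const lam = (if lam \<ge> 0 then 1 - lam else 1)"

lemma trickle_denominator_pos:
  fixes lam :: real
  assumes "lam < 1" "k \<le> d - 1" "2 \<le> d"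
  shows "real (d - 1) - real k * lam > 0"
proof (cases "lam \<ge> 0")
  case True
  have "real k * lam \<le> real k * 1" using assms(1) True by (intro mult_left_mono) auto
  moreover have "real k * lam < real (d - 1) \<or> k = 0"
  proof (cases "k = 0")
    case False
    then have "real k * lam < real k * 1" using assms(1) by (intro mult_strict_left_mono) auto
    then show ?thesis using assms(2) by (simp add: of_nat_diff)
  qed simp
  ultimately show ?thesis using assms(3) by (auto simp: of_nat_diff)
next
  case False
  then have "real k * lam \<le> 0" by (simp add: mult_nonneg_nonpos)
  then show ?thesis using assms(3) by (simp add: of_nat_diff)
qed

text \<open>The spectral gap accumulated by trickling down to level j: the product of the factors
  1 - \<gamma> over the levels below j, which telescopes.\<close>
definition trickle_gap :: "nat \<Rightarrow> real \<Rightarrow> nat \<Rightarrow> real" where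
  "trickle_gap d lam j = (if j = 0 then 0 else if lam \<ge> 0 \<and> 2 \<le> d
     then (real (d - 1) - real (d - 1) * lam) / (real (d - 1) - real (d - j) * lam) else 1)"

lemma trickle_gap_le_1:
  assumes "lam < 1"
  shows "trickle_gap d lam j \<le> 1"
proof (cases "j \<noteq> 0 \<and> lam \<ge> 0 \<and> 2 \<le> d")
  case True
  have "d - j \<le> d - 1" using True by auto
  then have "real (d - 1) - real (d - j) * lam > 0"
    using trickle_denominator_pos[OF assms] True by simp
  moreover have "real (d - 1) * lam \<ge> real (d - j) * lam" using True by (intro mult_right_mono) auto
  ultimately show ?thesis unfolding trickle_gap_def using True by (simp add: divide_le_eq)
qed (auto simp: trickle_gap_def)

lemma trickle_gap_le: "lam < 1 \<Longrightarrow> trickle_gap d lam j \<le> real j"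
  using trickle_gap_le_1[of lam d j] by (cases "j = 0") (auto simp: trickle_gap_def)

lemma poincare_const_le_trickle_gap:
  assumes lam1: "lam < 1" and j: "1 \<le> j" "j \<le> d"
  shows "poincare_const lam \<le> trickle_gap d lam j"
proof (cases "lam \<ge> 0 \<and> 2 \<le> d")
  case True
  define D where "D = real (d - 1) - real (d - j) * lam"
  have D0: "D > 0" unfolding D_def using trickle_denominator_pos[OF lam1, of "d - j" d] True j by simp
  have "(1 - lam) * D \<le> (1 - lam) * real (d - 1)"
    using True lam1 unfolding D_def by (intro mult_left_mono) auto
  then have "1 - lam \<le> (real (d - 1) - real (d - 1) * lam) / D"
    using D0 by (simp add: le_divide_eq algebra_simps)
  then show ?thesis unfolding trickle_gap_def poincare_const_def D_def using True j by simp
next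
  case False
  then show ?thesis unfolding trickle_gap_def poincare_const_def using j lam1 by auto
qed

lemma trickle_gap_step:
  assumes lam1: "lam < 1" and i: "Suc (Suc i) \<le> d"
  shows "trickle_gap d lam (Suc (Suc i))
    \<le> (1 - lam / (real (d - 1) - real (d - 2 - i) * lam)) * trickle_gap d lam (Suc i)"
proof (cases "lam \<ge> 0")
  case True
  define n where "n = d - 2 - i"
  define A where "A m = real (d - 1) - real m * lam" for m
  define N where "N = real (d - 1) - real (d - 1) * lam"
  have d2: "2 \<le> d" using i by simp
  have "n \<le> d - 1" "Suc n \<le> d - 1" unfolding n_def using d2 by auto
  then have An: "A n > 0" and An1: "A (Suc n) > 0"
    unfolding A_def using trickle_denominator_pos[OF lam1 _ d2] by blast+
  have "d - Suc (Suc i) = n" "d - Suc i = Suc n" unfolding n_def using i by simp_all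
  then have g2: "trickle_gap d lam (Suc (Suc i)) = N / A n"
    and g1: "trickle_gap d lam (Suc i) = N / A (Suc n)"
    unfolding trickle_gap_def A_def N_def using True d2 by simp_all
  have "A (Suc n) = A n - lam" unfolding A_def by (simp add: algebra_simps)
  then have "1 - lam / A n = A (Suc n) / A n" using An by (simp add: field_simps)
  then have "(1 - lam / A n) * (N / A (Suc n)) = N / A n" using An An1 by simp
  then show ?thesis unfolding g1 g2 A_def n_def by simp
next
  case False
  have "d - 2 - i \<le> d - 1" "2 \<le> d" using i by auto
  then have "real (d - 1) - real (d - 2 - i) * lam > 0"
    by (rule trickle_denominator_pos[OF lam1])
  then have "lam / (real (d - 1) - real (d - 2 - i) * lam) \<le> 0"
    using False by (simp add: divide_nonpos_pos)
  then show ?thesis unfolding trickle_gap_def using False by simp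
qed

context weighted_complex
begin

lemma link_expansion_all:
  assumes TD: "is_TD X d w lam" and lam1: "lam < 1"
  shows "n + 2 \<le> d \<Longrightarrow> s \<in> X \<Longrightarrow> card s + 2 + n = d
    \<Longrightarrow> link_expansion s (lam / (real (d - 1) - real n * lam))"
proof (induction n arbitrary: s)
  case 0
  have ose: "one_sided_expander (link_vertices X s) (link_weight X d w s) (lam / real (d - 1))"
    using TD 0 unfolding is_TD_def by auto
  have "lam / real (d - 1) < 1"
  proof -
    have "real (d - 1) \<ge> 1" using 0 by (simp add: of_nat_diff)
    then show ?thesis using lam1 by (simp add: divide_less_eq)
  qed
  then show ?case using link_expansion_top[OF 0(2) _ _ ose] 0 by simp
next
  case (Suc n)
  have d2: "2 \<le> d" using Suc.prems by simp
  define A where "A = real (d - 1) - real n * lam"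
  define \<mu> where "\<mu> = lam / A"
  have Apos: "A > 0" unfolding A_def using trickle_denominator_pos[OF lam1 _ d2, of n] Suc.prems by simp
  have A1pos: "A - lam > 0"
  proof -
    have "real (d - 1) - real (Suc n) * lam > 0" using trickle_denominator_pos[OF lam1 _ d2, of "Suc n"] Suc.prems by simp
    then show ?thesis unfolding A_def by (simp add: algebra_simps)
  qed
  have mu1: "\<mu> < 1" unfolding \<mu>_def using Apos A1pos by (simp add: divide_less_eq)
  have exp_links: "link_expansion (insert u s) \<mu>" if u: "u \<in> link_vertices X s" for u
  proof -
    have us: "u \<notin> s" "insert u s \<in> X" using u unfolding link_vertices_def by auto
    have fs: "finite s" using finite_face Suc.prems(2) by simp
    have "card (insert u s) + 2 + n = d" using us fs Suc.prems(3) by simp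
    then show ?thesis unfolding \<mu>_def A_def using Suc.IH[of "insert u s"] us Suc.prems(1) by simp
  qed
  have conn: "graph_connected (link_vertices X s) (link_edge X s)"
    using TD Suc.prems unfolding is_TD_def by auto
  have "link_expansion s (\<mu> / (1 - \<mu>))" by (rule link_expansion_trickle_down[OF Suc.prems(2) _ mu1 exp_links conn]) (use Suc.prems in simp)
  moreover have "\<mu> / (1 - \<mu>) = lam / (real (d - 1) - real (Suc n) * lam)"
  proof -
    have "1 - \<mu> = (A - lam) / A" using Apos unfolding \<mu>_def by (simp add: field_simps)
    then have "\<mu> / (1 - \<mu>) = lam / (A - lam)" using Apos A1pos unfolding \<mu>_def by simp
    moreover have "A - lam = real (d - 1) - real (Suc n) * lam" unfolding A_def by (simp add: algebra_simps)
    ultimately show ?thesis by simp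
  qed
  ultimately show ?case by simp
qed

lemma down_sqnorm_bound:
  assumes TD: "is_TD X d w lam" and lam1: "lam < 1" and k1: "1 \<le> k" and kd: "k \<le> d"
    and h: "centered k h"
  shows "sqnorm (k - 1) (down h) \<le> real (d - (k - 1)) * (real k - poincare_const lam) * sqnorm k h"
proof -
  have step: "\<exists>\<gamma>. \<gamma> \<le> 1 \<and> (\<forall>s\<in>faces X i. link_expansion s \<gamma>)
      \<and> trickle_gap d lam (Suc (Suc i)) \<le> (1 - \<gamma>) * trickle_gap d lam (Suc i)"
    if i: "Suc (Suc i) \<le> k" for i
  proof (intro exI conjI)
    define n where "n = d - 2 - i"
    have d2: "2 \<le> d" using i kd by simp
    have "n \<le> d - 1" "Suc n \<le> d - 1" unfolding n_def using d2 by auto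
    then have "real (d - 1) - real n * lam > 0" "real (d - 1) - real (Suc n) * lam > 0"
      using trickle_denominator_pos[OF lam1 _ d2, of n] trickle_denominator_pos[OF lam1 _ d2, of "Suc n"]
      by blast+
    then show "lam / (real (d - 1) - real n * lam) \<le> 1" by (simp add: divide_le_eq algebra_simps)
    show "\<forall>s\<in>faces X i. link_expansion s (lam / (real (d - 1) - real n * lam))"
      using link_expansion_all[OF TD lam1, of n] i kd unfolding n_def faces_def by auto
    show "trickle_gap d lam (Suc (Suc i)) \<le> (1 - lam / (real (d - 1) - real n * lam)) * trickle_gap d lam (Suc i)"
      unfolding n_def by (rule trickle_gap_step[OF lam1]) (use i kd in simp)
  qed
  obtain i where ki: "k = Suc i" using k1 by (cases k) auto
  have "sqnorm i (down h) \<le> real (d - i) * (real (Suc i) - trickle_gap d lam (Suc i)) * sqnorm (Suc i) h"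
    by (rule down_sqnorm_local_to_global[OF kd trickle_gap_le_1[OF lam1] trickle_gap_le[OF lam1] step])
       (use ki h in auto)
  also have "\<dots> \<le> real (d - i) * (real (Suc i) - poincare_const lam) * sqnorm (Suc i) h"
    using poincare_const_le_trickle_gap[OF lam1, of k] ki kd sqnorm_nonneg
    by (intro mult_right_mono mult_left_mono) auto
  finally show ?thesis using ki by simp
qed

end

section \<open>Dirichlet form and Lipschitz functions\<close>

lemma sum_pairs_pos_part_sq:
  fixes p f :: "'b \<Rightarrow> real"
  assumes "finite A"
  shows "(\<Sum>a\<in>A. \<Sum>b\<in>A. p a * p b * (max (f a - f b) 0)^2)
    = (\<Sum>a\<in>A. p a) * (\<Sum>a\<in>A. p a * (f a)^2) - (\<Sum>a\<in>A. p a * f a)^2"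
proof -
  define S1 where "S1 = (\<Sum>a\<in>A. \<Sum>b\<in>A. p a * p b * (max (f a - f b) 0)^2)"
  have S2: "S1 = (\<Sum>a\<in>A. \<Sum>b\<in>A. p a * p b * (max (f b - f a) 0)^2)"
    unfolding S1_def by (subst sum.swap) (simp add: mult.commute)
  have mx: "\<And>t::real. (max t 0)^2 + (max (-t) 0)^2 = t^2" by (simp add: max_def power2_eq_square)
  have "(\<Sum>a\<in>A. \<Sum>b\<in>A. p a * p b * ((max (f a - f b) 0)^2 + (max (f b - f a) 0)^2))
      = S1 + (\<Sum>a\<in>A. \<Sum>b\<in>A. p a * p b * (max (f b - f a) 0)^2)"
    unfolding S1_def by (simp add: sum.distrib distrib_left)
  then have "2 * S1 = (\<Sum>a\<in>A. \<Sum>b\<in>A. p a * p b * ((max (f a - f b) 0)^2 + (max (f b - f a) 0)^2))"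
    using S2 by simp
  also have "\<dots> = (\<Sum>a\<in>A. \<Sum>b\<in>A. p a * p b * (f a - f b)^2)"
    using mx[of "f a - f b" for a b] by (simp add: mx)
  also have "\<dots> = (\<Sum>a\<in>A. \<Sum>b\<in>A. p b * (p a * (f a)^2) + p a * (p b * (f b)^2) - 2 * ((p a * f a) * (p b * f b)))"
    by (intro sum.cong refl) (simp add: power2_eq_square algebra_simps)
  also have "\<dots> = (\<Sum>a\<in>A. \<Sum>b\<in>A. p b * (p a * (f a)^2)) + (\<Sum>a\<in>A. \<Sum>b\<in>A. p a * (p b * (f b)^2))
      - 2 * (\<Sum>a\<in>A. \<Sum>b\<in>A. (p a * f a) * (p b * f b))"
    by (simp add: sum.distrib sum_subtractf sum_distrib_left)
  also have "(\<Sum>a\<in>A. \<Sum>b\<in>A. p b * (p a * (f a)^2)) = (\<Sum>a\<in>A. p a) * (\<Sum>a\<in>A. p a * (f a)^2)"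
    by (simp add: sum_distrib_right[symmetric] sum_distrib_left[symmetric] mult.commute)
  also have "(\<Sum>a\<in>A. \<Sum>b\<in>A. p a * (p b * (f b)^2)) = (\<Sum>a\<in>A. p a) * (\<Sum>a\<in>A. p a * (f a)^2)"
    by (simp add: sum_distrib_right[symmetric] sum_distrib_left[symmetric])
  also have "(\<Sum>a\<in>A. \<Sum>b\<in>A. (p a * f a) * (p b * f b)) = (\<Sum>a\<in>A. p a * f a)^2"
    by (simp add: power2_eq_square sum_product)
  finally show ?thesis unfolding S1_def by simp
qed

lemma exp_le_inverse: fixes u :: real assumes "u < 1" shows "exp u \<le> 1 / (1 - u)"
proof -
  have "1 - u \<le> exp (- u)" using exp_ge_add_one_self[of "-u"] by simp
  then have "(1 - u) * exp u \<le> exp (-u) * exp u" by (intro mult_right_mono) auto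
  then have "(1 - u) * exp u \<le> 1" by (simp add: exp_minus field_simps)
  then show ?thesis using assms by (simp add: le_divide_eq mult.commute)
qed

definition expm1_slope :: "real \<Rightarrow> real" where
  "expm1_slope u0 = 1 + u0 / 2 + u0^2 / (6 * (1 - u0))"

lemma expm1_bound:
  fixes u u0 :: real
  assumes u0: "0 \<le> u" "u \<le> u0" "u0 < 1"
  shows "exp u - 1 \<le> u * expm1_slope u0"
proof -
  obtain t where t: "\<bar>t\<bar> \<le> \<bar>u\<bar>" and e: "exp u = (\<Sum>m<3. u ^ m / fact m) + exp t / fact 3 * u ^ 3"
    using Maclaurin_exp_le[of u 3] by blast
  have s: "(\<Sum>m<3. u ^ m / fact m) = 1 + u + u^2 / 2"
    by (simp add: numeral_3_eq_3 fact_numeral eval_nat_numeral)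
  have f3: "fact 3 = (6::real)" by (simp add: fact_numeral)
  have "exp t \<le> exp u0" using t u0 by simp
  also have "\<dots> \<le> 1 / (1 - u0)" using exp_le_inverse u0 by simp
  finally have et: "exp t \<le> 1 / (1 - u0)" .
  have "exp u - 1 = u + u^2 / 2 + exp t / 6 * u^3" using e s f3 by simp
  also have "\<dots> \<le> u + u^2 / 2 + (1 / (1 - u0)) / 6 * u^3"
    using et u0 by (intro add_left_mono mult_right_mono divide_right_mono) auto
  also have "\<dots> = u * (1 + u / 2 + u^2 / (6 * (1 - u0)))" using u0 by (simp add: field_simps power2_eq_square power3_eq_cube)
  also have "\<dots> \<le> u * (1 + u0 / 2 + u0^2 / (6 * (1 - u0)))"
    using u0 by (intro mult_left_mono add_mono divide_right_mono power_mono) auto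
  finally show ?thesis unfolding expm1_slope_def .
qed

lemma pos_part_exp_diff_sq:
  fixes a b :: real
  shows "(max (exp a - exp b) 0)^2 \<le> (max (a - b) 0)^2 * exp (2 * a)"
proof (cases "b \<le> a")
  case True
  have "exp a * exp (b - a) = exp b" by (simp add: exp_diff)
  then have "exp a - exp b = exp a * (1 - exp (b - a))" by (simp add: right_diff_distrib)
  also have "\<dots> \<le> exp a * (a - b)"
  proof -
    have "1 - exp (b - a) \<le> a - b" using exp_ge_add_one_self[of "b - a"] by linarith
    then show ?thesis by (intro mult_left_mono) auto
  qed
  finally have le: "exp a - exp b \<le> exp a * (a - b)" .
  have nn: "0 \<le> exp a - exp b" using True by simp
  have "(max (exp a - exp b) 0)^2 = (exp a - exp b)^2" using nn by simp
  also have "\<dots> \<le> (exp a * (a - b))^2" using le nn by (intro power_mono) auto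
  also have "\<dots> = (max (a - b) 0)^2 * exp (2 * a)"
  proof -
    have e2: "exp (2 * a) = (exp a)^2" by (rule exp_double)
    show ?thesis using True unfolding e2 by (simp add: power_mult_distrib mult.commute)
  qed
  finally show ?thesis .
next
  case False
  then have "exp a - exp b \<le> 0" by simp
  then show ?thesis by simp
qed

context weighted_complex
begin

text \<open>The expectation of the sum that the Lipschitz condition bounds almost surely.\<close>
definition dirichlet_form :: "nat \<Rightarrow> ('a set \<Rightarrow> real) \<Rightarrow> real" where
  "dirichlet_form k g = (\<Sum>x\<in>faces X k. pi_k X d w k x *
     (\<Sum>v\<in>x. \<Sum>z\<in>vertices. link_pi X d w (x - {v}) 1 {z} * (max (g x - g (insert z (x - {v}))) 0)^2))"

lemma pi_k_mass: "pi_k X d w k x = (if card x = k then mass x / real (d choose k) else 0)"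
  unfolding pi_k_def mass_def by simp

lemma link_pi_vertex: "link_pi X d w y 1 {z} = (if z \<notin> y then mass (insert z y) / (mass y * real (d - card y)) else 0)"
  unfolding link_pi_def mass_def[symmetric] by auto

lemma sum_link_pi_vertex: assumes "y \<in> X" "card y < d"
  shows "(\<Sum>z\<in>vertices. link_pi X d w y 1 {z} * F z) = (\<Sum>z\<in>vertices - y. mass (insert z y) * F z) / (mass y * real (d - card y))"
proof -
  have "(\<Sum>z\<in>vertices. link_pi X d w y 1 {z} * F z) = (\<Sum>z\<in>vertices - y. mass (insert z y) / (mass y * real (d - card y)) * F z)"
    unfolding link_pi_vertex using finite_vertices by (subst sum.mono_neutral_right[of vertices "vertices - y"]) auto
  then show ?thesis by (simp add: sum_divide_distrib)
qed

lemma dirichlet_form_eq: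
  assumes kd: "Suc j \<le> d"
  shows "dirichlet_form (Suc j) g = (real (Suc j) * sqnorm (Suc j) g - sqnorm j (down g) / real (d - j)) / real (d choose Suc j)"
proof -
  define C where "C = real (d choose Suc j)"
  define G where "G y z0 = (\<Sum>z\<in>vertices. link_pi X d w y 1 {z} * (max (g (insert z0 y) - g (insert z y)) 0)^2) / C" for y z0
  have "dirichlet_form (Suc j) g = (\<Sum>x\<in>faces X (Suc j). mass x * (\<Sum>v\<in>x. G (x - {v}) v))"
    unfolding dirichlet_form_def
  proof (rule sum.cong[OF refl])
    fix x assume x: "x \<in> faces X (Suc j)"
    have "\<And>v. v \<in> x \<Longrightarrow> insert v (x - {v}) = x" by auto
    then have "(\<Sum>v\<in>x. G (x - {v}) v) = (\<Sum>v\<in>x. \<Sum>z\<in>vertices. link_pi X d w (x - {v}) 1 {z} * (max (g x - g (insert z (x - {v}))) 0)^2) / C"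
      unfolding G_def by (simp add: sum_divide_distrib)
    then show "pi_k X d w (Suc j) x * (\<Sum>v\<in>x. \<Sum>z\<in>vertices. link_pi X d w (x - {v}) 1 {z} * (max (g x - g (insert z (x - {v}))) 0)^2)
       = mass x * (\<Sum>v\<in>x. G (x - {v}) v)"
      using x unfolding pi_k_mass C_def faces_def by simp
  qed
  also have "\<dots> = (\<Sum>y\<in>faces X j. \<Sum>z0\<in>vertices - y. mass (insert z0 y) * G y z0)" by (rule double_count_mass[symmetric])
  also have "\<dots> = (\<Sum>y\<in>faces X j. ((\<Sum>z\<in>vertices - y. mass (insert z y) * (g (insert z y))^2)
        - (\<Sum>z\<in>vertices - y. mass (insert z y) * g (insert z y))^2 / (real (d - j) * mass y)) / C)"
  proof (rule sum.cong[OF refl])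
    fix y assume y: "y \<in> faces X j"
    have yX: "y \<in> X" and cy: "card y = j" using y unfolding faces_def by auto
    have Wy: "mass y > 0" using mass_pos[OF yX] .
    have dj: "real (d - j) > 0" using kd by simp
    define a where "a z = mass (insert z y)" for z
    define b where "b z = g (insert z y)" for z
    have fA: "finite (vertices - y)" using finite_vertices by simp
    have Sa: "(\<Sum>z\<in>vertices - y. a z) = real (d - j) * mass y" unfolding a_def using sum_mass_insert[of y] cy by simp
    have "(\<Sum>z0\<in>vertices - y. mass (insert z0 y) * G y z0)
        = (\<Sum>z0\<in>vertices - y. \<Sum>z\<in>vertices - y. a z0 * a z * (max (b z0 - b z) 0)^2) / (mass y * (real (d - j) * C))"
      unfolding G_def sum_link_pi_vertex[OF yX, unfolded cy, OF kd[unfolded Suc_le_eq]] a_def b_def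
      by (simp add: sum_divide_distrib sum_distrib_left mult.assoc)
    also have "\<dots> = ((\<Sum>z\<in>vertices - y. a z) * (\<Sum>z\<in>vertices - y. a z * (b z)^2) - (\<Sum>z\<in>vertices - y. a z * b z)^2) / (mass y * (real (d - j) * C))"
      using sum_pairs_pos_part_sq[OF fA, of a b] by simp
    also have "\<dots> = ((\<Sum>z\<in>vertices - y. a z * (b z)^2) - (\<Sum>z\<in>vertices - y. a z * b z)^2 / (real (d - j) * mass y)) / C"
      unfolding Sa using Wy dj by (simp add: field_simps)
    finally show "(\<Sum>z0\<in>vertices - y. mass (insert z0 y) * G y z0) = ((\<Sum>z\<in>vertices - y. mass (insert z y) * (g (insert z y))^2)
        - (\<Sum>z\<in>vertices - y. mass (insert z y) * g (insert z y))^2 / (real (d - j) * mass y)) / C"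
      unfolding a_def b_def .
  qed
  also have "\<dots> = ((\<Sum>y\<in>faces X j. \<Sum>z\<in>vertices - y. mass (insert z y) * (g (insert z y))^2)
        - (\<Sum>y\<in>faces X j. (\<Sum>z\<in>vertices - y. mass (insert z y) * g (insert z y))^2 / (real (d - j) * mass y))) / C"
    by (simp add: sum_divide_distrib[symmetric] sum_subtractf)
  also have "(\<Sum>y\<in>faces X j. \<Sum>z\<in>vertices - y. mass (insert z y) * (g (insert z y))^2) = real (Suc j) * sqnorm (Suc j) g"
    unfolding sqnorm_def by (rule double_count_mass_Suc)
  also have "(\<Sum>y\<in>faces X j. (\<Sum>z\<in>vertices - y. mass (insert z y) * g (insert z y))^2 / (real (d - j) * mass y)) = sqnorm j (down g) / real (d - j)"
    unfolding sqnorm_down by (simp add: sum_divide_distrib mult.commute)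
  finally show ?thesis unfolding C_def .
qed

lemma pi_k_nonneg: "pi_k X d w k x \<ge> 0"
  unfolding pi_k_mass using mass_nonneg by simp

lemma pi_k_pos: "x \<in> faces X k \<Longrightarrow> k \<le> d \<Longrightarrow> pi_k X d w k x > 0"
  unfolding pi_k_mass faces_def using mass_pos by auto

lemma sum_pi_k: "k \<le> d \<Longrightarrow> (\<Sum>x\<in>faces X k. pi_k X d w k x) = 1"
proof -
  assume kd: "k \<le> d"
  have "(\<Sum>x\<in>faces X k. pi_k X d w k x) = (\<Sum>x\<in>faces X k. mass x) / real (d choose k)"
    unfolding pi_k_mass by (simp add: faces_def sum_divide_distrib)
  then show ?thesis using sum_mass_faces[OF kd] kd by simp
qed

lemma dirichlet_form_shift: "dirichlet_form k (\<lambda>x. g x + c) = dirichlet_form k g"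
  unfolding dirichlet_form_def by simp

lemma poincare_inequality:
  assumes TD: "is_TD X d w lam" and lam1: "lam < 1" and k1: "1 \<le> k" and kd: "k \<le> d"
  shows "poincare_const lam * (\<Sum>x\<in>faces X k. pi_k X d w k x * (g x - (\<Sum>y\<in>faces X k. pi_k X d w k y * g y))^2) \<le> dirichlet_form k g"
proof -
  define E where "E = (\<Sum>y\<in>faces X k. pi_k X d w k y * g y)"
  define g' where "g' x = g x + (- E)" for x
  define C where "C = real (d choose k)"
  have C0: "C > 0" unfolding C_def using kd by simp
  obtain j where kj: "k = Suc j" using k1 by (cases k) auto
  have piW: "x \<in> faces X k \<Longrightarrow> pi_k X d w k x = mass x / C" for x unfolding pi_k_mass C_def faces_def by simp
  have m0: "centered k g'"
  proof -
    have "(\<Sum>y\<in>faces X k. mass y * g' y) = C * (\<Sum>y\<in>faces X k. pi_k X d w k y * g' y)"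
      using C0 by (simp add: sum_distrib_left piW)
    also have "(\<Sum>y\<in>faces X k. pi_k X d w k y * g' y) = E - E * (\<Sum>y\<in>faces X k. pi_k X d w k y)"
    proof -
      have "(\<Sum>y\<in>faces X k. pi_k X d w k y * g' y) = (\<Sum>y\<in>faces X k. pi_k X d w k y * g y) + (\<Sum>y\<in>faces X k. pi_k X d w k y * (- E))"
        unfolding g'_def by (simp add: right_diff_distrib sum_subtractf sum_negf)
      also have "(\<Sum>y\<in>faces X k. pi_k X d w k y * (- E)) = (\<Sum>y\<in>faces X k. pi_k X d w k y) * (- E)"
        by (rule sum_distrib_right[symmetric])
      finally show ?thesis unfolding E_def by simp
    qed
    also have "\<dots> = 0" using sum_pi_k[OF kd] by simp
    finally show ?thesis unfolding centered_def by simp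
  qed
  have core: "sqnorm j (down g') \<le> real (d - j) * (real k - poincare_const lam) * sqnorm k g'"
    using down_sqnorm_bound[OF TD lam1 k1 kd m0] kj by simp
  have dj: "real (d - j) > 0" using kd kj by simp
  have "dirichlet_form k g = dirichlet_form k g'" unfolding g'_def dirichlet_form_shift ..
  also have "\<dots> = (real k * sqnorm k g' - sqnorm j (down g') / real (d - j)) / C"
    unfolding C_def kj by (rule dirichlet_form_eq) (use kd kj in simp)
  also have "\<dots> \<ge> (real k * sqnorm k g' - (real k - poincare_const lam) * sqnorm k g') / C"
  proof -
    have "sqnorm j (down g') / real (d - j) \<le> (real k - poincare_const lam) * sqnorm k g'" using core dj by (simp add: divide_le_eq mult.commute mult.left_commute)
    then show ?thesis using C0 by (intro divide_right_mono) auto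
  qed
  finally have "dirichlet_form k g \<ge> poincare_const lam * (sqnorm k g' / C)" by (simp add: algebra_simps)
  moreover have "sqnorm k g' / C = (\<Sum>x\<in>faces X k. pi_k X d w k x * (g x - E)^2)"
    unfolding sqnorm_def g'_def by (simp add: sum_divide_distrib piW)
  ultimately show ?thesis unfolding E_def by simp
qed

lemma card_remove_lt:
  assumes x: "x \<in> faces X k" and kd: "k \<le> d" and v: "v \<in> x"
  shows "card (x - {v}) < d"
proof -
  have xX: "x \<in> X" and cx: "card x = k" using x unfolding faces_def by auto
  have fx: "finite x" using finite_face xX .
  have "card x > 0" using fx v card_gt_0_iff by blast
  then show ?thesis using fx v cx kd by (simp add: card_Diff_singleton)
qed

lemma link_pi_self_pos:
  assumes x: "x \<in> faces X k" and kd: "k \<le> d" and v: "v \<in> x"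
  shows "link_pi X d w (x - {v}) 1 {v} > 0"
proof -
  have xX: "x \<in> X" and cx: "card x = k" using x unfolding faces_def by auto
  have fx: "finite x" using finite_face xX .
  have yX: "x - {v} \<in> X" using face_subset xX by blast
  have cy: "card (x - {v}) < d" by (rule card_remove_lt[OF x kd v])
  have "insert v (x - {v}) = x" using v by auto
  then show ?thesis unfolding link_pi_vertex using mass_pos[OF xX] mass_pos[OF yX] cy by simp
qed

lemma lipschitzD:
  assumes "lipschitz X d w k f \<nu>" and x: "x \<in> faces X k" and kd: "k \<le> d"
    and "\<forall>v\<in>x. link_pi X d w (x - {v}) 1 {z v} > 0"
  shows "(\<Sum>v\<in>x. (max (f x - f (insert (z v) (x - {v}))) 0)^2) \<le> \<nu>"
  using assms pi_k_pos[OF x kd] unfolding lipschitz_def by blast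

lemma lipschitz_single:
  assumes lip: "lipschitz X d w k f \<nu>" and kd: "k \<le> d" and x: "x \<in> faces X k" and v: "v \<in> x"
    and z: "link_pi X d w (x - {v}) 1 {z} > 0"
  shows "(max (f x - f (insert z (x - {v}))) 0)^2 \<le> \<nu>"
proof -
  define zz where "zz u = (if u = v then z else u)" for u
  have fx: "finite x" using x finite_face unfolding faces_def by auto
  have pos: "\<forall>u\<in>x. link_pi X d w (x - {u}) 1 {zz u} > 0"
    using z link_pi_self_pos[OF x kd] unfolding zz_def by auto
  have "(\<Sum>u\<in>x. (max (f x - f (insert (zz u) (x - {u}))) 0)^2) \<le> \<nu>"
    by (rule lipschitzD[OF lip x kd pos])
  moreover have "(\<Sum>u\<in>x. (max (f x - f (insert (zz u) (x - {u}))) 0)^2) = (max (f x - f (insert z (x - {v}))) 0)^2"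
  proof -
    have "\<And>u. u \<in> x \<Longrightarrow> u \<noteq> v \<Longrightarrow> insert (zz u) (x - {u}) = x" unfolding zz_def by auto
    then have "(\<Sum>u\<in>x. (max (f x - f (insert (zz u) (x - {u}))) 0)^2) = (\<Sum>u\<in>x. if u = v then (max (f x - f (insert z (x - {v}))) 0)^2 else 0)"
      by (intro sum.cong refl) (auto simp: zz_def)
    then show ?thesis using v fx by simp
  qed
  ultimately show ?thesis by simp
qed

lemma sum_link_pi_vertex_eq_1:
  assumes x: "x \<in> faces X k" and kd: "k \<le> d" and v: "v \<in> x"
  shows "(\<Sum>z\<in>vertices. link_pi X d w (x - {v}) 1 {z}) = 1"
proof -
  have xX: "x \<in> X" and cx: "card x = k" using x unfolding faces_def by auto
  have fx: "finite x" using finite_face xX .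
  have yX: "x - {v} \<in> X" using face_subset xX by blast
  have cy: "card (x - {v}) < d" by (rule card_remove_lt[OF x kd v])
  have "(\<Sum>z\<in>vertices. link_pi X d w (x - {v}) 1 {z} * 1) = (\<Sum>z\<in>vertices - (x - {v}). mass (insert z (x - {v})) * 1) / (mass (x - {v}) * real (d - card (x - {v})))"
    by (rule sum_link_pi_vertex[OF yX cy])
  also have "\<dots> = 1" using sum_mass_insert[of "x - {v}"] mass_pos[OF yX] cy by simp
  finally show ?thesis by simp
qed

lemma lipschitz_expected_le:
  assumes lip: "lipschitz X d w k f \<nu>" and kd: "k \<le> d" and x: "x \<in> faces X k"
  shows "(\<Sum>v\<in>x. \<Sum>z\<in>vertices. link_pi X d w (x - {v}) 1 {z} * (max (f x - f (insert z (x - {v}))) 0)^2) \<le> \<nu>"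
proof -
  define \<phi> where "\<phi> v z = (max (f x - f (insert z (x - {v}))) 0)^2" for v z
  define Z where "Z v = {z\<in>vertices. link_pi X d w (x - {v}) 1 {z} > 0}" for v
  have xX: "x \<in> X" using x unfolding faces_def by auto
  have vZ: "v \<in> Z v" if "v \<in> x" for v unfolding Z_def using link_pi_self_pos[OF x kd that] face_subset_vertices[OF xX] that by auto
  have fZ: "finite (Z v)" for v unfolding Z_def using finite_vertices by simp
  define zc where "zc v = (SOME z. z \<in> Z v \<and> (\<forall>z'\<in>Z v. \<phi> v z' \<le> \<phi> v z))" for v
  have zc: "zc v \<in> Z v \<and> (\<forall>z'\<in>Z v. \<phi> v z' \<le> \<phi> v (zc v))" if "v \<in> x" for v
  proof -
    have ne: "\<phi> v ` Z v \<noteq> {}" using vZ[OF that] by auto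
    obtain z where z: "z \<in> Z v" "\<phi> v z = Max (\<phi> v ` Z v)" using Max_in[OF finite_imageI[OF fZ] ne] by auto
    have "\<forall>z'\<in>Z v. \<phi> v z' \<le> \<phi> v z" using z fZ by simp
    then have "\<exists>z. z \<in> Z v \<and> (\<forall>z'\<in>Z v. \<phi> v z' \<le> \<phi> v z)" using z by blast
    then show ?thesis unfolding zc_def by (rule someI_ex)
  qed
  have each: "(\<Sum>z\<in>vertices. link_pi X d w (x - {v}) 1 {z} * \<phi> v z) \<le> \<phi> v (zc v)" if v: "v \<in> x" for v
  proof -
    have "(\<Sum>z\<in>vertices. link_pi X d w (x - {v}) 1 {z} * \<phi> v z) \<le> (\<Sum>z\<in>vertices. link_pi X d w (x - {v}) 1 {z} * \<phi> v (zc v))"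
    proof (rule sum_mono)
      fix z assume z: "z \<in> vertices"
      have L0: "link_pi X d w (x - {v}) 1 {z} \<ge> 0" unfolding link_pi_vertex using mass_nonneg by simp
      show "link_pi X d w (x - {v}) 1 {z} * \<phi> v z \<le> link_pi X d w (x - {v}) 1 {z} * \<phi> v (zc v)"
      proof (cases "link_pi X d w (x - {v}) 1 {z} > 0")
        case True
        then have "z \<in> Z v" unfolding Z_def using z by simp
        then show ?thesis using zc[OF v] L0 by (intro mult_left_mono) auto
      next
        case False
        then have "link_pi X d w (x - {v}) 1 {z} = 0" using L0 by simp
        then show ?thesis by simp
      qed
    qed
    also have "\<dots> = \<phi> v (zc v)" using sum_link_pi_vertex_eq_1[OF x kd v] by (simp add: sum_distrib_right[symmetric])
    finally show ?thesis .
  qed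
  have "(\<Sum>v\<in>x. \<phi> v (zc v)) \<le> \<nu>"
  proof -
    have "\<forall>v\<in>x. link_pi X d w (x - {v}) 1 {zc v} > 0" using zc unfolding Z_def by auto
    then show ?thesis unfolding \<phi>_def by (rule lipschitzD[OF lip x kd])
  qed
  moreover have "(\<Sum>v\<in>x. \<Sum>z\<in>vertices. link_pi X d w (x - {v}) 1 {z} * \<phi> v z) \<le> (\<Sum>v\<in>x. \<phi> v (zc v))"
    by (rule sum_mono) (rule each)
  ultimately show ?thesis unfolding \<phi>_def by linarith
qed

end

section \<open>Herbst's argument\<close>

lemma minus_ln_one_minus_le: fixes x :: real assumes "0 \<le> x" "x < 1" shows "- ln (1 - x) \<le> x / (1 - x)"
proof -
  have "ln (1 / (1 - x)) \<le> 1 / (1 - x) - 1" using assms by (intro ln_le_minus_one) auto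
  moreover have "ln (1 / (1 - x)) = - ln (1 - x)" using assms by (simp add: ln_div)
  moreover have "1 / (1 - x) - 1 = x / (1 - x)" using assms by (simp add: field_simps)
  ultimately show ?thesis by simp
qed

lemma exp_minus_linear_le: fixes y :: real shows "exp y - 1 - y \<le> y^2 * exp \<bar>y\<bar>"
proof -
  obtain t where t: "\<bar>t\<bar> \<le> \<bar>y\<bar>" and e: "exp y = (\<Sum>m<2. y ^ m / fact m) + exp t / fact 2 * y ^ 2"
    using Maclaurin_exp_le[of y 2] by blast
  have "(\<Sum>m<2. y ^ m / fact m) = 1 + y" by (simp add: numeral_2_eq_2)
  then have "exp y - 1 - y = exp t / 2 * y^2" using e by simp
  also have "\<dots> \<le> exp \<bar>y\<bar> / 2 * y^2" using t by (intro mult_right_mono divide_right_mono) auto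
  also have "\<dots> \<le> y^2 * exp \<bar>y\<bar>" by simp
  finally show ?thesis .
qed

lemma exp_33_100_le: "exp (33/100 :: real) \<le> 7/5"
proof -
  have "exp (33/100 :: real) = exp (of_nat 16 * (33/1600))" by simp
  also have "\<dots> = exp (33/1600) ^ 16" by (rule exp_of_nat_mult)
  also have "\<dots> \<le> (1600/1567) ^ 16"
  proof (rule power_mono)
    show "exp (33/1600::real) \<le> 1600/1567" using exp_le_inverse[of "33/1600"] by simp
  qed simp
  also have "\<dots> \<le> (7/5 :: real)" by (simp add: power_divide)
  finally show ?thesis .
qed

lemma minus_ln_scaled_le:
  fixes a :: real
  assumes a0: "0 \<le> a" "a \<le> 3/10" and j: "j \<ge> 1"
  shows "2^j * (- ln (1 - a / 4^j)) \<le> (12/37) / 2^j"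
proof -
  have p4: "(4::real)^j \<ge> 4" using j by (metis power_one_right power_increasing numeral_le_one_iff semiring_norm(69) le_numeral_extra(1) one_le_numeral)
  have x0: "0 \<le> a / 4^j" using a0 by simp
  have x1: "a / 4^j \<le> 3/40"
  proof -
    have "a / 4^j \<le> a / 4" using a0 p4 by (intro divide_left_mono) auto
    moreover have "a / 4 \<le> 3/40" using a0 by simp
    ultimately show ?thesis by linarith
  qed
  have "- ln (1 - a / 4^j) \<le> (a / 4^j) / (1 - a / 4^j)"
    by (rule minus_ln_one_minus_le[OF x0]) (use x1 in linarith)
  also have "\<dots> \<le> (a / 4^j) / (37/40)" using x0 x1 by (intro divide_left_mono) auto
  finally have "- ln (1 - a / 4^j) \<le> (40/37) * (a / 4^j)" by simp
  then have "2^j * (- ln (1 - a / 4^j)) \<le> 2^j * ((40/37) * (a / 4^j))" by (intro mult_left_mono) auto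
  also have "\<dots> = (40/37) * a / 2^j"
    by (simp add: power_mult_distrib[symmetric] field_simps flip: power_mult_distrib)
  also have "\<dots> \<le> (40/37) * (3/10) / 2^j" using a0 by (intro divide_right_mono) auto
  finally show ?thesis by simp
qed

lemma sum_minus_ln_geometric_le:
  fixes a :: real
  assumes a0: "0 \<le> a" "a \<le> 3/10"
  shows "(\<Sum>j<n. 2^j * (- ln (1 - a / 4^j))) \<le> ln (10/7) + 12/37"
proof -
  define T where "T j = 2^j * (- ln (1 - a / 4^j))" for j :: nat
  have Ta: "T j = 2^j * (- ln (1 - a / 4^j))" for j unfolding T_def ..
  have T0: "T 0 \<le> ln (10/7)"
  proof -
    have "ln (7/10) \<le> ln (1 - a)" using a0 by simp
    moreover have "ln (10/7) = - ln (7/10::real)" by (simp add: ln_div)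
    ultimately show ?thesis using Ta[of 0] by simp
  qed
  have Tj: "T j \<le> (12/37) / 2^j" if "j \<ge> 1" for j
    unfolding T_def using minus_ln_scaled_le[OF a0 that] .
  have sumT: "(\<Sum>j<n. T j) \<le> ln (10/7) + (12/37) * (1 - 1 / 2^(n - 1))" if "n \<ge> 1" for n
    using that
  proof (induction n)
    case 0 then show ?case by simp
  next
    case (Suc n)
    show ?case
    proof (cases "n = 0")
      case True then show ?thesis using T0 by simp
    next
      case False
      then have "(\<Sum>j<n. T j) \<le> ln (10/7) + (12/37) * (1 - 1 / 2^(n - 1))" using Suc.IH by simp
      moreover have "T n \<le> (12/37) / 2^n" using Tj False by simp
      moreover have "(12/37::real) * (1 - 1 / 2^(n - 1)) + (12/37) / 2^n = (12/37) * (1 - 1 / 2^n)"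
      proof -
        have "(2::real)^n = 2 * 2^(n-1)" using False by (metis power_eq_if)
        then show ?thesis by (simp add: field_simps)
      qed
      moreover have "(\<Sum>j<Suc n. T j) = (\<Sum>j<n. T j) + T n" by simp
      moreover have "Suc n - 1 = n" by simp
      ultimately show ?thesis by (simp only:)
    qed
  qed
  have sumT': "(\<Sum>j<n. T j) \<le> ln (10/7) + 12/37" for n
  proof (cases "n = 0")
    case True
    have "ln (10/7::real) \<ge> 0" by simp
    then show ?thesis using True by simp
  next
    case False
    then have "(\<Sum>j<n. T j) \<le> ln (10/7) + (12/37) * (1 - 1 / 2^(n - 1))" using sumT by simp
    moreover have "(12/37) * (1 - 1 / 2^(n - 1)) \<le> (12::real)/37" by simp
    ultimately show ?thesis by linarith
  qed
  show ?thesis using sumT' unfolding T_def .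
qed

lemma weighted_exp_sum_pos:
  fixes S :: "'b set" and p f :: "'b \<Rightarrow> real"
  assumes fin: "finite S" and pnn: "\<And>x. x \<in> S \<Longrightarrow> p x \<ge> 0" and psum: "(\<Sum>x\<in>S. p x) = 1"
  shows "(\<Sum>x\<in>S. p x * exp (\<theta> * f x)) > 0"
proof -
  have "\<exists>x\<in>S. p x \<noteq> 0" using psum by (metis sum.neutral zero_neq_one)
  then obtain x0 where x0: "x0 \<in> S" "p x0 > 0" using pnn by (metis less_eq_real_def)
  have "p x0 * exp (\<theta> * f x0) \<le> (\<Sum>x\<in>S. p x * exp (\<theta> * f x))"
    using fin x0 pnn by (intro member_le_sum) auto
  moreover have "p x0 * exp (\<theta> * f x0) > 0" using x0 by simp
  ultimately show ?thesis by simp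
qed

lemma ln_mgf_le_square:
  fixes S :: "'b set" and p f :: "'b \<Rightarrow> real"
  assumes fin: "finite S" and pnn: "\<And>x. x \<in> S \<Longrightarrow> p x \<ge> 0" and psum: "(\<Sum>x\<in>S. p x) = 1"
    and mean: "(\<Sum>x\<in>S. p x * f x) = 0"
  obtains B where "\<And>s. 0 < s \<Longrightarrow> s \<le> \<theta>0 \<Longrightarrow> ln (\<Sum>x\<in>S. p x * exp (s * f x)) \<le> s^2 * B"
proof
  define Mf where "Mf = (\<Sum>x\<in>S. \<bar>f x\<bar>)"
  have Mf: "\<bar>f x\<bar> \<le> Mf" if "x \<in> S" for x unfolding Mf_def using fin that by (intro member_le_sum) auto
  fix s :: real assume s: "0 < s" "s \<le> \<theta>0"
  define F where "F = (\<Sum>x\<in>S. p x * exp (s * f x))"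
  have "F - 1 = (\<Sum>x\<in>S. p x * (exp (s * f x) - 1 - s * f x))"
    unfolding F_def using psum mean
    by (simp add: right_diff_distrib sum_subtractf sum_distrib_left[symmetric] mult.left_commute)
  also have "\<dots> \<le> (\<Sum>x\<in>S. p x * (s^2 * (Mf^2 * exp (\<theta>0 * Mf))))"
  proof (rule sum_mono)
    fix x assume x: "x \<in> S"
    have "exp (s * f x) - 1 - s * f x \<le> (s * f x)^2 * exp \<bar>s * f x\<bar>" by (rule exp_minus_linear_le)
    also have "\<dots> \<le> (s^2 * Mf^2) * exp (\<theta>0 * Mf)"
    proof (intro mult_mono)
      have "\<bar>f x\<bar>^2 \<le> Mf^2" using Mf[OF x] by (intro power_mono) auto
      then show "(s * f x)^2 \<le> s^2 * Mf^2" by (simp add: power_mult_distrib mult_left_mono)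
      have "\<bar>s * f x\<bar> \<le> \<theta>0 * Mf" using s Mf[OF x] by (simp add: abs_mult mult_mono)
      then show "exp \<bar>s * f x\<bar> \<le> exp (\<theta>0 * Mf)" by simp
    qed auto
    finally show "p x * (exp (s * f x) - 1 - s * f x) \<le> p x * (s^2 * (Mf^2 * exp (\<theta>0 * Mf)))"
      using pnn[OF x] by (intro mult_left_mono) (auto simp: mult.assoc)
  qed
  also have "\<dots> = s^2 * (Mf^2 * exp (\<theta>0 * Mf))" using psum by (simp add: sum_distrib_right[symmetric])
  finally have "F - 1 \<le> s^2 * (Mf^2 * exp (\<theta>0 * Mf))" .
  moreover have "ln F \<le> F - 1"
    unfolding F_def using weighted_exp_sum_pos[OF fin pnn psum] by (intro ln_le_minus_one)
  ultimately show "ln (\<Sum>x\<in>S. p x * exp (s * f x)) \<le> s^2 * (Mf^2 * exp (\<theta>0 * Mf))"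
    unfolding F_def by simp
qed

lemma ln_mgf_halving:
  fixes S :: "'b set" and p f :: "'b \<Rightarrow> real" and \<theta> b :: real
  assumes fin: "finite S" and pnn: "\<And>x. x \<in> S \<Longrightarrow> p x \<ge> 0" and psum: "(\<Sum>x\<in>S. p x) = 1"
    and var: "(\<Sum>x\<in>S. p x * exp (\<theta> * f x)) - (\<Sum>x\<in>S. p x * exp (\<theta> / 2 * f x))^2
        \<le> b * \<theta>^2 * (\<Sum>x\<in>S. p x * exp (\<theta> * f x))"
    and small: "b * \<theta>^2 \<le> 3/10"
  shows "ln (\<Sum>x\<in>S. p x * exp (\<theta> * f x))
    \<le> 2 * ln (\<Sum>x\<in>S. p x * exp (\<theta> / 2 * f x)) + (- ln (1 - b * \<theta>^2))"
proof -
  define F where "F \<theta> = (\<Sum>x\<in>S. p x * exp (\<theta> * f x))" for \<theta>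
  have Fpos: "F \<theta> > 0" for \<theta> unfolding F_def by (rule weighted_exp_sum_pos[OF fin pnn psum])
  have q: "1 - b * \<theta>^2 > 0" using small by simp
  have "F \<theta> * (1 - b * \<theta>^2) \<le> (F (\<theta>/2))^2" using var unfolding F_def by (simp add: algebra_simps)
  moreover have "F \<theta> * (1 - b * \<theta>^2) > 0" using Fpos[of \<theta>] q by simp
  moreover have "(F (\<theta>/2))^2 > 0" using Fpos[of "\<theta>/2"] by simp
  ultimately have "ln (F \<theta> * (1 - b * \<theta>^2)) \<le> ln ((F (\<theta>/2))^2)" by simp
  moreover have "ln (F \<theta> * (1 - b * \<theta>^2)) = ln (F \<theta>) + ln (1 - b * \<theta>^2)"
    using Fpos[of \<theta>] q by (simp add: ln_mult)
  moreover have "ln ((F (\<theta>/2))^2) = 2 * ln (F (\<theta>/2))" using Fpos by (simp add: ln_realpow)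
  ultimately show ?thesis unfolding F_def by simp
qed

text \<open>Herbst's argument: the variance bound makes ln F(\<theta>) - 2 ln F(\<theta>/2) small, so halving
  \<theta> repeatedly and using that ln F(s) = O(s^2) for a centred f bounds F(\<theta>0).\<close>
lemma mgf_le_2_herbst:
  fixes S :: "'b set" and p f :: "'b \<Rightarrow> real" and \<theta>0 b :: real
  assumes fin: "finite S" and pnn: "\<And>x. x \<in> S \<Longrightarrow> p x \<ge> 0" and psum: "(\<Sum>x\<in>S. p x) = 1"
    and mean: "(\<Sum>x\<in>S. p x * f x) = 0" and th0: "\<theta>0 > 0" and b0: "b \<ge> 0" and ab: "b * \<theta>0^2 \<le> 3/10"
    and var: "\<And>\<theta>. 0 < \<theta> \<Longrightarrow> \<theta> \<le> \<theta>0 \<Longrightarrow>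
        (\<Sum>x\<in>S. p x * exp (\<theta> * f x)) - (\<Sum>x\<in>S. p x * exp (\<theta> / 2 * f x))^2
        \<le> b * \<theta>^2 * (\<Sum>x\<in>S. p x * exp (\<theta> * f x))"
  shows "(\<Sum>x\<in>S. p x * exp (\<theta>0 * f x)) \<le> 2"
proof -
  define F where "F \<theta> = (\<Sum>x\<in>S. p x * exp (\<theta> * f x))" for \<theta>
  have Fpos: "F \<theta> > 0" for \<theta> unfolding F_def by (rule weighted_exp_sum_pos[OF fin pnn psum])
  have step: "ln (F \<theta>) \<le> 2 * ln (F (\<theta> / 2)) + (- ln (1 - b * \<theta>^2))" if th: "0 < \<theta>" "\<theta> \<le> \<theta>0" for \<theta>
  proof -
    have "\<theta>^2 \<le> \<theta>0^2" using th by (intro power_mono) auto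
    then have "b * \<theta>^2 \<le> 3/10" using b0 ab by (meson mult_left_mono order_trans)
    from ln_mgf_halving[OF fin pnn psum var[OF th] this] show ?thesis unfolding F_def by simp
  qed
  define a where "a = b * \<theta>0^2"
  have a0: "0 \<le> a" "a \<le> 3/10" unfolding a_def using b0 ab by auto
  define T where "T j = 2^j * (- ln (1 - a / 4^j))" for j :: nat
  have iter: "ln (F \<theta>0) \<le> 2^n * ln (F (\<theta>0 / 2^n)) + (\<Sum>j<n. T j)" for n
  proof (induction n)
    case 0 then show ?case by simp
  next
    case (Suc n)
    have th: "0 < \<theta>0 / 2^n" "\<theta>0 / 2^n \<le> \<theta>0" using th0 by (auto simp: divide_le_eq)
    have "((2::real)^n)^2 = 4^n" by (simp add: power2_eq_square power_mult_distrib[symmetric])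
    then have "b * (\<theta>0 / 2^n)^2 = a / 4^n" unfolding a_def by (simp add: power_divide)
    then have "ln (F (\<theta>0 / 2^n)) \<le> 2 * ln (F (\<theta>0 / 2^n / 2)) + (- ln (1 - a / 4^n))"
      using step[OF th] by simp
    then have "2^n * ln (F (\<theta>0 / 2^n)) \<le> 2^n * (2 * ln (F (\<theta>0 / 2^n / 2)) + (- ln (1 - a / 4^n)))"
      by (intro mult_left_mono) auto
    also have "\<dots> = 2^Suc n * ln (F (\<theta>0 / 2^Suc n)) + T n" unfolding T_def by (simp add: algebra_simps)
    finally show ?case using Suc.IH by simp
  qed
  obtain B where lnF_small: "\<And>s. 0 < s \<Longrightarrow> s \<le> \<theta>0 \<Longrightarrow> ln (F s) \<le> s^2 * B"
    using ln_mgf_le_square[OF fin pnn psum mean] unfolding F_def by blast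
  obtain n :: nat where n: "200 * \<theta>0^2 * B < 2^n" using real_arch_pow[of 2 "200 * \<theta>0^2 * B"] by auto
  have "2^n * ln (F (\<theta>0 / 2^n)) \<le> 2^n * ((\<theta>0 / 2^n)^2 * B)"
    using lnF_small[of "\<theta>0 / 2^n"] th0 by (intro mult_left_mono) (auto simp: divide_le_eq)
  also have "\<dots> = \<theta>0^2 * B / 2^n" by (simp add: power_divide power2_eq_square field_simps)
  also have "\<dots> \<le> 1/200" using n by (simp add: divide_le_eq)
  finally have "2^n * ln (F (\<theta>0 / 2^n)) \<le> 1/200" .
  then have lnF: "ln (F \<theta>0) \<le> ln (10/7) + 33/100"
    using iter[of n] sum_minus_ln_geometric_le[OF a0, of n] unfolding T_def by simp
  have "F \<theta>0 = exp (ln (F \<theta>0))" using Fpos by simp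
  also have "\<dots> \<le> exp (ln (10/7) + 33/100)" using lnF by simp
  also have "\<dots> = (10/7) * exp (33/100)" by (simp add: exp_add)
  also have "\<dots> \<le> (10/7) * (7/5)" using exp_33_100_le by simp
  finally show ?thesis unfolding F_def by simp
qed

lemma chernoff_bound:
  fixes S :: "'b set" and p f :: "'b \<Rightarrow> real" and \<theta> t :: real
  assumes fin: "finite S" and pnn: "\<And>x. x \<in> S \<Longrightarrow> p x \<ge> 0" and th: "\<theta> \<ge> 0"
  shows "(\<Sum>x\<in>{x\<in>S. f x \<ge> t}. p x) \<le> (\<Sum>x\<in>S. p x * exp (\<theta> * f x)) * exp (- (\<theta> * t))"
proof -
  have "(\<Sum>x\<in>{x\<in>S. f x \<ge> t}. p x) \<le> (\<Sum>x\<in>{x\<in>S. f x \<ge> t}. p x * exp (\<theta> * (f x - t)))"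
  proof (rule sum_mono)
    fix x assume "x \<in> {x\<in>S. f x \<ge> t}"
    then have "exp (\<theta> * (f x - t)) \<ge> 1" "p x \<ge> 0" using th pnn by auto
    then show "p x \<le> p x * exp (\<theta> * (f x - t))" by (metis mult_left_mono mult.right_neutral)
  qed
  also have "\<dots> \<le> (\<Sum>x\<in>S. p x * exp (\<theta> * (f x - t)))"
    using fin pnn by (intro sum_mono2) auto
  also have "\<dots> = (\<Sum>x\<in>S. p x * exp (\<theta> * f x) * exp (- (\<theta> * t)))"
    by (rule sum.cong[OF refl]) (simp add: right_diff_distrib mult.assoc flip: exp_add)
  finally show ?thesis by (simp only: sum_distrib_right)
qed

lemma tail_bound_herbst:
  fixes S :: "'b set" and p f :: "'b \<Rightarrow> real" and \<theta>0 b t :: real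
  assumes fin: "finite S" and pnn: "\<And>x. x \<in> S \<Longrightarrow> p x \<ge> 0" and psum: "(\<Sum>x\<in>S. p x) = 1"
    and mean: "(\<Sum>x\<in>S. p x * f x) = 0" and th0: "\<theta>0 > 0" and b0: "b \<ge> 0" and ab: "b * \<theta>0^2 \<le> 3/10"
    and var: "\<And>\<theta>. 0 < \<theta> \<Longrightarrow> \<theta> \<le> \<theta>0 \<Longrightarrow>
        (\<Sum>x\<in>S. p x * exp (\<theta> * f x)) - (\<Sum>x\<in>S. p x * exp (\<theta> / 2 * f x))^2
        \<le> b * \<theta>^2 * (\<Sum>x\<in>S. p x * exp (\<theta> * f x))"
  shows "(\<Sum>x\<in>{x\<in>S. f x \<ge> t}. p x) \<le> 2 * exp (- (\<theta>0 * t))"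
proof -
  have "(\<Sum>x\<in>{x\<in>S. f x \<ge> t}. p x) \<le> (\<Sum>x\<in>S. p x * exp (\<theta>0 * f x)) * exp (- (\<theta>0 * t))"
    using chernoff_bound[OF fin pnn] th0 by simp
  also have "\<dots> \<le> 2 * exp (- (\<theta>0 * t))"
    using mgf_le_2_herbst[OF fin pnn psum mean th0 b0 ab var] by (intro mult_right_mono) auto
  finally show ?thesis .
qed

section \<open>Exponential moments and the tail bounds\<close>

lemma expm1_slope_mono:
  assumes "0 \<le> u" "u \<le> u1" "u1 < 1"
  shows "expm1_slope u \<le> expm1_slope u1"
proof -
  have "u^2 \<le> u1^2" using assms by (intro power_mono) auto
  moreover have "0 < 6 * (1 - u1)" "6 * (1 - u1) \<le> 6 * (1 - u)" using assms by auto
  ultimately have "u^2 / (6 * (1 - u)) \<le> u1^2 / (6 * (1 - u1))"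
    by (intro frac_le) auto
  then show ?thesis unfolding expm1_slope_def using assms by simp
qed

lemma expm1_slope_ge_1: "0 \<le> u \<Longrightarrow> u < 1 \<Longrightarrow> expm1_slope u \<ge> 1"
  unfolding expm1_slope_def by (simp add: add_nonneg_nonneg)

lemma exp_minus_one_ge: "exp (-1::real) \<ge> 9/25"
proof -
  have "exp (-1::real) = exp (-1/32) ^ 32" by (simp flip: exp_of_nat_mult)
  also have "\<dots> \<ge> (31/32) ^ 32"
    using exp_ge_add_one_self[of "-1/32::real"] by (intro power_mono) auto
  finally show ?thesis by (rule order_trans[rotated]) (simp add: power_divide)
qed

lemma poincare_const_mult_ge_1:
  fixes lam :: real
  assumes "lam < 1"
  shows "poincare_const lam * (1 + exp (lam / (1 - lam))) \<ge> 1"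
proof (cases "lam \<ge> 0")
  case True
  have "1 + lam / (1 - lam) \<le> exp (lam / (1 - lam))" by (rule exp_ge_add_one_self)
  then have "(1 - lam) * (2 + lam / (1 - lam)) \<le> (1 - lam) * (1 + exp (lam / (1 - lam)))"
    using assms by (intro mult_left_mono) auto
  moreover have "(1 - lam) * (2 + lam / (1 - lam)) = 2 - lam" using assms by (simp add: field_simps)
  ultimately show ?thesis using True assms unfolding poincare_const_def by simp
next
  case False
  then show ?thesis unfolding poincare_const_def by (simp add: add_increasing)
qed

lemma expm1_slope_sq_le_nonneg:
  assumes s: "0 \<le> s" "s \<le> 71/100"
  shows "(expm1_slope (s/2))^2 * (1 - s^2) \<le> 6/5"
proof -
  have rs: "0 \<le> expm1_slope (s/2)" using expm1_slope_ge_1[of "s/2"] s by simp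
  have s2: "0 \<le> 1 - s^2" using s power_mono[of s 1 2] by simp
  consider "s \<le> 3/10" | "3/10 < s" "s \<le> 1/2" | "1/2 < s" by linarith
  then show ?thesis
  proof cases
    case 1
    have "expm1_slope (s/2) \<le> expm1_slope (3/20)" using expm1_slope_mono[of "s/2" "3/20"] s 1 by simp
    then have "(expm1_slope (s/2))^2 \<le> (expm1_slope (3/20))^2" using rs by (intro power_mono) auto
    moreover have "(expm1_slope (3/20))^2 \<le> 6/5" unfolding expm1_slope_def by (simp add: power2_eq_square)
    moreover have "(expm1_slope (s/2))^2 * (1 - s^2) \<le> (expm1_slope (s/2))^2" using s by (simp add: mult_left_le)
    ultimately show ?thesis by linarith
  next
    case 2
    have "expm1_slope (s/2) \<le> expm1_slope (1/4)" using expm1_slope_mono[of "s/2" "1/4"] s 2 by simp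
    then have "(expm1_slope (s/2))^2 \<le> (expm1_slope (1/4))^2" using rs by (intro power_mono) auto
    moreover have "1 - s^2 \<le> 91/100" using 2 power_mono[of "3/10" s 2] by (simp add: power_divide)
    ultimately have "(expm1_slope (s/2))^2 * (1 - s^2) \<le> (expm1_slope (1/4))^2 * (91/100)"
      using s2 by (intro mult_mono) auto
    moreover have "(expm1_slope (1/4))^2 * (91/100) \<le> 6/5" unfolding expm1_slope_def by (simp add: power2_eq_square)
    ultimately show ?thesis by linarith
  next
    case 3
    have "expm1_slope (s/2) \<le> expm1_slope (71/200)" using expm1_slope_mono[of "s/2" "71/200"] s by simp
    then have "(expm1_slope (s/2))^2 \<le> (expm1_slope (71/200))^2" using rs by (intro power_mono) auto
    moreover have "1 - s^2 \<le> 3/4" using 3 power_mono[of "1/2" s 2] by (simp add: power_divide)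
    ultimately have "(expm1_slope (s/2))^2 * (1 - s^2) \<le> (expm1_slope (71/200))^2 * (3/4)"
      using s2 by (intro mult_mono) auto
    moreover have "(expm1_slope (71/200))^2 * (3/4) \<le> 6/5" unfolding expm1_slope_def by (simp add: power2_eq_square)
    ultimately show ?thesis by linarith
  qed
qed

lemma expm1_slope_sq_le_neg:
  assumes s: "0 \<le> s" "s^2 \<le> 25/34"
  shows "(expm1_slope (s/2))^2 * s^2 \<le> 6/5"
proof -
  have "s^2 \<le> (429/500)^2" using s by (simp add: power_divide)
  then have s429: "s \<le> 429/500" using s by (meson power2_le_imp_le zero_le_divide_iff zero_le_numeral)
  have rs: "0 \<le> expm1_slope (s/2)" using expm1_slope_ge_1[of "s/2"] s s429 by simp
  have "expm1_slope (s/2) \<le> expm1_slope (429/1000)" using expm1_slope_mono[of "s/2" "429/1000"] s s429 by simp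
  then have "(expm1_slope (s/2))^2 \<le> (expm1_slope (429/1000))^2" using rs by (intro power_mono) auto
  then have "(expm1_slope (s/2))^2 * s^2 \<le> (expm1_slope (429/1000))^2 * (25/34)"
    using s by (intro mult_mono) auto
  moreover have "(expm1_slope (429/1000))^2 * (25/34) \<le> 6/5" unfolding expm1_slope_def by (simp add: power2_eq_square)
  ultimately show ?thesis by linarith
qed

text \<open>The numerical fact behind the lower tail: with c = 1 + e^(lam/(1-lam)), the Lipschitz
  increments seen by the Herbst argument at \<theta> = 1/sqrt(c \<nu>) are at most 1/(2 sqrt c), and the
  resulting variance constant stays below 3/10.\<close>
lemma herbst_constant_le:
  fixes lam :: real
  assumes lam1: "lam < 1"
  defines "c \<equiv> 1 + exp (lam / (1 - lam))"
  shows "(expm1_slope (1 / (2 * sqrt c)))^2 / (poincare_const lam * c) \<le> 6/5"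
proof -
  define s where "s = 1 / sqrt c"
  have c1: "c > 1" unfolding c_def by simp
  have s0: "s > 0" unfolding s_def using c1 by simp
  have s2: "s^2 = 1 / c" unfolding s_def using c1 by (simp add: power_divide)
  have half: "1 / (2 * sqrt c) = s / 2" unfolding s_def by simp
  show ?thesis
  proof (cases "lam \<ge> 0")
    case True
    have "1 + lam / (1 - lam) \<le> exp (lam / (1 - lam))" by (rule exp_ge_add_one_self)
    moreover have "1 / (1 - lam) = 1 + lam / (1 - lam)" using lam1 by (simp add: field_simps)
    ultimately have inv: "1 / (1 - lam) \<le> c - 1" unfolding c_def by simp
    have "1 \<le> 1 / (1 - lam)" using lam1 True by (simp add: le_divide_eq)
    then have "c \<ge> 2" using inv by linarith
    then have "s^2 \<le> (71/100)^2" using s2 by (simp add: power2_eq_square divide_le_eq)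
    then have s71: "s \<le> 71/100" using s0 by (meson power2_le_imp_le zero_le_divide_iff zero_le_numeral)
    have "(expm1_slope (s/2))^2 / ((1 - lam) * c) = (expm1_slope (s/2))^2 * (1 / (1 - lam)) * (1 / c)"
      by simp
    also have "\<dots> \<le> (expm1_slope (s/2))^2 * (c - 1) * (1 / c)"
      using inv c1 by (intro mult_right_mono mult_left_mono) auto
    also have "\<dots> = (expm1_slope (s/2))^2 * (1 - s^2)"
      unfolding s2 using c1 by (simp add: field_simps)
    also have "\<dots> \<le> 6/5" using expm1_slope_sq_le_nonneg[OF _ s71] s0 by simp
    finally show ?thesis using True unfolding half poincare_const_def by simp
  next
    case False
    have "lam / (1 - lam) \<ge> -1" using lam1 by (simp add: field_simps)
    then have "exp (lam / (1 - lam)) \<ge> exp (-1)" by simp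
    then have "c \<ge> 34/25" unfolding c_def using exp_minus_one_ge by linarith
    then have "s^2 \<le> 25/34" using s2 by (simp add: divide_le_eq)
    then have "(expm1_slope (s/2))^2 * s^2 \<le> 6/5" using expm1_slope_sq_le_neg s0 by simp
    then show ?thesis using False s2 unfolding half poincare_const_def by simp
  qed
qed

lemma variance_eq:
  fixes p g :: "'b \<Rightarrow> real"
  assumes "finite S" "(\<Sum>x\<in>S. p x) = 1"
  shows "(\<Sum>x\<in>S. p x * (g x - (\<Sum>y\<in>S. p y * g y))^2) = (\<Sum>x\<in>S. p x * (g x)^2) - (\<Sum>x\<in>S. p x * g x)^2"
proof -
  define E where "E = (\<Sum>y\<in>S. p y * g y)"
  have "(\<Sum>x\<in>S. p x * (g x - E)^2) = (\<Sum>x\<in>S. p x * (g x)^2 - 2 * E * (p x * g x) + E^2 * p x)"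
    by (intro sum.cong refl) (simp add: power2_eq_square algebra_simps)
  also have "\<dots> = (\<Sum>x\<in>S. p x * (g x)^2) - 2 * E * E + E^2 * 1"
    unfolding E_def using assms by (simp add: sum.distrib sum_subtractf sum_distrib_left[symmetric])
  finally show ?thesis unfolding E_def by (simp add: power2_eq_square)
qed

lemma pos_part_exp_neg_diff_sq:
  fixes a b \<eta> \<nu> u0 :: real
  assumes \<eta>: "\<eta> > 0" and ab: "(max (a - b) 0)^2 \<le> \<nu>"
    and u0: "\<eta> * sqrt \<nu> / 2 \<le> u0" "u0 < 1"
  shows "(max (exp (\<eta> / 2 * - b) - exp (\<eta> / 2 * - a)) 0)^2
    \<le> \<eta>^2 * (expm1_slope u0)^2 / 4 * exp (\<eta> * - a) * (max (a - b) 0)^2"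
proof (cases "a \<le> b")
  case True
  then have "exp (\<eta> / 2 * - b) \<le> exp (\<eta> / 2 * - a)" using \<eta> by simp
  then show ?thesis by (simp add: max_def)
next
  case False
  define \<delta> where "\<delta> = a - b"
  have d0: "\<delta> > 0" unfolding \<delta>_def using False by simp
  then have "\<delta>^2 \<le> \<nu>" using ab unfolding \<delta>_def by simp
  then have "\<delta> \<le> sqrt \<nu>" using d0 real_le_rsqrt by simp
  define u where "u = \<eta> * \<delta> / 2"
  have u: "0 \<le> u" "u \<le> u0"
    unfolding u_def using \<eta> d0 \<open>\<delta> \<le> sqrt \<nu>\<close> u0 by (auto intro: order_trans[rotated] mult_left_mono)
  define g where "g = exp (\<eta> / 2 * - a)"
  have g: "g > 0" "exp (\<eta> / 2 * - b) = g * exp u"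
    unfolding g_def u_def \<delta>_def by (simp_all add: algebra_simps flip: exp_add)
  have nonneg: "0 \<le> g * (exp u - 1)" using g u by simp
  have "max (exp (\<eta> / 2 * - b) - g) 0 = g * (exp u - 1)"
    using nonneg unfolding g by (simp add: algebra_simps)
  moreover have "g * (exp u - 1) \<le> g * (u * expm1_slope u0)"
    using expm1_bound[OF u u0(2)] g by (intro mult_left_mono) auto
  ultimately have "(max (exp (\<eta> / 2 * - b) - g) 0)^2 \<le> (g * (u * expm1_slope u0))^2"
    using nonneg by (simp add: power_mono)
  also have "\<dots> = \<eta>^2 * (expm1_slope u0)^2 / 4 * g^2 * \<delta>^2"
    unfolding u_def by (simp add: power_mult_distrib power_divide)
  also have "g^2 = exp (\<eta> * - a)"
    unfolding g_def by (simp flip: exp_double)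
  finally show ?thesis using d0 unfolding \<delta>_def g_def by simp
qed

context weighted_complex
begin

lemma expect_centered:
  assumes "k \<le> d"
  shows "(\<Sum>x\<in>faces X k. pi_k X d w k x * (f x - expect_k X d w k f)) = 0"
  using sum_pi_k[OF assms]
  by (simp add: expect_k_def right_diff_distrib sum_subtractf sum_distrib_right[symmetric])

lemma lipschitz_add_const: "lipschitz X d w k f \<nu> \<Longrightarrow> lipschitz X d w k (\<lambda>x. f x + c) \<nu>"
  unfolding lipschitz_def by simp

text \<open>Both exponential moments below are instances, with g = exp(\<theta> f/2) and g = -exp(-\<theta> f/2).\<close>
lemma variance_le_of_lipschitz:
  assumes TD: "is_TD X d w lam" and lam1: "lam < 1" and k1: "1 \<le> k" and kd: "k \<le> d"
    and lip: "lipschitz X d w k f \<nu>" and C: "C \<ge> 0"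
    and incr: "\<And>x v z. x \<in> faces X k \<Longrightarrow> v \<in> x \<Longrightarrow> link_pi X d w (x - {v}) 1 {z} > 0 \<Longrightarrow>
        (max (g x - g (insert z (x - {v}))) 0)^2 \<le> C * (g x)^2 * (max (f x - f (insert z (x - {v}))) 0)^2"
  shows "poincare_const lam * ((\<Sum>x\<in>faces X k. pi_k X d w k x * (g x)^2) - (\<Sum>x\<in>faces X k. pi_k X d w k x * g x)^2)
     \<le> C * \<nu> * (\<Sum>x\<in>faces X k. pi_k X d w k x * (g x)^2)"
proof -
  have "dirichlet_form k g \<le> (\<Sum>x\<in>faces X k. pi_k X d w k x * (C * (g x)^2 * \<nu>))"
    unfolding dirichlet_form_def
  proof (rule sum_mono, rule mult_left_mono[OF _ pi_k_nonneg])
    fix x assume x: "x \<in> faces X k"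
    have "link_pi X d w (x - {v}) 1 {z} * (max (g x - g (insert z (x - {v}))) 0)^2
      \<le> link_pi X d w (x - {v}) 1 {z} * (C * (g x)^2 * (max (f x - f (insert z (x - {v}))) 0)^2)"
      if "v \<in> x" for v z
    proof (cases "link_pi X d w (x - {v}) 1 {z} > 0")
      case True
      then show ?thesis using incr[OF x that True] by (intro mult_left_mono) auto
    next
      case False
      moreover have "link_pi X d w (x - {v}) 1 {z} \<ge> 0" unfolding link_pi_vertex using mass_nonneg by simp
      ultimately have "link_pi X d w (x - {v}) 1 {z} = 0" by simp
      then show ?thesis by simp
    qed
    then have "(\<Sum>v\<in>x. \<Sum>z\<in>vertices. link_pi X d w (x - {v}) 1 {z} * (max (g x - g (insert z (x - {v}))) 0)^2)
        \<le> (\<Sum>v\<in>x. \<Sum>z\<in>vertices. link_pi X d w (x - {v}) 1 {z} * (C * (g x)^2 * (max (f x - f (insert z (x - {v}))) 0)^2))"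
      by (intro sum_mono) auto
    also have "\<dots> = C * (g x)^2 * (\<Sum>v\<in>x. \<Sum>z\<in>vertices. link_pi X d w (x - {v}) 1 {z} * (max (f x - f (insert z (x - {v}))) 0)^2)"
      by (simp add: sum_distrib_left mult_ac)
    also have "\<dots> \<le> C * (g x)^2 * \<nu>"
      using lipschitz_expected_le[OF lip kd x] C by (intro mult_left_mono) auto
    finally show "(\<Sum>v\<in>x. \<Sum>z\<in>vertices. link_pi X d w (x - {v}) 1 {z} * (max (g x - g (insert z (x - {v}))) 0)^2)
      \<le> C * (g x)^2 * \<nu>" .
  qed
  then have "dirichlet_form k g \<le> C * \<nu> * (\<Sum>x\<in>faces X k. pi_k X d w k x * (g x)^2)"
    by (simp add: sum_distrib_left mult_ac)
  moreover have "poincare_const lam * (\<Sum>x\<in>faces X k. pi_k X d w k x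
      * (g x - (\<Sum>y\<in>faces X k. pi_k X d w k y * g y))^2) \<le> dirichlet_form k g"
    by (rule poincare_inequality[OF TD lam1 k1 kd])
  ultimately show ?thesis unfolding variance_eq[OF finite_faces sum_pi_k[OF kd]] by linarith
qed

lemma variance_exp_upper:
  assumes TD: "is_TD X d w lam" and lam1: "lam < 1" and k1: "1 \<le> k" and kd: "k \<le> d"
    and lip: "lipschitz X d w k f \<nu>" and th: "\<theta> > 0"
  shows "poincare_const lam * ((\<Sum>x\<in>faces X k. pi_k X d w k x * exp (\<theta> * f x))
      - (\<Sum>x\<in>faces X k. pi_k X d w k x * exp (\<theta> / 2 * f x))^2)
     \<le> \<theta>^2 / 4 * \<nu> * (\<Sum>x\<in>faces X k. pi_k X d w k x * exp (\<theta> * f x))"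
proof -
  define g where "g x = exp (\<theta> / 2 * f x)" for x
  have g2: "(g x)^2 = exp (\<theta> * f x)" for x unfolding g_def by (simp flip: exp_double)
  have "(max (g x - g y) 0)^2 \<le> \<theta>^2 / 4 * (g x)^2 * (max (f x - f y) 0)^2" for x y
  proof -
    have "(max (g x - g y) 0)^2 \<le> (max (\<theta> / 2 * f x - \<theta> / 2 * f y) 0)^2 * exp (2 * (\<theta> / 2 * f x))"
      unfolding g_def by (rule pos_part_exp_diff_sq)
    also have "max (\<theta> / 2 * f x - \<theta> / 2 * f y) 0 = \<theta> / 2 * max (f x - f y) 0"
      using th by (simp add: max_def right_diff_distrib[symmetric] mult_le_0_iff)
    also have "exp (2 * (\<theta> / 2 * f x)) = (g x)^2"
      unfolding g_def by (rule exp_double)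
    finally show ?thesis by (simp add: power_mult_distrib power_divide mult_ac)
  qed
  then show ?thesis
    using variance_le_of_lipschitz[OF TD lam1 k1 kd lip, of "\<theta>^2 / 4" g] unfolding g2
    by (simp add: g_def)
qed

lemma variance_exp_lower:
  assumes TD: "is_TD X d w lam" and lam1: "lam < 1" and k1: "1 \<le> k" and kd: "k \<le> d"
    and lip: "lipschitz X d w k f \<nu>" and \<eta>: "\<eta> > 0"
    and u0: "\<eta> * sqrt \<nu> / 2 \<le> u0" "u0 < 1"
  shows "poincare_const lam * ((\<Sum>x\<in>faces X k. pi_k X d w k x * exp (\<eta> * - f x))
      - (\<Sum>x\<in>faces X k. pi_k X d w k x * exp (\<eta> / 2 * - f x))^2)
     \<le> \<eta>^2 * (expm1_slope u0)^2 / 4 * \<nu> * (\<Sum>x\<in>faces X k. pi_k X d w k x * exp (\<eta> * - f x))"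
proof -
  define h where "h x = - exp (\<eta> / 2 * - f x)" for x
  have h2: "(h x)^2 = exp (\<eta> * - f x)" for x unfolding h_def by (simp flip: exp_double)
  have "(\<Sum>x\<in>faces X k. pi_k X d w k x * h x)^2 = (\<Sum>x\<in>faces X k. pi_k X d w k x * exp (\<eta> / 2 * - f x))^2"
    unfolding h_def by (simp add: sum_negf)
  moreover have "(max (h x - h (insert z (x - {v}))) 0)^2
      \<le> \<eta>^2 * (expm1_slope u0)^2 / 4 * (h x)^2 * (max (f x - f (insert z (x - {v}))) 0)^2"
    if "x \<in> faces X k" "v \<in> x" "link_pi X d w (x - {v}) 1 {z} > 0" for x v z
  proof -
    have "(max (h x - h (insert z (x - {v}))) 0)^2
      \<le> \<eta>^2 * (expm1_slope u0)^2 / 4 * exp (\<eta> * - f x) * (max (f x - f (insert z (x - {v}))) 0)^2"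
      using pos_part_exp_neg_diff_sq[OF \<eta> lipschitz_single[OF lip kd that] u0] unfolding h_def by simp
    then show ?thesis by (simp only: h2)
  qed
  moreover have "\<eta>^2 * (expm1_slope u0)^2 / 4 \<ge> 0" by simp
  ultimately show ?thesis
    using variance_le_of_lipschitz[OF TD lam1 k1 kd lip, of "\<eta>^2 * (expm1_slope u0)^2 / 4" h]
    unfolding h2 by simp
qed

lemma upper_tail:
  assumes TD: "is_TD X d w lam" and lam1: "lam < 1" and k1: "1 \<le> k" and kd: "k \<le> d"
    and lip: "lipschitz X d w k f \<nu>" and nu: "\<nu> > 0"
  shows "prob_k X d w k (\<lambda>s. f s - expect_k X d w k f \<ge> t)
    \<le> 2 * exp (- t / sqrt ((1 + exp (lam / (1 - lam))) * \<nu>))"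
proof -
  define c where "c = 1 + exp (lam / (1 - lam))"
  define \<theta>0 where "\<theta>0 = 1 / sqrt (c * \<nu>)"
  define f0 where "f0 x = f x + - expect_k X d w k f" for x
  define P where "P = poincare_const lam"
  have lip0: "lipschitz X d w k f0 \<nu>" unfolding f0_def by (rule lipschitz_add_const[OF lip])
  have c1: "c > 1" unfolding c_def by simp
  have P0: "P > 0" unfolding P_def poincare_const_def using lam1 by simp
  have "\<nu> / (4 * P) * \<theta>0^2 = 1 / (4 * (P * c))"
    unfolding \<theta>0_def using nu c1 P0 by (simp add: power_divide field_simps)
  also have "\<dots> \<le> 1 / 4"
    using poincare_const_mult_ge_1[OF lam1] unfolding P_def c_def by (simp add: divide_le_eq)
  finally have small: "\<nu> / (4 * P) * \<theta>0^2 \<le> 3/10" by simp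
  have var: "(\<Sum>x\<in>faces X k. pi_k X d w k x * exp (\<theta> * f0 x)) - (\<Sum>x\<in>faces X k. pi_k X d w k x * exp (\<theta> / 2 * f0 x))^2
      \<le> \<nu> / (4 * P) * \<theta>^2 * (\<Sum>x\<in>faces X k. pi_k X d w k x * exp (\<theta> * f0 x))" if "0 < \<theta>" for \<theta>
    using variance_exp_upper[OF TD lam1 k1 kd lip0 that] P0 unfolding P_def by (simp add: field_simps)
  have "(\<Sum>x\<in>{x\<in>faces X k. f0 x \<ge> t}. pi_k X d w k x) \<le> 2 * exp (- (\<theta>0 * t))"
    by (rule tail_bound_herbst[OF finite_faces pi_k_nonneg sum_pi_k[OF kd] _ _ _ small var])
       (use expect_centered[OF kd] nu c1 P0 in \<open>auto simp: f0_def \<theta>0_def\<close>)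
  then show ?thesis unfolding prob_k_def f0_def \<theta>0_def c_def by simp
qed

lemma lower_tail:
  assumes TD: "is_TD X d w lam" and lam1: "lam < 1" and k1: "1 \<le> k" and kd: "k \<le> d"
    and lip: "lipschitz X d w k f \<nu>" and nu: "\<nu> > 0"
  shows "prob_k X d w k (\<lambda>s. f s - expect_k X d w k f \<le> - t)
    \<le> 2 * exp (- t / sqrt ((1 + exp (lam / (1 - lam))) * \<nu>))"
proof -
  define c where "c = 1 + exp (lam / (1 - lam))"
  define \<theta>0 where "\<theta>0 = 1 / sqrt (c * \<nu>)"
  define f0 where "f0 x = f x + - expect_k X d w k f" for x
  define P where "P = poincare_const lam"
  have lip0: "lipschitz X d w k f0 \<nu>" unfolding f0_def by (rule lipschitz_add_const[OF lip])
  define u0 where "u0 = 1 / (2 * sqrt c)"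
  define b where "b = \<nu> * (expm1_slope u0)^2 / (4 * P)"
  have c1: "c > 1" unfolding c_def by simp
  have P0: "P > 0" unfolding P_def poincare_const_def using lam1 by simp
  have "b * \<theta>0^2 = (expm1_slope u0)^2 / (P * c) / 4"
    unfolding b_def \<theta>0_def using nu c1 P0 by (simp add: power_divide field_simps)
  also have "\<dots> \<le> 3/10"
  proof -
    have "(expm1_slope u0)^2 / (P * c) \<le> 6/5"
      using herbst_constant_le[OF lam1] unfolding P_def u0_def c_def .
    then have "(expm1_slope u0)^2 / (P * c) / 4 \<le> (6/5) / 4" by (rule divide_right_mono) simp
    then show ?thesis by simp
  qed
  finally have small: "b * \<theta>0^2 \<le> 3/10" .
  have u0_eq: "\<theta>0 * sqrt \<nu> / 2 = u0"
    unfolding \<theta>0_def u0_def using nu c1 by (simp add: real_sqrt_mult)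
  have "1 < sqrt c" using c1 by simp
  then have "1 < 2 * sqrt c" by linarith
  then have u01: "u0 < 1" unfolding u0_def using c1 by (simp add: divide_less_eq)
  have var: "(\<Sum>x\<in>faces X k. pi_k X d w k x * exp (\<theta> * - f0 x)) - (\<Sum>x\<in>faces X k. pi_k X d w k x * exp (\<theta> / 2 * - f0 x))^2
      \<le> b * \<theta>^2 * (\<Sum>x\<in>faces X k. pi_k X d w k x * exp (\<theta> * - f0 x))" if th: "0 < \<theta>" "\<theta> \<le> \<theta>0" for \<theta>
  proof -
    have "\<theta> * sqrt \<nu> / 2 \<le> u0"
      unfolding u0_eq[symmetric] using th nu by (intro divide_right_mono mult_right_mono) auto
    then show ?thesis
      using variance_exp_lower[OF TD lam1 k1 kd lip0 th(1) _ u01] P0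
      unfolding P_def b_def by (simp add: field_simps)
  qed
  have "(\<Sum>x\<in>faces X k. pi_k X d w k x * - f0 x) = - (\<Sum>x\<in>faces X k. pi_k X d w k x * (f x - expect_k X d w k f))"
    unfolding f0_def sum_negf[symmetric] by (intro sum.cong) (simp_all add: algebra_simps)
  then have mean: "(\<Sum>x\<in>faces X k. pi_k X d w k x * - f0 x) = 0" using expect_centered[OF kd] by simp
  have "(\<Sum>x\<in>{x\<in>faces X k. - f0 x \<ge> t}. pi_k X d w k x) \<le> 2 * exp (- (\<theta>0 * t))"
    by (rule tail_bound_herbst[OF finite_faces pi_k_nonneg sum_pi_k[OF kd] mean _ _ small var])
       (use nu c1 P0 in \<open>auto simp: \<theta>0_def b_def\<close>)
  moreover have "{x\<in>faces X k. - f0 x \<ge> t} = {s \<in> faces X k. f s - expect_k X d w k f \<le> - t}"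
    unfolding f0_def by auto
  ultimately show ?thesis unfolding prob_k_def \<theta>0_def c_def by simp
qed

lemma tails_level_0:
  assumes "t > 0"
  shows "prob_k X d w 0 (\<lambda>s. f s - expect_k X d w 0 f \<ge> t) = 0"
    and "prob_k X d w 0 (\<lambda>s. f s - expect_k X d w 0 f \<le> - t) = 0"
proof -
  have E: "expect_k X d w 0 f = f {}"
    unfolding expect_k_def faces_0 by (simp add: pi_k_mass mass_empty)
  have up: "{s \<in> faces X 0. t \<le> f s - expect_k X d w 0 f} = {}"
    and low: "{s \<in> faces X 0. f s - expect_k X d w 0 f \<le> - t} = {}"
    unfolding faces_0 E using assms by auto
  show "prob_k X d w 0 (\<lambda>s. f s - expect_k X d w 0 f \<ge> t) = 0"
    unfolding prob_k_def up by simp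
  show "prob_k X d w 0 (\<lambda>s. f s - expect_k X d w 0 f \<le> - t) = 0"
    unfolding prob_k_def low by simp
qed

end

theorem mainTheorem2:
  fixes X :: "'a set set" and d k :: nat and w f :: "'a set \<Rightarrow> real"
    and lam \<nu> t :: real
  assumes "lam < 1"
    and "pure_complex X d"
    and "top_distribution X d w"
    and "is_TD X d w lam"
    and "k \<le> d"
    and "\<nu> > 0"
    and "lipschitz X d w k f \<nu>"
    and "t > 0"
  shows "prob_k X d w k (\<lambda>s. f s - expect_k X d w k f \<ge> t)
           \<le> 2 * exp (- t / sqrt ((1 + exp (lam / (1 - lam))) * \<nu>))
       \<and> prob_k X d w k (\<lambda>s. f s - expect_k X d w k f \<le> - t)
           \<le> 2 * exp (- t / sqrt ((1 + exp (lam / (1 - lam))) * \<nu>))"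
proof -
  interpret weighted_complex X d w
    using assms(2,3) by unfold_locales
  show ?thesis
  proof (cases "k = 0")
    case True
    then show ?thesis using tails_level_0[OF assms(8)] by simp
  next
    case False
    then have "1 \<le> k" by simp
    then show ?thesis using upper_tail lower_tail assms(1,4-7) by blast
  qed
qed

end
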